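(* Let $(\Lambda,d)$ be a finitely aligned $k$-graph. The map $\Psi:S_\Lambda\to{\mathcal G}_\Lambda^{op}$, $\Psi(F)=\{[F,x]:x\in D_F\}$, is an injective $*$-homomorphism of inverse semigroups.
   Context: A $k$-graph $(\Lambda,d)$ is a countable small category $\Lambda$ (objects identified with identity morphisms) with a functor $d:\Lambda\to\mathbb N^k$ satisfying unique factorization: whenever $d(\lambda)=m+n$ there are unique $\mu,\nu$ with $d(\mu)=m$, $d(\nu)=n$, $\lambda=\mu\nu$. $r,s$ range/source. $\Lambda^{\min}(\lambda,\mu)=\{(\alpha,\beta):\lambda\alpha=\mu\beta,\ d(\lambda\alpha)=d(\lambda)\vee d(\mu)\}$; finitely aligned means all are finite. $S_\Lambda$: finite $F\subseteq\{(\lambda,\mu):s(\lambda)=s(\mu)\}$ with distinct $(\lambda,\mu),(\nu,\omega)\in F$ satisfying $\Lambda^{\min}(\lambda,\nu)=\Lambda^{\min}(\mu,\omega)=\emptyset$; inverse semigroup with $FG=\bigcup_{(\lambda,\mu)\in F,(\xi,\eta)\in G}\{(\lambda\alpha,\eta\beta):(\alpha,\beta)\in\Lambda^{\min}(\mu,\xi)\}$, $F^*=\{(\mu,\lambda):(\lambda,\mu)\in F\}$, idempotents $E(S_\Lambda)$. $\Omega_{k,m}$ ($m\in(\mathbb N\cup\{\infty\})^k$): objects $\{p\in\mathbb N^k:p\le m\}$, morphisms $(p,q)$, $p\le q\le m$, $r(p,q)=p$, $s(p,q)=q$, $d(p,q)=q-p$. $X_\Lambda$ = degree-preserving functors $x:\Omega_{k,m}\to\Lambda$,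 $d(x)=m$, $r(x)=x(0,0)$; paths $\lambda$ are regarded as elements of $X_\Lambda$ via $x_\lambda:\Omega_{k,d(\lambda)}\to\Lambda$, $x_\lambda(0,d(\lambda))=\lambda$. $\sigma^m x(p,q)=x(p+m,q+m)$; $\lambda x$ ($s(\lambda)=x(0,0)$) has $(\lambda x)(0,n)=\lambda x(0,n-d(\lambda))$. $D_F=\{x:\exists(\lambda,\mu)\in F,\ x(0,d(\mu))=\mu\}$; $\theta_F(x)=\lambda\sigma^{d(\mu)}x$. $X_\Lambda$ carries the topology with subbasis $\{D_F,X_\Lambda\setminus D_F\}$. ${\mathcal G}_\Lambda$: germs $[F,x]$ of pairs $(F,x)$, $x\in D_F$, under $(F,x)\sim(G,y)$ iff $x=y$ and some $P\in E(S_\Lambda)$ has $x\in D_P$, $FP=GP$; product $[F,\theta_G(x)][G,x]=[FG,x]$, inverse $[F^*,\theta_F(x)]$, $r([F,x])=\theta_F(x)$, $s([F,x])=x$; topology with subbasis $\{\Psi(F),{\mathcal G}_\Lambda\setminus\Psi(F)\}$. For a topological groupoid $G$, $G^{op}$ is the family of open Hausdorff subsets $A\subseteq G$ such that $r|_A$ and $s|_A$ are homeomorphisms onto their images; it is an inverse semigroup under $AB=\{ab:a\in A,b\in B,(a,b)\text{ composable}\}$ and $A^*=A^{-1}$. *)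

theory Defs
  imports "HOL-Analysis.Analysis" "HOL-Library.Function_Algebras"
begin

text \<open>A k-graph: morphisms (objects = identity morphisms), range, source,
  composition (cmp a b = a b, defined when src a = rng b) and degree into N^k,
  where N^k is represented as functions from a finite index type 'k to nat.\<close>

record ('a, 'k) kgraph =
  Mor :: "'a set"
  rng :: "'a \<Rightarrow> 'a"
  src :: "'a \<Rightarrow> 'a"
  cmp :: "'a \<Rightarrow> 'a \<Rightarrow> 'a"
  deg :: "'a \<Rightarrow> 'k \<Rightarrow> nat"

definition Obj :: "('a, 'k) kgraph \<Rightarrow> 'a set" where
  "Obj L = {v \<in> Mor L. rng L v = v \<and> src L v = v}"

definition is_kgraph :: "('a, 'k::finite) kgraph \<Rightarrow> bool" where
  "is_kgraph L \<longleftrightarrow>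
     countable (Mor L) \<and>
     (\<forall>a\<in>Mor L. rng L a \<in> Obj L \<and> src L a \<in> Obj L) \<and>
     (\<forall>a\<in>Mor L. \<forall>b\<in>Mor L. src L a = rng L b \<longrightarrow>
        cmp L a b \<in> Mor L \<and> rng L (cmp L a b) = rng L a \<and> src L (cmp L a b) = src L b) \<and>
     (\<forall>a\<in>Mor L. \<forall>b\<in>Mor L. \<forall>c\<in>Mor L. src L a = rng L b \<longrightarrow> src L b = rng L c \<longrightarrow>
        cmp L (cmp L a b) c = cmp L a (cmp L b c)) \<and>
     (\<forall>a\<in>Mor L. cmp L (rng L a) a = a \<and> cmp L a (src L a) = a) \<and>
     (\<forall>a\<in>Mor L. \<forall>b\<in>Mor L. src L a = rng L b \<longrightarrow> deg L (cmp L a b) = deg L a + deg L b) \<and>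
     (\<forall>v\<in>Obj L. deg L v = 0) \<and>
     (\<forall>l\<in>Mor L. \<forall>m n. deg L l = m + n \<longrightarrow>
        (\<exists>!(\<mu>, \<nu>). \<mu> \<in> Mor L \<and> \<nu> \<in> Mor L \<and> src L \<mu> = rng L \<nu> \<and>
            deg L \<mu> = m \<and> deg L \<nu> = n \<and> l = cmp L \<mu> \<nu>))"

definition Lmin :: "('a, 'k::finite) kgraph \<Rightarrow> 'a \<Rightarrow> 'a \<Rightarrow> ('a \<times> 'a) set" where
  "Lmin L l m = {(\<alpha>, \<beta>). \<alpha> \<in> Mor L \<and> \<beta> \<in> Mor L \<and> src L l = rng L \<alpha> \<and> src L m = rng L \<beta> \<and>
      cmp L l \<alpha> = cmp L m \<beta> \<and> deg L (cmp L l \<alpha>) = sup (deg L l) (deg L m)}"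

definition finitely_aligned :: "('a, 'k::finite) kgraph \<Rightarrow> bool" where
  "finitely_aligned L \<longleftrightarrow> (\<forall>l\<in>Mor L. \<forall>m\<in>Mor L. finite (Lmin L l m))"

definition S :: "('a, 'k::finite) kgraph \<Rightarrow> ('a \<times> 'a) set set" where
  "S L = {F. finite F \<and> F \<subseteq> {(l, m). l \<in> Mor L \<and> m \<in> Mor L \<and> src L l = src L m} \<and>
      (\<forall>p\<in>F. \<forall>q\<in>F. p \<noteq> q \<longrightarrow>
          Lmin L (fst p) (fst q) = {} \<and> Lmin L (snd p) (snd q) = {})}"

definition Sprod :: "('a, 'k::finite) kgraph \<Rightarrow> ('a \<times> 'a) set \<Rightarrow> ('a \<times> 'a) set \<Rightarrow> ('a \<times> 'a) set" where
  "Sprod L F G = (\<Union>p\<in>F. \<Union>q\<in>G.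
      {(cmp L (fst p) \<alpha>, cmp L (snd q) \<beta>) | \<alpha> \<beta>. (\<alpha>, \<beta>) \<in> Lmin L (snd p) (fst q)})"

definition Sstar :: "('a \<times> 'a) set \<Rightarrow> ('a \<times> 'a) set" where
  "Sstar F = (\<lambda>(l, m). (m, l)) ` F"

definition ES :: "('a, 'k::finite) kgraph \<Rightarrow> ('a \<times> 'a) set set" where
  "ES L = {P \<in> S L. Sprod L P P = P}"

text \<open>A path x : Omega_{k,m} \<rightarrow> Lambda is represented as the pair (m, f) with
  f p q = x(p,q) for p \<le> q \<le> m, and f p q = undefined otherwise (canonical form).\<close>

type_synonym ('a, 'k) path = "('k \<Rightarrow> enat) \<times> (('k \<Rightarrow> nat) \<Rightarrow> ('k \<Rightarrow> nat) \<Rightarrow> 'a)"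

definition inO :: "('k \<Rightarrow> enat) \<Rightarrow> ('k \<Rightarrow> nat) \<Rightarrow> ('k \<Rightarrow> nat) \<Rightarrow> bool" where
  "inO m p q \<longleftrightarrow> p \<le> q \<and> (\<forall>i. enat (q i) \<le> m i)"

definition XL :: "('a, 'k::finite) kgraph \<Rightarrow> ('a, 'k) path set" where
  "XL L = {(m, f).
      (\<forall>p q. \<not> inO m p q \<longrightarrow> f p q = undefined) \<and>
      (\<forall>p q. inO m p q \<longrightarrow> f p q \<in> Mor L \<and> deg L (f p q) = q - p \<and>
                           rng L (f p q) = f p p \<and> src L (f p q) = f q q) \<and>
      (\<forall>p. inO m p p \<longrightarrow> f p p \<in> Obj L) \<and>
      (\<forall>p q t. inO m p q \<and> inO m q t \<longrightarrow> cmp L (f p q) (f q t) = f p t)}"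

definition DF :: "('a, 'k::finite) kgraph \<Rightarrow> ('a \<times> 'a) set \<Rightarrow> ('a, 'k) path set" where
  "DF L F = {x \<in> XL L. \<exists>(l, m)\<in>F. (\<forall>i. enat (deg L m i) \<le> fst x i) \<and> snd x 0 (deg L m) = m}"

definition sigma :: "('k \<Rightarrow> nat) \<Rightarrow> ('a, 'k) path \<Rightarrow> ('a, 'k) path" where
  "sigma n x = (let m' = (\<lambda>i. fst x i - enat (n i)) in
      (m', \<lambda>p q. if inO m' p q then snd x (p + n) (q + n) else undefined))"

definition seg :: "('a, 'k::finite) kgraph \<Rightarrow> 'a \<Rightarrow> ('k \<Rightarrow> nat) \<Rightarrow> ('k \<Rightarrow> nat) \<Rightarrow> 'a" where
  "seg L a p q = (THE \<beta>. \<exists>\<alpha> \<gamma>. \<alpha> \<in> Mor L \<and> \<beta> \<in> Mor L \<and> \<gamma> \<in> Mor L \<and>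
      src L \<alpha> = rng L \<beta> \<and> src L \<beta> = rng L \<gamma> \<and>
      deg L \<alpha> = p \<and> deg L \<beta> = q - p \<and> deg L \<gamma> = deg L a - q \<and> a = cmp L (cmp L \<alpha> \<beta>) \<gamma>)"

text \<open>lambda x: the unique path with (lambda x)(0,n) = lambda x(0, n - d(lambda)).\<close>
definition concat :: "('a, 'k::finite) kgraph \<Rightarrow> 'a \<Rightarrow> ('a, 'k) path \<Rightarrow> ('a, 'k) path" where
  "concat L l x = (let m' = (\<lambda>i. enat (deg L l i) + fst x i) in
      (m', \<lambda>p q. if inO m' p q
                 then seg L (cmp L l (snd x 0 (sup q (deg L l) - deg L l))) p q
                 else undefined))"

definition theta :: "('a, 'k::finite) kgraph \<Rightarrow> ('a \<times> 'a) set \<Rightarrow> ('a, 'k) path \<Rightarrow> ('a, 'k) path" where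
  "theta L F x = (let pr = (THE pr. pr \<in> F \<and> (\<forall>i. enat (deg L (snd pr) i) \<le> fst x i) \<and>
                                  snd x 0 (deg L (snd pr)) = snd pr)
                  in concat L (fst pr) (sigma (deg L (snd pr)) x))"

definition XT :: "('a, 'k::finite) kgraph \<Rightarrow> ('a, 'k) path topology" where
  "XT L = subtopology
     (topology_generated_by ({DF L F | F. F \<in> S L} \<union> {UNIV - DF L F | F. F \<in> S L})) (XL L)"

type_synonym ('a, 'k) germ = "(('a \<times> 'a) set \<times> ('a, 'k) path) set"

definition germ :: "('a, 'k::finite) kgraph \<Rightarrow> ('a \<times> 'a) set \<Rightarrow> ('a, 'k) path \<Rightarrow> ('a, 'k) germ" where
  "germ L F x = {(G, y). G \<in> S L \<and> y \<in> DF L G \<and> y = x \<and>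
      (\<exists>P\<in>ES L. x \<in> DF L P \<and> Sprod L F P = Sprod L G P)}"

definition Gset :: "('a, 'k::finite) kgraph \<Rightarrow> ('a, 'k) germ set" where
  "Gset L = {germ L F x | F x. F \<in> S L \<and> x \<in> DF L F}"

definition Psi :: "('a, 'k::finite) kgraph \<Rightarrow> ('a \<times> 'a) set \<Rightarrow> ('a, 'k) germ set" where
  "Psi L F = {germ L F x | x. x \<in> DF L F}"

text \<open>Operations on germs via an (arbitrary) representative; they are well defined.\<close>
definition grep :: "('a, 'k) germ \<Rightarrow> ('a \<times> 'a) set \<times> ('a, 'k) path" where
  "grep a = (SOME p. p \<in> a)"

definition gsrc :: "('a, 'k) germ \<Rightarrow> ('a, 'k) path" where
  "gsrc a = snd (grep a)"

definition gran :: "('a, 'k::finite) kgraph \<Rightarrow> ('a, 'k) germ \<Rightarrow> ('a, 'k) path" where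
  "gran L a = theta L (fst (grep a)) (snd (grep a))"

definition gmul :: "('a, 'k::finite) kgraph \<Rightarrow> ('a, 'k) germ \<Rightarrow> ('a, 'k) germ \<Rightarrow> ('a, 'k) germ" where
  "gmul L a b = germ L (Sprod L (fst (grep a)) (fst (grep b))) (snd (grep b))"

definition ginv :: "('a, 'k::finite) kgraph \<Rightarrow> ('a, 'k) germ \<Rightarrow> ('a, 'k) germ" where
  "ginv L a = germ L (Sstar (fst (grep a))) (gran L a)"

definition GT :: "('a, 'k::finite) kgraph \<Rightarrow> ('a, 'k) germ topology" where
  "GT L = subtopology
     (topology_generated_by ({Psi L F | F. F \<in> S L} \<union> {UNIV - Psi L F | F. F \<in> S L})) (Gset L)"

definition Gop :: "('a, 'k::finite) kgraph \<Rightarrow> ('a, 'k) germ set set" where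
  "Gop L = {A. A \<subseteq> Gset L \<and> openin (GT L) A \<and> Hausdorff_space (subtopology (GT L) A) \<and>
      homeomorphic_map (subtopology (GT L) A) (subtopology (XT L) (gran L ` A)) (gran L) \<and>
      homeomorphic_map (subtopology (GT L) A) (subtopology (XT L) (gsrc ` A)) gsrc}"

definition Opmul :: "('a, 'k::finite) kgraph \<Rightarrow> ('a, 'k) germ set \<Rightarrow> ('a, 'k) germ set \<Rightarrow> ('a, 'k) germ set" where
  "Opmul L A B = {gmul L a b | a b. a \<in> A \<and> b \<in> B \<and> gsrc a = gran L b}"

definition Opinv :: "('a, 'k::finite) kgraph \<Rightarrow> ('a, 'k) germ set \<Rightarrow> ('a, 'k) germ set" where
  "Opinv L A = ginv L ` A"

end

theory Submission
  imports Defs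
begin

(* Everything is reduced to the path space X_Lambda.  Two pairs (F, x), (G, x) define the same
   germ iff theta_F and theta_G agree on a cylinder neighbourhood {y. y(0,n) = x(0,n)} of x;
   concretely, iff l x(d(m), N) = l' x(d(m'), N) for the pairs (l, m) in F and (l', m') in G
   through x.  With this local description, D_{FG} is the preimage of D_F under theta_G with
   theta_{FG} = theta_F o theta_G, and theta_{F*} inverts theta_F, which give the homomorphism
   properties of Psi.  Membership of [F, x] in Psi(H) depends only on a cylinder around x, so the
   source map is a homeomorphism from Psi(F) onto D_F; the range map is the source map composed
   with the (continuous, involutive) inversion.  Injectivity follows by evaluating germs at the
   finite paths x_m of the morphisms m occurring in F. *)

lemma le_fun_add_diff: "(m::'k \<Rightarrow> nat) \<le> l \<Longrightarrow> l = m + (l - m)"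
  by (auto simp: le_fun_def plus_fun_def fun_diff_def fun_eq_iff)

lemma le_fun_diff: "(a::'k \<Rightarrow> nat) + b \<le> q \<Longrightarrow> b \<le> q - a"
  unfolding le_fun_def by (metis add_diff_cancel_left' diff_le_mono plus_fun_apply minus_apply)

lemma sup_diff_mono: "(p::'k \<Rightarrow> nat) \<le> q \<Longrightarrow> sup p l - l \<le> sup q l - l"
  unfolding le_fun_def sup_fun_def sup_nat_def fun_diff_def
  by (intro allI diff_le_mono max.mono) auto

lemma enat_le_minus: "enat a \<le> m \<Longrightarrow> (enat b \<le> m - enat a) = (enat (b + a) \<le> m)"
  by (cases m) auto

lemma enat_add_minus: "(enat a + m) - enat a = (m::enat)"
  by (cases m) auto

lemma enat_minus_add: "enat a \<le> m \<Longrightarrow> enat a + (m - enat a) = (m::enat)"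
  by (cases m) auto

lemma enat_minus_minus: "(m - enat b) - enat a = m - enat (a + b)"
  by (cases m) auto

section \<open>Unique factorisation\<close>

locale k_graph =
  fixes L :: "('a, 'k::finite) kgraph"
  assumes is_kgraph: "is_kgraph L"
begin

abbreviation M where "M \<equiv> Mor L"
abbreviation rg where "rg \<equiv> rng L"
abbreviation sc where "sc \<equiv> src L"
abbreviation dg where "dg \<equiv> deg L"
abbreviation cp (infixl "\<cdot>" 70) where "a \<cdot> b \<equiv> cmp L a b"

lemma kgraph_axioms:
  "\<forall>a\<in>M. rg a \<in> Obj L \<and> sc a \<in> Obj L"
  "\<forall>a\<in>M. \<forall>b\<in>M. sc a = rg b \<longrightarrow> a \<cdot> b \<in> M \<and> rg (a \<cdot> b) = rg a \<and> sc (a \<cdot> b) = sc b"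
  "\<forall>a\<in>M. \<forall>b\<in>M. \<forall>c\<in>M. sc a = rg b \<longrightarrow> sc b = rg c \<longrightarrow> (a \<cdot> b) \<cdot> c = a \<cdot> (b \<cdot> c)"
  "\<forall>a\<in>M. rg a \<cdot> a = a \<and> a \<cdot> sc a = a"
  "\<forall>a\<in>M. \<forall>b\<in>M. sc a = rg b \<longrightarrow> dg (a \<cdot> b) = dg a + dg b"
  "\<forall>v\<in>Obj L. dg v = 0"
  "\<forall>l\<in>M. \<forall>m n. dg l = m + n \<longrightarrow>
     (\<exists>!(\<mu>, \<nu>). \<mu> \<in> M \<and> \<nu> \<in> M \<and> sc \<mu> = rg \<nu> \<and> dg \<mu> = m \<and> dg \<nu> = n \<and> l = \<mu> \<cdot> \<nu>)"
  unfolding atomize_conj using is_kgraph unfolding is_kgraph_def by (elim conjE) (intro conjI, assumption+)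

lemma rng_Obj: "a \<in> M \<Longrightarrow> rg a \<in> Obj L"
  and src_Obj: "a \<in> M \<Longrightarrow> sc a \<in> Obj L"
  using kgraph_axioms(1) by blast+

lemma ObjD: "v \<in> Obj L \<Longrightarrow> v \<in> M \<and> rg v = v \<and> sc v = v \<and> dg v = 0"
  using kgraph_axioms(6) unfolding Obj_def by blast

lemma rng_in_Mor[simp]: "a \<in> M \<Longrightarrow> rg a \<in> M"
  and src_in_Mor[simp]: "a \<in> M \<Longrightarrow> sc a \<in> M"
  and rng_rng[simp]: "a \<in> M \<Longrightarrow> rg (rg a) = rg a"
  and src_rng[simp]: "a \<in> M \<Longrightarrow> sc (rg a) = rg a"
  and rng_src[simp]: "a \<in> M \<Longrightarrow> rg (sc a) = sc a"
  and src_src[simp]: "a \<in> M \<Longrightarrow> sc (sc a) = sc a"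
  and deg_rng[simp]: "a \<in> M \<Longrightarrow> dg (rg a) = 0"
  and deg_src[simp]: "a \<in> M \<Longrightarrow> dg (sc a) = 0"
  using ObjD[OF rng_Obj[of a]] ObjD[OF src_Obj[of a]] by simp_all

lemma cmp_in_Mor[simp]: "a \<in> M \<Longrightarrow> b \<in> M \<Longrightarrow> sc a = rg b \<Longrightarrow> a \<cdot> b \<in> M"
  and rng_cmp[simp]: "a \<in> M \<Longrightarrow> b \<in> M \<Longrightarrow> sc a = rg b \<Longrightarrow> rg (a \<cdot> b) = rg a"
  and src_cmp[simp]: "a \<in> M \<Longrightarrow> b \<in> M \<Longrightarrow> sc a = rg b \<Longrightarrow> sc (a \<cdot> b) = sc b"
  using kgraph_axioms(2) by blast+

lemma deg_cmp[simp]: "a \<in> M \<Longrightarrow> b \<in> M \<Longrightarrow> sc a = rg b \<Longrightarrow> dg (a \<cdot> b) = dg a + dg b"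
  using kgraph_axioms(5) by blast

lemma cmp_assoc: "a \<in> M \<Longrightarrow> b \<in> M \<Longrightarrow> c \<in> M \<Longrightarrow> sc a = rg b \<Longrightarrow> sc b = rg c \<Longrightarrow>
   (a \<cdot> b) \<cdot> c = a \<cdot> (b \<cdot> c)"
  using kgraph_axioms(3) by blast

lemma cmp_rng_id[simp]: "a \<in> M \<Longrightarrow> rg a \<cdot> a = a"
  and cmp_src_id[simp]: "a \<in> M \<Longrightarrow> a \<cdot> sc a = a"
  using kgraph_axioms(4) by blast+

lemma unique_factorisation:
  assumes "l \<in> M" "dg l = m + n"
  shows "\<exists>!(\<mu>, \<nu>). \<mu> \<in> M \<and> \<nu> \<in> M \<and> sc \<mu> = rg \<nu> \<and> dg \<mu> = m \<and> dg \<nu> = n \<and> l = \<mu> \<cdot> \<nu>"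
  using kgraph_axioms(7) assms by blast

lemma factorisation_unique:
  assumes "a \<in> M" "b \<in> M" "a' \<in> M" "b' \<in> M" "sc a = rg b" "sc a' = rg b'"
    "a \<cdot> b = a' \<cdot> b'" "dg a = dg a'"
  shows "a = a' \<and> b = b'"
proof -
  have "dg a + dg b = dg a' + dg b'" using assms by (metis deg_cmp)
  then have "dg b = dg b'" using assms(8) by (simp add: fun_eq_iff)
  moreover have "\<exists>!(\<mu>, \<nu>). \<mu> \<in> M \<and> \<nu> \<in> M \<and> sc \<mu> = rg \<nu> \<and> dg \<mu> = dg a \<and> dg \<nu> = dg b \<and> a \<cdot> b = \<mu> \<cdot> \<nu>"
    by (rule unique_factorisation) (use assms(1,2,5) in simp_all)
  ultimately have "(a, b) = (a', b')"
    using assms by (elim ex1E) (metis (mono_tags, lifting) case_prod_conv)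
  then show ?thesis by simp
qed

lemma cmp_cancel_left:
  assumes "a \<in> M" "b \<in> M" "b' \<in> M" "sc a = rg b" "sc a = rg b'" "a \<cdot> b = a \<cdot> b'"
  shows "b = b'"
  using factorisation_unique[of a b a b'] assms by auto

lemma cmp_cancel_right:
  assumes "a \<in> M" "a' \<in> M" "b \<in> M" "sc a = rg b" "sc a' = rg b" "a \<cdot> b = a' \<cdot> b"
  shows "a = a'"
proof -
  have "dg a + dg b = dg a' + dg b" using assms by (metis deg_cmp)
  then have "dg a = dg a'" by (simp add: fun_eq_iff)
  then show ?thesis using factorisation_unique[of a b a' b] assms by auto
qed

lemma factorisation_exists:
  assumes "l \<in> M" "m \<le> dg l"
  obtains \<mu> \<nu> where "\<mu> \<in> M" "\<nu> \<in> M" "sc \<mu> = rg \<nu>" "dg \<mu> = m" "dg \<nu> = dg l - m" "l = \<mu> \<cdot> \<nu>"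
proof -
  have "dg l = m + (dg l - m)" using assms le_fun_add_diff by blast
  from unique_factorisation[OF assms(1) this] show ?thesis using that by auto
qed

lemma deg_zero_Obj:
  assumes "a \<in> M" "dg a = 0"
  shows "a \<in> Obj L" "rg a = a" "sc a = a"
proof -
  have e: "rg a \<cdot> a = a \<cdot> sc a" using assms by simp
  have "rg a = a \<and> a = sc a"
    by (rule factorisation_unique[of "rg a" a a "sc a"]) (use assms e in auto)
  then show "rg a = a" "sc a = a" by auto
  then show "a \<in> Obj L" using assms by (simp add: Obj_def)
qed

lemma mem_Lmin_iff: "(\<alpha>, \<beta>) \<in> Lmin L l m \<longleftrightarrow> \<alpha> \<in> M \<and> \<beta> \<in> M \<and> sc l = rg \<alpha> \<and> sc m = rg \<beta> \<and>
      l \<cdot> \<alpha> = m \<cdot> \<beta> \<and> dg (l \<cdot> \<alpha>) = sup (dg l) (dg m)"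
  by (simp add: Lmin_def)

lemma Lmin_nonempty:
  assumes "a \<in> M" "b \<in> M" "\<alpha> \<in> M" "\<beta> \<in> M" "sc a = rg \<alpha>" "sc b = rg \<beta>" "a \<cdot> \<alpha> = b \<cdot> \<beta>"
  shows "Lmin L a b \<noteq> {}"
proof -
  define w where "w = a \<cdot> \<alpha>"
  have wM: "w \<in> M" using assms w_def by simp
  have "dg w = dg a + dg \<alpha>" unfolding w_def using assms(1,3,5) by (rule deg_cmp)
  then have "dg a \<le> dg w" by (simp add: le_fun_def)
  moreover have "dg w = dg b + dg \<beta>" unfolding w_def assms(7) using assms(2,4,6) by (rule deg_cmp)
  then have "dg b \<le> dg w" by (simp add: le_fun_def)
  ultimately have N: "sup (dg a) (dg b) \<le> dg w" by simp
  obtain w1 w2 where w12: "w1 \<in> M" "w2 \<in> M" "sc w1 = rg w2" "dg w1 = sup (dg a) (dg b)" "w = w1 \<cdot> w2"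
    using factorisation_exists[OF wM N] by metis
  have "dg a \<le> dg w1" using w12 by simp
  then obtain a' \<alpha>1 where A: "a' \<in> M" "\<alpha>1 \<in> M" "sc a' = rg \<alpha>1" "dg a' = dg a" "w1 = a' \<cdot> \<alpha>1"
    using factorisation_exists[OF w12(1)] by metis
  have "dg b \<le> dg w1" using w12 by simp
  then obtain b' \<beta>1 where B: "b' \<in> M" "\<beta>1 \<in> M" "sc b' = rg \<beta>1" "dg b' = dg b" "w1 = b' \<cdot> \<beta>1"
    using factorisation_exists[OF w12(1)] by metis
  have "a' \<cdot> (\<alpha>1 \<cdot> w2) = a \<cdot> \<alpha>"
    using A w12 w_def cmp_assoc[of a' \<alpha>1 w2] by simp
  then have "a' = a" using factorisation_unique[of a' "\<alpha>1 \<cdot> w2" a \<alpha>] A w12 assms by simp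
  moreover have "b' \<cdot> (\<beta>1 \<cdot> w2) = b \<cdot> \<beta>"
    using B w12 w_def cmp_assoc[of b' \<beta>1 w2] assms by simp
  then have "b' = b" using factorisation_unique[of b' "\<beta>1 \<cdot> w2" b \<beta>] B w12 assms by simp
  ultimately have "(\<alpha>1, \<beta>1) \<in> Lmin L a b" using A B w12 by (auto simp: mem_Lmin_iff)
  then show ?thesis by blast
qed

lemma seg_eqI:
  assumes "\<alpha> \<in> M" "\<beta> \<in> M" "\<gamma> \<in> M" "sc \<alpha> = rg \<beta>" "sc \<beta> = rg \<gamma>"
    "dg \<alpha> = p" "dg \<beta> = q - p" "dg \<gamma> = dg a - q" "a = (\<alpha> \<cdot> \<beta>) \<cdot> \<gamma>" "p \<le> q"
  shows "seg L a p q = \<beta>"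
  unfolding seg_def
proof (rule the_equality)
  show "\<exists>\<alpha> \<gamma>. \<alpha> \<in> M \<and> \<beta> \<in> M \<and> \<gamma> \<in> M \<and> sc \<alpha> = rg \<beta> \<and> sc \<beta> = rg \<gamma> \<and>
      dg \<alpha> = p \<and> dg \<beta> = q - p \<and> dg \<gamma> = dg a - q \<and> a = \<alpha> \<cdot> \<beta> \<cdot> \<gamma>"
    using assms by blast
next
  fix \<beta>'
  assume "\<exists>\<alpha> \<gamma>. \<alpha> \<in> M \<and> \<beta>' \<in> M \<and> \<gamma> \<in> M \<and> sc \<alpha> = rg \<beta>' \<and> sc \<beta>' = rg \<gamma> \<and>
      dg \<alpha> = p \<and> dg \<beta>' = q - p \<and> dg \<gamma> = dg a - q \<and> a = \<alpha> \<cdot> \<beta>' \<cdot> \<gamma>"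
  then obtain \<alpha>' \<gamma>' where A: "\<alpha>' \<in> M" "\<beta>' \<in> M" "\<gamma>' \<in> M" "sc \<alpha>' = rg \<beta>'" "sc \<beta>' = rg \<gamma>'"
      "dg \<alpha>' = p" "dg \<beta>' = q - p" "dg \<gamma>' = dg a - q" "a = \<alpha>' \<cdot> \<beta>' \<cdot> \<gamma>'" by blast
  have "dg (\<alpha> \<cdot> \<beta>) = dg (\<alpha>' \<cdot> \<beta>')" using A(1,2,4,6,7) assms(1,2,4,6,7) by simp
  moreover have "\<alpha> \<cdot> \<beta> \<cdot> \<gamma> = \<alpha>' \<cdot> \<beta>' \<cdot> \<gamma>'" using A(9) assms(9) by simp
  ultimately have "\<alpha> \<cdot> \<beta> = \<alpha>' \<cdot> \<beta>'"
    using factorisation_unique[of "\<alpha> \<cdot> \<beta>" \<gamma> "\<alpha>' \<cdot> \<beta>'" \<gamma>'] A(1-5) assms(1-5) by simp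
  then show "\<beta>' = \<beta>" using factorisation_unique[of \<alpha> \<beta> \<alpha>' \<beta>'] A(1-7) assms(1-7) by simp
qed

lemma seg_factorisation:
  assumes "a \<in> M" "p \<le> q" "q \<le> dg a"
  obtains \<alpha> \<beta> \<gamma> where "\<alpha> \<in> M" "\<beta> \<in> M" "\<gamma> \<in> M" "sc \<alpha> = rg \<beta>"
    "sc \<beta> = rg \<gamma>" "dg \<alpha> = p" "dg \<beta> = q - p" "dg \<gamma> = dg a - q"
    "a = (\<alpha> \<cdot> \<beta>) \<cdot> \<gamma>" "seg L a p q = \<beta>"
proof -
  obtain w \<gamma> where w: "w \<in> M" "\<gamma> \<in> M" "sc w = rg \<gamma>" "dg w = q" "dg \<gamma> = dg a - q" "a = w \<cdot> \<gamma>"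
    using factorisation_exists[OF assms(1,3)] by metis
  obtain \<alpha> \<beta> where ab: "\<alpha> \<in> M" "\<beta> \<in> M" "sc \<alpha> = rg \<beta>" "dg \<alpha> = p" "dg \<beta> = q - p" "w = \<alpha> \<cdot> \<beta>"
    using factorisation_exists[OF w(1)] assms(2) w(4) by metis
  have sb: "sc \<beta> = rg \<gamma>" using w(3) ab(1-3,6) by simp
  have e: "a = (\<alpha> \<cdot> \<beta>) \<cdot> \<gamma>" using w(6) ab(6) by simp
  have "seg L a p q = \<beta>" by (rule seg_eqI[OF _ _ _ _ _ _ _ _ e]) (use w(1-5) ab(1-5) sb assms(2) in auto)
  then show ?thesis using that[OF ab(1,2) w(2) ab(3) sb ab(4,5) w(5) e] by blast
qed

lemma seg_in_Mor: "a \<in> M \<Longrightarrow> p \<le> q \<Longrightarrow> q \<le> dg a \<Longrightarrow> seg L a p q \<in> M"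
  by (metis seg_factorisation)
lemma deg_seg: "a \<in> M \<Longrightarrow> p \<le> q \<Longrightarrow> q \<le> dg a \<Longrightarrow> dg (seg L a p q) = q - p"
  by (metis seg_factorisation)

lemma rng_src_seg:
  assumes "a \<in> M" "p \<le> q" "q \<le> dg a"
  shows "rg (seg L a p q) = seg L a p p" "sc (seg L a p q) = seg L a q q"
proof -
  obtain \<alpha> \<beta> \<gamma> where B: "\<alpha> \<in> M" "\<beta> \<in> M" "\<gamma> \<in> M" "sc \<alpha> = rg \<beta>"
    "sc \<beta> = rg \<gamma>" "dg \<alpha> = p" "dg \<beta> = q - p" "dg \<gamma> = dg a - q"
    "a = (\<alpha> \<cdot> \<beta>) \<cdot> \<gamma>" "seg L a p q = \<beta>" using seg_factorisation[OF assms] by metis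
  have r: "\<alpha> \<cdot> sc \<alpha> = \<alpha>" using B(1) by simp
  have e1: "a = (\<alpha> \<cdot> sc \<alpha>) \<cdot> (\<beta> \<cdot> \<gamma>)" unfolding r using B(1-5) cmp_assoc[of \<alpha> \<beta> \<gamma>] B(9) by simp
  have "dg (\<beta> \<cdot> \<gamma>) = dg a - p" using B(1-8) assms(2,3)
    by (simp add: le_fun_def fun_eq_iff)
  then have "seg L a p p = sc \<alpha>"
    using seg_eqI[OF _ _ _ _ _ _ _ _ e1] B(1-8) by simp
  then show "rg (seg L a p q) = seg L a p p" using B(4,10) by simp
  have r2: "(\<alpha> \<cdot> \<beta>) \<cdot> sc \<beta> = \<alpha> \<cdot> \<beta>" using B(1,2,4) cmp_src_id[of "\<alpha> \<cdot> \<beta>"] by simp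
  have e2: "a = ((\<alpha> \<cdot> \<beta>) \<cdot> sc \<beta>) \<cdot> \<gamma>" unfolding r2 using B(9) by simp
  have "dg (\<alpha> \<cdot> \<beta>) = q" using B(1-8) assms(2,3)
    by (simp add: le_fun_def fun_eq_iff)
  then have "seg L a q q = sc \<beta>"
    using seg_eqI[OF _ _ _ _ _ _ _ _ e2] B(1-8) by simp
  then show "sc (seg L a p q) = seg L a q q" using B(10) by simp
qed

lemma seg_diag_Obj: "a \<in> M \<Longrightarrow> p \<le> dg a \<Longrightarrow> seg L a p p \<in> Obj L"
  using seg_in_Mor[of a p p] deg_seg[of a p p] deg_zero_Obj by simp

lemma seg_cmp:
  assumes "a \<in> M" "p \<le> q" "q \<le> t" "t \<le> dg a"
  shows "seg L a p q \<cdot> seg L a q t = seg L a p t"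
proof -
  have pt: "p \<le> t" using assms by simp
  obtain \<alpha> \<beta> \<gamma> where C: "\<alpha> \<in> M" "\<beta> \<in> M" "\<gamma> \<in> M" "sc \<alpha> = rg \<beta>"
    "sc \<beta> = rg \<gamma>" "dg \<alpha> = p" "dg \<beta> = t - p" "dg \<gamma> = dg a - t"
    "a = (\<alpha> \<cdot> \<beta>) \<cdot> \<gamma>" "seg L a p t = \<beta>" using seg_factorisation[OF assms(1) pt assms(4)] by metis
  have "q - p \<le> dg \<beta>" using C(7) assms(2,3) by (simp add: le_fun_def diff_le_mono)
  then obtain \<beta>1 \<beta>2 where B: "\<beta>1 \<in> M" "\<beta>2 \<in> M" "sc \<beta>1 = rg \<beta>2" "dg \<beta>1 = q - p" "dg \<beta>2 = dg \<beta> - (q - p)"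
    "\<beta> = \<beta>1 \<cdot> \<beta>2"
    using factorisation_exists[of \<beta> "q - p"] C(2) by metis
  have r1: "rg \<beta>1 = rg \<beta>" "sc \<beta>2 = sc \<beta>" using B by simp_all
  have s1: "sc \<alpha> = rg \<beta>1" using C(4) r1 by simp
  have s2: "sc \<beta>2 = rg \<gamma>" using C(5) r1 by simp
  have "a = (\<alpha> \<cdot> (\<beta>1 \<cdot> \<beta>2)) \<cdot> \<gamma>" using C(9) B(6) by simp
  also have "\<alpha> \<cdot> (\<beta>1 \<cdot> \<beta>2) = (\<alpha> \<cdot> \<beta>1) \<cdot> \<beta>2" using cmp_assoc[of \<alpha> \<beta>1 \<beta>2] C(1) B(1-3) s1 by simp
  finally have e2: "a = ((\<alpha> \<cdot> \<beta>1) \<cdot> \<beta>2) \<cdot> \<gamma>" .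
  have e1: "a = (\<alpha> \<cdot> \<beta>1) \<cdot> (\<beta>2 \<cdot> \<gamma>)" using e2 cmp_assoc[of "\<alpha> \<cdot> \<beta>1" \<beta>2 \<gamma>] C(1,3) B(1-3) s1 s2 by simp
  have "seg L a p q = \<beta>1"
    by (rule seg_eqI[OF _ _ _ _ _ _ _ _ e1]) (use C(1-8) B(1-5) r1 assms in \<open>simp_all add: le_fun_def fun_eq_iff\<close>)
  moreover
  have "seg L a q t = \<beta>2"
    by (rule seg_eqI[OF _ _ _ _ _ _ _ _ e2]) (use C(1-8) B(1-5) r1 assms in \<open>simp_all add: le_fun_def fun_eq_iff\<close>)
  ultimately show ?thesis using B(6) C(10) by simp
qed

lemma seg_cmp_right:
  assumes "b \<in> M" "c \<in> M" "sc b = rg c" "p \<le> q" "q \<le> dg b"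
  shows "seg L (b \<cdot> c) p q = seg L b p q"
proof -
  obtain \<alpha> \<beta> \<gamma> where A: "\<alpha> \<in> M" "\<beta> \<in> M" "\<gamma> \<in> M" "sc \<alpha> = rg \<beta>"
    "sc \<beta> = rg \<gamma>" "dg \<alpha> = p" "dg \<beta> = q - p" "dg \<gamma> = dg b - q"
    "b = (\<alpha> \<cdot> \<beta>) \<cdot> \<gamma>" "seg L b p q = \<beta>" using seg_factorisation[OF assms(1,4,5)] by metis
  have sg: "sc \<gamma> = sc b" using A(1-5) A(9) by simp
  have "b \<cdot> c = ((\<alpha> \<cdot> \<beta>) \<cdot> \<gamma>) \<cdot> c" using A(9) by simp
  also have "\<dots> = (\<alpha> \<cdot> \<beta>) \<cdot> (\<gamma> \<cdot> c)"
    by (rule cmp_assoc) (use A(1-5) sg assms(2,3) in simp_all)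
  finally have e: "b \<cdot> c = (\<alpha> \<cdot> \<beta>) \<cdot> (\<gamma> \<cdot> c)" .
  have "dg (b \<cdot> c) = dg b + dg c" using assms(1-3) by simp
  then have "seg L (b \<cdot> c) p q = \<beta>"
    by (intro seg_eqI[OF _ _ _ _ _ _ _ _ e]) (use A(1-8) sg assms in \<open>simp_all add: le_fun_def fun_eq_iff\<close>)
  then show ?thesis using A(10) by simp
qed

lemma seg_whole: "a \<in> M \<Longrightarrow> seg L a 0 (dg a) = a"
  by (rule seg_eqI[of "rg a" a "sc a"]) simp_all

end

section \<open>Paths\<close>

definition le_deg :: "('k \<Rightarrow> nat) \<Rightarrow> ('a, 'k) path \<Rightarrow> bool" where
  "le_deg n x \<longleftrightarrow> (\<forall>i. enat (n i) \<le> fst x i)"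

definition initial :: "('a, 'k) path \<Rightarrow> ('k \<Rightarrow> nat) \<Rightarrow> 'a" where
  "initial x n = snd x 0 n"

lemma le_deg_mono: "le_deg q x \<Longrightarrow> n \<le> q \<Longrightarrow> le_deg n x"
  unfolding le_deg_def le_fun_def by (meson enat_ord_simps(1) order_trans)

lemma le_deg_sup: "le_deg a x \<Longrightarrow> le_deg b x \<Longrightarrow> le_deg (sup a b) x"
  unfolding le_deg_def sup_fun_def sup_nat_def by (simp add: max_def)

lemma le_deg_0[simp]: "le_deg 0 x"
  unfolding le_deg_def by (simp add: zero_enat_def[symmetric])

lemma inO_iff_le_deg: "inO (fst x) p q \<longleftrightarrow> p \<le> q \<and> le_deg q x"
  by (simp add: inO_def le_deg_def)

context k_graph
begin

lemma XL_iff: "x \<in> XL L \<longleftrightarrow>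
      (\<forall>p q. \<not> inO (fst x) p q \<longrightarrow> snd x p q = undefined) \<and>
      (\<forall>p q. inO (fst x) p q \<longrightarrow> snd x p q \<in> M \<and> dg (snd x p q) = q - p \<and>
                           rg (snd x p q) = snd x p p \<and> sc (snd x p q) = snd x q q) \<and>
      (\<forall>p. inO (fst x) p p \<longrightarrow> snd x p p \<in> Obj L) \<and>
      (\<forall>p q t. inO (fst x) p q \<and> inO (fst x) q t \<longrightarrow> snd x p q \<cdot> snd x q t = snd x p t)"
  by (cases x) (simp add: XL_def)

lemma path_entry:
  assumes "x \<in> XL L" "p \<le> q" "le_deg q x"
  shows "snd x p q \<in> M" "dg (snd x p q) = q - p" "rg (snd x p q) = snd x p p" "sc (snd x p q) = snd x q q"
  using assms unfolding XL_iff inO_iff_le_deg by blast+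

lemma path_diag_Obj: "x \<in> XL L \<Longrightarrow> le_deg p x \<Longrightarrow> snd x p p \<in> Obj L"
  unfolding XL_iff inO_iff_le_deg by blast

lemma path_cmp: "x \<in> XL L \<Longrightarrow> p \<le> q \<Longrightarrow> q \<le> t \<Longrightarrow> le_deg t x \<Longrightarrow> snd x p q \<cdot> snd x q t = snd x p t"
  unfolding XL_iff inO_iff_le_deg using le_deg_mono by blast

lemma path_undefined: "x \<in> XL L \<Longrightarrow> \<not> inO (fst x) p q \<Longrightarrow> snd x p q = undefined"
  unfolding XL_iff by blast

lemma XL_I:
  assumes "\<And>p q. \<not> inO (fst x) p q \<Longrightarrow> snd x p q = undefined"
    and "\<And>p q. p \<le> q \<Longrightarrow> le_deg q x \<Longrightarrow> snd x p q \<in> M \<and> dg (snd x p q) = q - p \<and>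
           rg (snd x p q) = snd x p p \<and> sc (snd x p q) = snd x q q"
    and "\<And>p. le_deg p x \<Longrightarrow> snd x p p \<in> Obj L"
    and "\<And>p q t. p \<le> q \<Longrightarrow> q \<le> t \<Longrightarrow> le_deg t x \<Longrightarrow> snd x p q \<cdot> snd x q t = snd x p t"
  shows "x \<in> XL L"
  unfolding XL_iff inO_iff_le_deg using assms by (auto simp: inO_iff_le_deg)

lemma initial_entry:
  assumes "x \<in> XL L" "le_deg q x"
  shows "initial x q \<in> M" "dg (initial x q) = q" "rg (initial x q) = initial x 0" "sc (initial x q) = snd x q q"
  using path_entry[OF assms(1) _ assms(2), of 0] unfolding initial_def by auto

lemma initial_split:
  assumes "x \<in> XL L" "p \<le> q" "le_deg q x"
  shows "initial x q = initial x p \<cdot> snd x p q"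
  using path_cmp[OF assms(1) _ assms(2,3), of 0] unfolding initial_def by simp

lemma src_initial:
  assumes "x \<in> XL L" "p \<le> q" "le_deg q x"
  shows "sc (initial x p) = rg (snd x p q)"
  using assms by (metis le_deg_mono path_entry(3) initial_entry(4))

lemma path_eqI:
  assumes "x \<in> XL L" "y \<in> XL L" "fst x = fst y" "\<And>q. le_deg q x \<Longrightarrow> initial x q = initial y q"
  shows "x = y"
proof -
  have "snd x p q = snd y p q" for p q
  proof (cases "inO (fst x) p q")
    case True
    then have pq: "p \<le> q" "le_deg q x" by (auto simp: inO_iff_le_deg)
    then have ldy: "le_deg q y" using assms(3) by (simp add: le_deg_def)
    have px: "le_deg p x" using pq le_deg_mono by blast
    have "initial x p \<cdot> snd x p q = initial y p \<cdot> snd y p q"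
      using initial_split[OF assms(1) pq] initial_split[OF assms(2) pq(1) ldy] assms(4)[OF pq(2)] by simp
    then have e: "initial x p \<cdot> snd x p q = initial x p \<cdot> snd y p q" using assms(4)[OF px] by simp
    show ?thesis
      by (rule cmp_cancel_left[OF _ _ _ _ _ e])
        (use initial_entry[OF assms(1) px] path_entry[OF assms(1) pq] src_initial[OF assms(1) pq]
             initial_entry[OF assms(2), of p] path_entry[OF assms(2) pq(1) ldy] src_initial[OF assms(2) pq(1) ldy]
             px assms(3,4) ldy in \<open>auto simp: le_deg_def\<close>)
  next
    case False
    then have "\<not> inO (fst y) p q" using assms(3) by simp
    then show ?thesis using False path_undefined assms(1,2) by metis
  qed
  then show ?thesis using assms(3) by (simp add: prod_eq_iff fun_eq_iff)
qed

lemma path_eqI_above: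
  assumes "x \<in> XL L" "y \<in> XL L" "fst x = fst y" "le_deg D x"
    "\<And>q. le_deg q x \<Longrightarrow> D \<le> q \<Longrightarrow> initial x q = initial y q"
  shows "x = y"
proof (rule path_eqI[OF assms(1-3)])
  fix q assume q: "le_deg q x"
  have Q: "le_deg (sup q D) x" using le_deg_sup q assms(4) by blast
  have ly: "le_deg (sup q D) y" using Q assms(3) by (simp add: le_deg_def)
  have e: "initial x (sup q D) = initial y (sup q D)" using assms(5)[OF Q] by simp
  have "initial x q \<cdot> snd x q (sup q D) = initial y q \<cdot> snd y q (sup q D)"
    using initial_split[OF assms(1) _ Q, of q] initial_split[OF assms(2) _ ly, of q] e by simp
  moreover have "dg (initial x q) = dg (initial y q)"
    using initial_entry(2)[OF assms(1) q] initial_entry(2)[OF assms(2), of q] q assms(3) by (simp add: le_deg_def)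
  ultimately show "initial x q = initial y q"
    using factorisation_unique[of "initial x q" "snd x q (sup q D)" "initial y q" "snd y q (sup q D)"]
      initial_entry[OF assms(1) q] path_entry[OF assms(1) _ Q, of q] src_initial[OF assms(1) _ Q, of q]
      initial_entry[OF assms(2), of q] path_entry[OF assms(2) _ ly, of q] src_initial[OF assms(2) _ ly, of q]
      q assms(3) by (auto simp: le_deg_def)
qed

definition prefix_of :: "'a \<Rightarrow> ('a, 'k) path \<Rightarrow> bool" where
  "prefix_of \<mu> x \<longleftrightarrow> le_deg (dg \<mu>) x \<and> initial x (dg \<mu>) = \<mu>"

lemma DF_iff: "x \<in> DF L F \<longleftrightarrow> x \<in> XL L \<and> (\<exists>(l, m)\<in>F. prefix_of m x)"
  unfolding DF_def prefix_of_def le_deg_def initial_def by auto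

lemma prefix_of_initial_factor:
  assumes "x \<in> XL L" "le_deg q x" "initial x q = a \<cdot> c" "a \<in> M" "c \<in> M" "sc a = rg c"
  shows "prefix_of a x"
proof -
  have "q = dg a + dg c" using initial_entry(2)[OF assms(1,2)] assms(3-6) by simp
  then have aq: "dg a \<le> q" by (simp add: le_fun_def)
  then have la: "le_deg (dg a) x" using le_deg_mono assms(2) by blast
  have "initial x (dg a) \<cdot> snd x (dg a) q = a \<cdot> c" using initial_split[OF assms(1) aq assms(2)] assms(3) by simp
  then have "initial x (dg a) = a"
    using factorisation_unique[of "initial x (dg a)" "snd x (dg a) q" a c] initial_entry[OF assms(1) la]
      path_entry[OF assms(1) aq assms(2)] src_initial[OF assms(1) aq assms(2)] assms(4-6) by auto
  then show ?thesis using la by (simp add: prefix_of_def)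
qed

lemma initial_agree:
  assumes "x \<in> XL L" "y \<in> XL L" "le_deg q x" "le_deg q y" "initial x q = initial y q" "n \<le> q"
  shows "initial x n = initial y n"
proof -
  have "prefix_of (initial x n) y"
    by (rule prefix_of_initial_factor[OF assms(2,4), of _ "snd x n q"])
      (use initial_split[OF assms(1) assms(6,3)] assms(5) initial_entry[OF assms(1) le_deg_mono[OF assms(3,6)]]
        path_entry[OF assms(1) assms(6,3)] src_initial[OF assms(1) assms(6,3)] in auto)
  then show ?thesis using initial_entry(2)[OF assms(1) le_deg_mono[OF assms(3,6)]] by (simp add: prefix_of_def)
qed

lemma prefix_of_Mor: "x \<in> XL L \<Longrightarrow> prefix_of \<mu> x \<Longrightarrow> \<mu> \<in> M"
  unfolding prefix_of_def using initial_entry by metis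

lemma initial_prefix_split:
  assumes "x \<in> XL L" "prefix_of \<mu> x" "le_deg q x" "dg \<mu> \<le> q"
  shows "initial x q = \<mu> \<cdot> snd x (dg \<mu>) q"
  using initial_split[OF assms(1,4,3)] assms(2) by (simp add: prefix_of_def)

end

lemma sigma_fst: "fst (sigma n x) = (\<lambda>i. fst x i - enat (n i))"
  by (simp add: sigma_def Let_def)

lemma sigma_snd: "snd (sigma n x) p q = (if inO (fst (sigma n x)) p q then snd x (p + n) (q + n) else undefined)"
  by (simp add: sigma_def Let_def)

lemma le_deg_sigma: "le_deg n x \<Longrightarrow> le_deg q (sigma n x) = le_deg (q + n) x"
  unfolding le_deg_def sigma_fst by (simp add: enat_le_minus)

lemma concat_fst: "fst (concat L l x) = (\<lambda>i. enat (deg L l i) + fst x i)"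
  by (simp add: concat_def Let_def)

lemma concat_snd: "snd (concat L l x) p q = (if inO (fst (concat L l x)) p q
     then seg L (cmp L l (snd x 0 (sup q (deg L l) - deg L l))) p q else undefined)"
  by (simp add: concat_def Let_def)

lemma le_deg_concat_iff: "le_deg q (concat L l x) \<longleftrightarrow> (\<forall>i. enat (q i) \<le> enat (deg L l i) + fst x i)"
  unfolding le_deg_def concat_fst by simp

lemma le_deg_concat: "deg L l \<le> q \<Longrightarrow> le_deg q (concat L l x) \<longleftrightarrow> le_deg (q - deg L l) x"
  unfolding le_deg_concat_iff unfolding le_deg_def le_fun_def
proof (intro iffI allI)
  fix i
  assume a: "\<forall>i. deg L l i \<le> q i" "\<forall>i. enat (q i) \<le> enat (deg L l i) + fst x i"
  show "enat ((q - deg L l) i) \<le> fst x i"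
    using a(1)[rule_format, of i] a(2)[rule_format, of i] by (cases "fst x i") auto
next
  fix i
  assume a: "\<forall>i. deg L l i \<le> q i" "\<forall>i. enat ((q - deg L l) i) \<le> fst x i"
  show "enat (q i) \<le> enat (deg L l i) + fst x i"
    using a(1)[rule_format, of i] a(2)[rule_format, of i] by (cases "fst x i") auto
qed

lemma le_deg_concat_tail: "le_deg q (concat L l x) \<Longrightarrow> le_deg (sup q (deg L l) - deg L l) x"
  unfolding le_deg_concat_iff unfolding le_deg_def
proof (intro allI)
  fix i
  assume a: "\<forall>i. enat (q i) \<le> enat (deg L l i) + fst x i"
  show "enat ((sup q (deg L l) - deg L l) i) \<le> fst x i"
    using a[rule_format, of i] by (cases "fst x i") (auto simp: sup_fun_def sup_nat_def max_def)
qed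

lemma le_deg_concat_head: "le_deg (deg L l) (concat L l x)"
  unfolding le_deg_concat_iff by simp

context k_graph
begin

lemma snd_sigma:
  "p \<le> q \<Longrightarrow> le_deg q (sigma n x) \<Longrightarrow> snd (sigma n x) p q = snd x (p + n) (q + n)"
  by (simp add: sigma_snd inO_iff_le_deg)

lemma sigma_XL:
  assumes x: "x \<in> XL L" and n: "le_deg n x"
  shows "sigma n x \<in> XL L"
proof (rule XL_I)
  have shift: "le_deg q (sigma n x) \<Longrightarrow> le_deg (q + n) x" for q
    using le_deg_sigma[OF n] by simp
  fix p q t
  show "\<not> inO (fst (sigma n x)) p q \<Longrightarrow> snd (sigma n x) p q = undefined"
    by (simp add: sigma_snd)
  show "le_deg p (sigma n x) \<Longrightarrow> snd (sigma n x) p p \<in> Obj L"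
    using path_diag_Obj[OF x shift[of p]] snd_sigma[OF order_refl, of p n x] by simp
  assume pq: "p \<le> q"
  then have pq': "p + n \<le> q + n" by (rule add_right_mono)
  show "snd (sigma n x) p q \<in> M \<and> dg (snd (sigma n x) p q) = q - p \<and>
      rg (snd (sigma n x) p q) = snd (sigma n x) p p \<and> sc (snd (sigma n x) p q) = snd (sigma n x) q q"
    if q: "le_deg q (sigma n x)"
    using path_entry[OF x pq' shift[OF q]] snd_sigma[OF pq q] snd_sigma[OF order_refl q]
      snd_sigma[OF order_refl le_deg_mono[OF q pq]] by (simp add: fun_eq_iff)
  assume qt: "q \<le> t" and t: "le_deg t (sigma n x)"
  show "snd (sigma n x) p q \<cdot> snd (sigma n x) q t = snd (sigma n x) p t"
    using path_cmp[OF x pq' add_right_mono[OF qt] shift[OF t]] snd_sigma[OF pq le_deg_mono[OF t qt]]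
      snd_sigma[OF qt t] snd_sigma[OF order_trans[OF pq qt] t] by simp
qed

lemma initial_sigma: "le_deg n x \<Longrightarrow> le_deg q (sigma n x) \<Longrightarrow> initial (sigma n x) q = snd x n (q + n)"
  by (simp add: initial_def sigma_snd inO_iff_le_deg)

lemma initial_sigma_split:
  assumes "x \<in> XL L" "le_deg n x" "le_deg (q + n) x"
  shows "initial x (q + n) = initial x n \<cdot> initial (sigma n x) q"
proof -
  have "n \<le> q + n" by (simp add: le_fun_def)
  then show ?thesis
    using initial_split[OF assms(1) _ assms(3)] initial_sigma[OF assms(2)] le_deg_sigma[OF assms(2)] assms(3)
    by simp
qed

lemma initial_sigma_0: "le_deg n x \<Longrightarrow> initial (sigma n x) 0 = snd x n n"
  using initial_sigma[of n x 0] le_deg_sigma[of n x 0] by simp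

end

definition vertex_path :: "'a \<Rightarrow> ('a, 'k) path" where
  "vertex_path v = ((\<lambda>i. 0), \<lambda>p q. if p = 0 \<and> q = 0 then v else undefined)"

lemma inO_0: "inO (\<lambda>i. 0) p q \<longleftrightarrow> p = 0 \<and> q = 0"
proof -
  have "(\<forall>i. enat (q i) \<le> 0) \<longleftrightarrow> q = 0" by (simp add: zero_enat_def fun_eq_iff)
  moreover have "q = 0 \<Longrightarrow> p \<le> q \<longleftrightarrow> p = 0" by (simp add: le_fun_def fun_eq_iff)
  ultimately show ?thesis unfolding inO_def by auto
qed

context k_graph
begin

lemma concat_window:
  assumes l: "l \<in> M" and x: "x \<in> XL L" and slx: "sc l = initial x 0"
    and t: "le_deg t (concat L l x)"
  shows "l \<cdot> initial x (sup t (dg l) - dg l) \<in> M"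
    "dg (l \<cdot> initial x (sup t (dg l) - dg l)) = sup t (dg l)"
proof -
  have tx: "le_deg (sup t (dg l) - dg l) x" using le_deg_concat_tail[OF t] .
  have "sc l = rg (initial x (sup t (dg l) - dg l))" using initial_entry(3)[OF x tx] slx by simp
  then show "l \<cdot> initial x (sup t (dg l) - dg l) \<in> M"
    "dg (l \<cdot> initial x (sup t (dg l) - dg l)) = sup t (dg l)"
    using l initial_entry[OF x tx] by (auto simp: fun_eq_iff sup_fun_def sup_nat_def max_def)
qed

lemma snd_concat:
  assumes l: "l \<in> M" and x: "x \<in> XL L" and slx: "sc l = initial x 0"
    and pqt: "p \<le> q" "q \<le> t" and t: "le_deg t (concat L l x)"
  shows "snd (concat L l x) p q = seg L (l \<cdot> initial x (sup t (dg l) - dg l)) p q"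
proof -
  define Kq Kt where "Kq = sup q (dg l) - dg l" and "Kt = sup t (dg l) - dg l"
  have q: "le_deg q (concat L l x)" using le_deg_mono[OF t pqt(2)] .
  have Kqt: "Kq \<le> Kt" unfolding Kq_def Kt_def using pqt(2) by (rule sup_diff_mono)
  have tx: "le_deg Kt x" unfolding Kt_def using le_deg_concat_tail[OF t] .
  have qx: "le_deg Kq x" using le_deg_mono[OF tx Kqt] .
  note Aq = concat_window[OF l x slx q, folded Kq_def]
  have c: "sc l = rg (initial x Kq)" using initial_entry(3)[OF x qx] slx by simp
  have split: "l \<cdot> initial x Kt = (l \<cdot> initial x Kq) \<cdot> snd x Kq Kt"
    using initial_split[OF x Kqt tx] cmp_assoc[OF l _ _ c src_initial[OF x Kqt tx]]
      initial_entry(1)[OF x qx] path_entry(1)[OF x Kqt tx] by simp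
  have "sc (l \<cdot> initial x Kq) = rg (snd x Kq Kt)"
    using src_initial[OF x Kqt tx] c l initial_entry(1)[OF x qx] by simp
  then have "seg L (l \<cdot> initial x Kt) p q = seg L (l \<cdot> initial x Kq) p q"
    unfolding split using seg_cmp_right[OF Aq(1) path_entry(1)[OF x Kqt tx] _ pqt(1)] Aq(2) by simp
  moreover have "snd (concat L l x) p q = seg L (l \<cdot> initial x Kq) p q"
    using q pqt(1) unfolding Kq_def concat_snd initial_def by (simp add: inO_iff_le_deg)
  ultimately show ?thesis unfolding Kt_def by simp
qed

lemma concat_XL:
  assumes l: "l \<in> M" and x: "x \<in> XL L" and slx: "sc l = initial x 0"
  shows "concat L l x \<in> XL L"
proof (rule XL_I)
  let ?y = "concat L l x" and ?A = "\<lambda>t. l \<cdot> initial x (sup t (dg l) - dg l)"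
  have A: "?A t \<in> M" "t \<le> dg (?A t)" if "le_deg t ?y" for t
    using concat_window[OF l x slx that] by simp_all
  note snd_y = snd_concat[OF l x slx]
  fix p q t
  show "\<not> inO (fst ?y) p q \<Longrightarrow> snd ?y p q = undefined"
    by (simp add: concat_snd)
  show "le_deg p ?y \<Longrightarrow> snd ?y p p \<in> Obj L"
    using seg_diag_Obj[OF A] snd_y[of p p p] by simp
  assume pq: "p \<le> q"
  show "snd ?y p q \<in> M \<and> dg (snd ?y p q) = q - p \<and>
      rg (snd ?y p q) = snd ?y p p \<and> sc (snd ?y p q) = snd ?y q q" if q: "le_deg q ?y"
    using seg_in_Mor[OF A(1)[OF q] pq A(2)[OF q]] deg_seg[OF A(1)[OF q] pq A(2)[OF q]]
      rng_src_seg[OF A(1)[OF q] pq A(2)[OF q]] snd_y[OF pq order_refl q]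
      snd_y[OF order_refl pq q] snd_y[OF order_refl order_refl q] by simp
  assume qt: "q \<le> t" and t: "le_deg t ?y"
  show "snd ?y p q \<cdot> snd ?y q t = snd ?y p t"
    using seg_cmp[OF A(1)[OF t] pq qt A(2)[OF t]] snd_y[OF pq qt t] snd_y[OF qt order_refl t]
      snd_y[OF order_trans[OF pq qt] order_refl t] by simp
qed

lemma initial_concat:
  assumes l: "l \<in> M" and x: "x \<in> XL L" and slx: "sc l = initial x 0"
    and q: "dg l \<le> q" "le_deg (q - dg l) x"
  shows "initial (concat L l x) q = l \<cdot> initial x (q - dg l)"
proof -
  have lq: "le_deg q (concat L l x)" using le_deg_concat[OF q(1)] q(2) by simp
  have sq: "sup q (dg l) = q" using q(1) by (simp add: sup_absorb1)
  have c: "sc l = rg (initial x (q - dg l))" using initial_entry(3)[OF x q(2)] slx by simp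
  have d: "dg (l \<cdot> initial x (q - dg l)) = q" using c l initial_entry[OF x q(2)] q(1)
    by (simp add: fun_eq_iff le_fun_def)
  have "initial (concat L l x) q = seg L (l \<cdot> initial x (q - dg l)) 0 q"
    unfolding initial_def concat_snd using lq sq by (simp add: inO_iff_le_deg initial_def)
  also have "\<dots> = l \<cdot> initial x (q - dg l)"
    using seg_whole[of "l \<cdot> initial x (q - dg l)"] d c l initial_entry(1)[OF x q(2)]
    by simp
  finally show ?thesis .
qed

lemma initial_concat_head:
  assumes l: "l \<in> M" and x: "x \<in> XL L" and slx: "sc l = initial x 0"
  shows "initial (concat L l x) (dg l) = l"
  using initial_concat[OF assms, of "dg l"] slx[symmetric] l by simp

lemma prefix_of_concat:
  assumes l: "l \<in> M" and x: "x \<in> XL L" and slx: "sc l = initial x 0"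
  shows "prefix_of l (concat L l x)"
  unfolding prefix_of_def using initial_concat_head[OF assms] le_deg_concat_head by simp

lemma initial_concat_0:
  assumes l: "l \<in> M" and x: "x \<in> XL L" and slx: "sc l = initial x 0"
  shows "initial (concat L l x) 0 = rg l"
  using initial_entry(3)[OF concat_XL[OF assms] le_deg_concat_head] initial_concat_head[OF assms] by simp

lemma vertex_path_XL: "v \<in> Obj L \<Longrightarrow> vertex_path v \<in> XL L"
  unfolding XL_iff using ObjD[of v] cmp_rng_id[of v]
  by (auto simp: vertex_path_def inO_0)

lemma initial_vertex_path: "initial (vertex_path v) 0 = v"
  by (simp add: vertex_path_def initial_def)

definition path_of :: "'a \<Rightarrow> ('a, 'k) path" where
  "path_of a = concat L a (vertex_path (sc a))"

lemma path_of_XL: "a \<in> M \<Longrightarrow> path_of a \<in> XL L"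
  unfolding path_of_def by (rule concat_XL) (auto simp: vertex_path_XL src_Obj initial_vertex_path)

lemma fst_path_of: "fst (path_of a) = (\<lambda>i. enat (dg a i))"
  unfolding path_of_def concat_fst by (simp add: vertex_path_def)

lemma initial_path_of: "a \<in> M \<Longrightarrow> initial (path_of a) (dg a) = a"
  unfolding path_of_def by (rule initial_concat_head) (auto simp: vertex_path_XL src_Obj initial_vertex_path)

lemma le_deg_path_of: "le_deg q (path_of a) \<longleftrightarrow> q \<le> dg a"
  unfolding le_deg_def fst_path_of by (simp add: le_fun_def)


lemma sigma_concat:
  assumes l: "l \<in> M" and y: "y \<in> XL L" and sly: "sc l = initial y 0"
  shows "sigma (dg l) (concat L l y) = y"
proof -
  define z where "z = concat L l y"
  have z: "z \<in> XL L" unfolding z_def using concat_XL[OF assms] .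
  have lz: "le_deg (dg l) z" unfolding z_def by (rule le_deg_concat_head)
  have sz: "sigma (dg l) z \<in> XL L" using sigma_XL[OF z lz] .
  show ?thesis unfolding z_def[symmetric]
  proof (rule path_eqI[OF sz y])
    show "fst (sigma (dg l) z) = fst y"
      unfolding sigma_fst z_def concat_fst by (simp add: enat_add_minus)
  next
    fix q assume q: "le_deg q (sigma (dg l) z)"
    have lqy: "le_deg q y" using q unfolding le_deg_def sigma_fst z_def concat_fst by (simp add: enat_add_minus)
    have lq: "le_deg (q + dg l) z" using le_deg_sigma[OF lz] q by simp
    have e1: "initial z (q + dg l) = l \<cdot> initial (sigma (dg l) z) q"
      using initial_sigma_split[OF z lz lq] initial_concat_head[OF assms] unfolding z_def by simp
    have "dg l \<le> q + dg l" by (simp add: le_fun_def)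
    moreover have "q + dg l - dg l = q" by (simp add: fun_eq_iff)
    ultimately have e2: "initial z (q + dg l) = l \<cdot> initial y q"
      using initial_concat[OF assms, of "q + dg l"] lqy unfolding z_def by simp
    have "rg (initial (sigma (dg l) z) q) = initial (sigma (dg l) z) 0" using initial_entry(3)[OF sz q] .
    also have "\<dots> = snd z (dg l) (dg l)" using initial_sigma_0[OF lz] .
    also have "\<dots> = sc (initial z (dg l))" using initial_entry(4)[OF z lz] by simp
    also have "\<dots> = sc l" using initial_concat_head[OF assms] unfolding z_def by simp
    finally have c1: "sc l = rg (initial (sigma (dg l) z) q)" by simp
    have c2: "sc l = rg (initial y q)" using initial_entry(3)[OF y lqy] sly by simp
    show "initial (sigma (dg l) z) q = initial y q"
      using cmp_cancel_left[OF l initial_entry(1)[OF sz q] initial_entry(1)[OF y lqy] c1 c2] e1 e2 by simp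
  qed
qed

lemma concat_sigma:
  assumes x: "x \<in> XL L" and p: "prefix_of \<mu> x"
  shows "concat L \<mu> (sigma (dg \<mu>) x) = x"
proof -
  have lm: "le_deg (dg \<mu>) x" and pm: "initial x (dg \<mu>) = \<mu>" using p by (auto simp: prefix_of_def)
  have mM: "\<mu> \<in> M" using prefix_of_Mor[OF x p] .
  define w where "w = sigma (dg \<mu>) x"
  have w: "w \<in> XL L" unfolding w_def using sigma_XL[OF x lm] .
  have sw: "sc \<mu> = initial w 0" unfolding w_def initial_sigma_0[OF lm] using initial_entry(4)[OF x lm] pm by simp
  have c: "concat L \<mu> w \<in> XL L" using concat_XL[OF mM w sw] .
  show ?thesis unfolding w_def[symmetric]
  proof (rule path_eqI_above[OF c x _ le_deg_concat_head])
    show "fst (concat L \<mu> w) = fst x"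
      unfolding concat_fst w_def sigma_fst using lm by (simp add: le_deg_def enat_minus_add)
  next
    fix q assume q: "le_deg q (concat L \<mu> w)" "dg \<mu> \<le> q"
    have e: "q - dg \<mu> + dg \<mu> = q" using q(2) by (simp add: fun_eq_iff le_fun_def)
    have lq: "le_deg (q - dg \<mu>) w" using le_deg_concat[OF q(2)] q(1) by simp
    have lqx: "le_deg q x" using le_deg_sigma[OF lm, of "q - dg \<mu>"] lq e unfolding w_def by simp
    have "initial (concat L \<mu> w) q = \<mu> \<cdot> initial w (q - dg \<mu>)" using initial_concat[OF mM w sw q(2) lq] .
    also have "\<dots> = initial x q" using initial_sigma_split[OF x lm, of "q - dg \<mu>"] e lqx pm unfolding w_def by simp
    finally show "initial (concat L \<mu> w) q = initial x q" .
  qed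
qed

lemma concat_concat:
  assumes a: "a \<in> M" and b: "b \<in> M" and ab: "sc a = rg b" and y: "y \<in> XL L" and sby: "sc b = initial y 0"
  shows "concat L a (concat L b y) = concat L (a \<cdot> b) y"
proof -
  have by': "concat L b y \<in> XL L" using concat_XL[OF b y sby] .
  have c0: "sc a = initial (concat L b y) 0" using initial_concat_0[OF b y sby] ab by simp
  have abM: "a \<cdot> b \<in> M" using a b ab by simp
  have sab: "sc (a \<cdot> b) = initial y 0" using a b ab sby by simp
  have X1: "concat L a (concat L b y) \<in> XL L" using concat_XL[OF a by' c0] .
  have X2: "concat L (a \<cdot> b) y \<in> XL L" using concat_XL[OF abM y sab] .
  have dab: "dg (a \<cdot> b) = dg a + dg b" using a b ab by simp
  have D: "le_deg (dg (a \<cdot> b)) (concat L a (concat L b y))"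
    using le_deg_concat[of L a "dg (a \<cdot> b)" "concat L b y"] le_deg_concat_head[of L b y] dab
    by (simp add: le_fun_def)
  show ?thesis
  proof (rule path_eqI_above[OF X1 X2 _ D])
    show "fst (concat L a (concat L b y)) = fst (concat L (a \<cdot> b) y)"
      unfolding concat_fst dab by (simp add: fun_eq_iff add.assoc)
  next
    fix q assume q: "le_deg q (concat L a (concat L b y))" "dg (a \<cdot> b) \<le> q"
    have qa: "dg a \<le> q" and qb: "dg b \<le> q - dg a"
      using order_trans[of "dg a" "dg a + dg b" q] le_fun_diff[of "dg a" "dg b" q] q(2) dab
      by (simp_all add: le_fun_def)
    have q1: "le_deg (q - dg a) (concat L b y)" using le_deg_concat[OF qa] q(1) by simp
    have q2: "le_deg (q - dg a - dg b) y" using le_deg_concat[OF qb] q1 by simp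
    have e: "q - dg a - dg b = q - dg (a \<cdot> b)" using dab by (simp add: fun_eq_iff)
    have "initial (concat L a (concat L b y)) q = a \<cdot> initial (concat L b y) (q - dg a)"
      using initial_concat[OF a by' c0 qa q1] .
    also have "\<dots> = a \<cdot> (b \<cdot> initial y (q - dg a - dg b))" using initial_concat[OF b y sby qb q2] by simp
    also have "\<dots> = (a \<cdot> b) \<cdot> initial y (q - dg a - dg b)"
      using cmp_assoc[OF a b initial_entry(1)[OF y q2] ab] initial_entry(3)[OF y q2] sby by simp
    also have "\<dots> = initial (concat L (a \<cdot> b) y) q"
      using initial_concat[OF abM y sab q(2)] q2 unfolding e by simp
    finally show "initial (concat L a (concat L b y)) q = initial (concat L (a \<cdot> b) y) q" .
  qed
qed

lemma sigma_sigma: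
  assumes x: "x \<in> XL L" and b: "le_deg b x" and a: "le_deg a (sigma b x)"
  shows "sigma a (sigma b x) = sigma (a + b) x"
proof -
  have ab: "le_deg (a + b) x" using le_deg_sigma[OF b] a by simp
  have X1: "sigma a (sigma b x) \<in> XL L" using sigma_XL[OF sigma_XL[OF x b] a] .
  have X2: "sigma (a + b) x \<in> XL L" using sigma_XL[OF x ab] .
  show ?thesis
  proof (rule path_eqI[OF X1 X2])
    show "fst (sigma a (sigma b x)) = fst (sigma (a + b) x)"
      unfolding sigma_fst by (simp add: enat_minus_minus add.commute)
  next
    fix q assume q: "le_deg q (sigma a (sigma b x))"
    have q1: "le_deg (q + a) (sigma b x)" using le_deg_sigma[OF a] q by simp
    have q2: "le_deg (q + (a + b)) x" using le_deg_sigma[OF b] q1 by (simp add: add.assoc)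
    have q3: "le_deg q (sigma (a + b) x)" using le_deg_sigma[OF ab] q2 by simp
    have "initial (sigma a (sigma b x)) q = snd (sigma b x) a (q + a)" using initial_sigma[OF a q] .
    also have "\<dots> = snd x (a + b) (q + a + b)" using q1 by (simp add: sigma_snd inO_iff_le_deg le_fun_def)
    also have "\<dots> = initial (sigma (a + b) x) q" using initial_sigma[OF ab q3] by (simp add: add.assoc)
    finally show "initial (sigma a (sigma b x)) q = initial (sigma (a + b) x) q" .
  qed
qed

lemma sigma_eq_concat:
  assumes x: "x \<in> XL L" and N: "le_deg N x" and nN: "n \<le> N"
  shows "sigma n x = concat L (snd x n N) (sigma N x)"
proof -
  have ln: "le_deg n x" using le_deg_mono[OF N nN] .
  define w where "w = sigma n x"
  have w: "w \<in> XL L" unfolding w_def using sigma_XL[OF x ln] .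
  have e: "N - n + n = N" using nN by (simp add: fun_eq_iff le_fun_def)
  have lw: "le_deg (N - n) w" unfolding w_def using le_deg_sigma[OF ln] e N by simp
  have pw: "initial w (N - n) = snd x n N" unfolding w_def using initial_sigma[OF ln] lw e unfolding w_def by simp
  have dg: "dg (snd x n N) = N - n" using path_entry(2)[OF x nN N] .
  have prefix_of: "prefix_of (snd x n N) w" unfolding prefix_of_def dg using lw pw by simp
  have "concat L (snd x n N) (sigma (N - n) w) = w" using concat_sigma[OF w prefix_of] dg by simp
  moreover have "sigma (N - n) w = sigma N x" unfolding w_def using sigma_sigma[OF x ln] lw e
    unfolding w_def by simp
  ultimately show ?thesis unfolding w_def by simp
qed

section \<open>The action of \<open>S_\<Lambda>\<close> on paths\<close>

lemma S_iff: "F \<in> S L \<longleftrightarrow> finite F \<and> (\<forall>(l, m)\<in>F. l \<in> M \<and> m \<in> M \<and> sc l = sc m) \<and>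
      (\<forall>p\<in>F. \<forall>q\<in>F. p \<noteq> q \<longrightarrow> Lmin L (fst p) (fst q) = {} \<and> Lmin L (snd p) (snd q) = {})"
  unfolding S_def by auto

lemma S_pairD: "F \<in> S L \<Longrightarrow> (l, m) \<in> F \<Longrightarrow> l \<in> M \<and> m \<in> M \<and> sc l = sc m"
  unfolding S_iff by blast

lemma S_eq_if_snd_aligned: "F \<in> S L \<Longrightarrow> (l, m) \<in> F \<Longrightarrow> (l', m') \<in> F \<Longrightarrow> Lmin L m m' \<noteq> {} \<Longrightarrow> (l, m) = (l', m')"
  unfolding S_iff by force

lemma S_eq_if_fst_aligned: "F \<in> S L \<Longrightarrow> (l, m) \<in> F \<Longrightarrow> (l', m') \<in> F \<Longrightarrow> Lmin L l l' \<noteq> {} \<Longrightarrow> (l, m) = (l', m')"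
  unfolding S_iff by force

lemma empty_in_S: "{} \<in> S L" unfolding S_iff by simp

lemma prefixes_aligned:
  assumes x: "x \<in> XL L" and p: "prefix_of \<mu> x" "prefix_of \<mu>' x"
  shows "Lmin L \<mu> \<mu>' \<noteq> {}"
proof -
  define N where "N = sup (dg \<mu>) (dg \<mu>')"
  have lN: "le_deg N x" unfolding N_def using le_deg_sup[of "dg \<mu>" x "dg \<mu>'"] p unfolding prefix_of_def by blast
  have d1: "dg \<mu> \<le> N" and d2: "dg \<mu>' \<le> N" unfolding N_def by simp_all
  have e1: "initial x N = \<mu> \<cdot> snd x (dg \<mu>) N" using initial_prefix_split[OF x p(1) lN d1] .
  have e2: "initial x N = \<mu>' \<cdot> snd x (dg \<mu>') N" using initial_prefix_split[OF x p(2) lN d2] .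
  have c1: "sc \<mu> = rg (snd x (dg \<mu>) N)" using src_initial[OF x d1 lN] p(1) by (simp add: prefix_of_def)
  have c2: "sc \<mu>' = rg (snd x (dg \<mu>') N)" using src_initial[OF x d2 lN] p(2) by (simp add: prefix_of_def)
  have "\<mu> \<cdot> snd x (dg \<mu>) N = \<mu>' \<cdot> snd x (dg \<mu>') N" using e1 e2 by (rule subst)
  then show ?thesis
    by (rule Lmin_nonempty[OF prefix_of_Mor[OF x p(1)] prefix_of_Mor[OF x p(2)]
          path_entry(1)[OF x d1 lN] path_entry(1)[OF x d2 lN] c1 c2])
qed

lemma DF_unique_pair: "F \<in> S L \<Longrightarrow> x \<in> XL L \<Longrightarrow> (l, m) \<in> F \<Longrightarrow> (l', m') \<in> F \<Longrightarrow> prefix_of m x \<Longrightarrow> prefix_of m' x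
   \<Longrightarrow> (l, m) = (l', m')"
  by (rule S_eq_if_snd_aligned[OF _ _ _ prefixes_aligned])

lemma theta_eq:
  assumes F: "F \<in> S L" and lm: "(l, m) \<in> F" and x: "x \<in> XL L" and p: "prefix_of m x"
  shows "theta L F x = concat L l (sigma (dg m) x)"
proof -
  have "(THE pr. pr \<in> F \<and> (\<forall>i. enat (dg (snd pr) i) \<le> fst x i) \<and> snd x 0 (dg (snd pr)) = snd pr) = (l, m)"
  proof (rule the_equality)
    show "(l, m) \<in> F \<and> (\<forall>i. enat (dg (snd (l, m)) i) \<le> fst x i) \<and> snd x 0 (dg (snd (l, m))) = snd (l, m)"
      using lm p by (simp add: prefix_of_def le_deg_def initial_def)
  next
    fix pr assume "pr \<in> F \<and> (\<forall>i. enat (dg (snd pr) i) \<le> fst x i) \<and> snd x 0 (dg (snd pr)) = snd pr"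
    then have a: "(fst pr, snd pr) \<in> F" "prefix_of (snd pr) x" by (auto simp: prefix_of_def le_deg_def initial_def)
    have "(fst pr, snd pr) = (l, m)" by (rule DF_unique_pair[OF F x a(1) lm a(2) p])
    then show "pr = (l, m)" by simp
  qed
  then show ?thesis unfolding theta_def Let_def by simp
qed

lemma theta_path:
  assumes F: "F \<in> S L" and lm: "(l, m) \<in> F" and x: "x \<in> XL L" and p: "prefix_of m x"
  shows "theta L F x \<in> XL L" "prefix_of l (theta L F x)"
proof -
  have lm': "l \<in> M" "m \<in> M" "sc l = sc m" using S_pairD[OF F lm] by auto
  have lx: "le_deg (dg m) x" using p by (simp add: prefix_of_def)
  have sx: "sigma (dg m) x \<in> XL L" using sigma_XL[OF x lx] .
  have c: "sc l = initial (sigma (dg m) x) 0"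
    using initial_sigma_0[OF lx] initial_entry(4)[OF x lx] p lm' by (simp add: prefix_of_def)
  show "theta L F x \<in> XL L" unfolding theta_eq[OF assms] using concat_XL[OF lm'(1) sx c] .
  show "prefix_of l (theta L F x)" unfolding theta_eq[OF assms] using prefix_of_concat[OF lm'(1) sx c] .
qed

lemma mem_Sstar: "(a, b) \<in> Sstar F \<longleftrightarrow> (b, a) \<in> F"
  unfolding Sstar_def by force

lemma Sstar_Sstar[simp]: "Sstar (Sstar F) = F"
  unfolding Sstar_def by (force simp: image_iff)

lemma Sstar_in_S:
  assumes F: "F \<in> S L" shows "Sstar F \<in> S L"
proof -
  have f: "finite (Sstar F)" using F unfolding S_iff Sstar_def by simp
  have p: "\<forall>(l, m)\<in>Sstar F. l \<in> M \<and> m \<in> M \<and> sc l = sc m"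
    using S_pairD[OF F] by (auto simp: mem_Sstar)
  have d: "\<forall>p\<in>Sstar F. \<forall>q\<in>Sstar F. p \<noteq> q \<longrightarrow> Lmin L (fst p) (fst q) = {} \<and> Lmin L (snd p) (snd q) = {}"
  proof (intro ballI impI)
    fix p q assume a: "p \<in> Sstar F" "q \<in> Sstar F" "p \<noteq> q"
    obtain a1 b1 a2 b2 where pq: "p = (a1, b1)" "q = (a2, b2)" by (cases p, cases q) auto
    have m: "(b1, a1) \<in> F" "(b2, a2) \<in> F" using a pq by (auto simp: mem_Sstar)
    have ne: "(b1, a1) \<noteq> (b2, a2)" using a(3) pq by auto
    have "Lmin L a1 a2 = {}" using S_eq_if_snd_aligned[OF F m] ne by blast
    moreover have "Lmin L b1 b2 = {}" using S_eq_if_fst_aligned[OF F m] ne by blast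
    ultimately show "Lmin L (fst p) (fst q) = {} \<and> Lmin L (snd p) (snd q) = {}" using pq by simp
  qed
  show ?thesis unfolding S_iff using f p d by blast
qed

lemma theta_in_DF_Sstar:
  assumes F: "F \<in> S L" and x: "x \<in> DF L F"
  shows "theta L F x \<in> DF L (Sstar F)"
proof -
  obtain l m where lm: "(l, m) \<in> F" "prefix_of m x" and xX: "x \<in> XL L" using x by (auto simp: DF_iff)
  show ?thesis unfolding DF_iff using theta_path[OF F lm(1) xX lm(2)] lm(1)
    by (auto simp: mem_Sstar)
qed

lemma theta_Sstar_theta:
  assumes F: "F \<in> S L" and x: "x \<in> DF L F"
  shows "theta L (Sstar F) (theta L F x) = x"
proof -
  obtain l m where lm: "(l, m) \<in> F" "prefix_of m x" and xX: "x \<in> XL L" using x by (auto simp: DF_iff)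
  have lm': "l \<in> M" "m \<in> M" "sc l = sc m" using S_pairD[OF F lm(1)] by auto
  have lx: "le_deg (dg m) x" using lm(2) by (simp add: prefix_of_def)
  have sx: "sigma (dg m) x \<in> XL L" using sigma_XL[OF xX lx] .
  have c: "sc l = initial (sigma (dg m) x) 0"
    using initial_sigma_0[OF lx] initial_entry(4)[OF xX lx] lm(2) lm' by (simp add: prefix_of_def)
  have "theta L (Sstar F) (theta L F x) = concat L m (sigma (dg l) (theta L F x))"
    by (rule theta_eq[OF Sstar_in_S[OF F] _ theta_path(1,2)[OF F lm(1) xX lm(2)]]) (simp add: mem_Sstar lm(1))
  also have "\<dots> = concat L m (sigma (dg m) x)"
    unfolding theta_eq[OF F lm(1) xX lm(2)] sigma_concat[OF lm'(1) sx c] ..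
  also have "\<dots> = x" using concat_sigma[OF xX lm(2)] .
  finally show ?thesis .
qed

lemma theta_XL:
  assumes F: "F \<in> S L" and x: "x \<in> DF L F" shows "theta L F x \<in> XL L"
proof -
  obtain l m where lm: "(l, m) \<in> F" "prefix_of m x" and xX: "x \<in> XL L" using x by (auto simp: DF_iff)
  show ?thesis using theta_path(1)[OF F lm(1) xX lm(2)] .
qed

lemma Lmin_cmp_right:
  assumes m: "m \<in> M" and t: "\<tau> \<in> M" and c: "sc m = rg \<tau>"
  shows "Lmin L m (m \<cdot> \<tau>) = {(\<tau>, sc (m \<cdot> \<tau>))}"
proof -
  define \<nu> where "\<nu> = m \<cdot> \<tau>"
  have nM: "\<nu> \<in> M" unfolding \<nu>_def using m t c by simp
  have dn: "dg \<nu> = dg m + dg \<tau>" unfolding \<nu>_def using m t c by simp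
  have sup: "sup (dg m) (dg \<nu>) = dg \<nu>" using dn by (simp add: sup_absorb2 le_fun_def)
  have sn: "sc \<nu> = sc \<tau>" unfolding \<nu>_def using m t c by simp
  show ?thesis unfolding \<nu>_def[symmetric]
  proof (intro equalityI subsetI)
    fix p assume "p \<in> Lmin L m \<nu>"
    then obtain \<alpha> \<beta> where p: "p = (\<alpha>, \<beta>)" "\<alpha> \<in> M" "\<beta> \<in> M" "sc m = rg \<alpha>" "sc \<nu> = rg \<beta>"
      "m \<cdot> \<alpha> = \<nu> \<cdot> \<beta>" "dg (m \<cdot> \<alpha>) = dg \<nu>" by (cases p) (auto simp: mem_Lmin_iff sup)
    have "dg \<nu> + dg \<beta> = dg \<nu>" using p(3,5,6,7) nM by (metis deg_cmp)
    then have "dg \<beta> = 0" by (simp add: fun_eq_iff)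
    then have b: "\<beta> = sc \<nu>" using deg_zero_Obj[OF p(3)] p(5) by simp
    then have "m \<cdot> \<alpha> = m \<cdot> \<tau>" using p(6) nM unfolding \<nu>_def by simp
    then have "\<alpha> = \<tau>" using cmp_cancel_left[OF m p(2) t p(4) c] by simp
    then show "p \<in> {(\<tau>, sc \<nu>)}" using p(1) b by simp
  next
    fix p assume "p \<in> {(\<tau>, sc \<nu>)}"
    then have p: "p = (\<tau>, sc \<nu>)" by simp
    have "\<nu> \<cdot> sc \<nu> = \<nu>" using nM by simp
    then show "p \<in> Lmin L m \<nu>" unfolding p mem_Lmin_iff using m t c nM sup by (simp add: \<nu>_def)
  qed
qed

lemma Sprod_mem: "(a, b) \<in> Sprod L F G \<longleftrightarrow>
   (\<exists>l m \<xi> \<eta> \<alpha> \<beta>. (l, m) \<in> F \<and> (\<xi>, \<eta>) \<in> G \<and> (\<alpha>, \<beta>) \<in> Lmin L m \<xi> \<and> a = l \<cdot> \<alpha> \<and> b = \<eta> \<cdot> \<beta>)"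
  unfolding Sprod_def by force

lemma Sprod_diag:
  assumes F: "F \<in> S L" and lm: "(l, m) \<in> F" and x: "x \<in> XL L" and p: "prefix_of m x"
    and N: "dg m \<le> N" "le_deg N x"
  shows "Sprod L F {(initial x N, initial x N)} = {(l \<cdot> snd x (dg m) N, initial x N)}"
proof -
  define \<nu> where "\<nu> = initial x N"
  define \<tau> where "\<tau> = snd x (dg m) N"
  have mM: "m \<in> M" using prefix_of_Mor[OF x p] .
  have tM: "\<tau> \<in> M" unfolding \<tau>_def using path_entry(1)[OF x N] .
  have c: "sc m = rg \<tau>" unfolding \<tau>_def using src_initial[OF x N] p by (simp add: prefix_of_def)
  have nu: "\<nu> = m \<cdot> \<tau>" unfolding \<nu>_def \<tau>_def using initial_prefix_split[OF x p N(2,1)] .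
  have nM: "\<nu> \<in> M" using nu mM tM c by simp
  have Lm: "Lmin L m \<nu> = {(\<tau>, sc \<nu>)}" unfolding nu using Lmin_cmp_right[OF mM tM c] .
  show ?thesis unfolding \<nu>_def[symmetric] \<tau>_def[symmetric]
  proof (intro equalityI subsetI)
    fix q assume "q \<in> Sprod L F {(\<nu>, \<nu>)}"
    then obtain a b where q: "q = (a, b)" "(a, b) \<in> Sprod L F {(\<nu>, \<nu>)}" by (cases q) auto
    then obtain l1 m1 \<alpha> \<beta> where A: "(l1, m1) \<in> F" "(\<alpha>, \<beta>) \<in> Lmin L m1 \<nu>" "a = l1 \<cdot> \<alpha>" "b = \<nu> \<cdot> \<beta>"
      unfolding Sprod_mem by blast
    have B: "\<alpha> \<in> M" "\<beta> \<in> M" "sc m1 = rg \<alpha>" "sc \<nu> = rg \<beta>" "m1 \<cdot> \<alpha> = \<nu> \<cdot> \<beta>"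
      using A(2) by (auto simp: mem_Lmin_iff)
    have m1M: "m1 \<in> M" using S_pairD[OF F A(1)] by simp
    have sct: "sc \<tau> = rg \<beta>" using B(4) nu mM tM c by simp
    have "m1 \<cdot> \<alpha> = (m \<cdot> \<tau>) \<cdot> \<beta>" using B(5) nu by simp
    also have "\<dots> = m \<cdot> (\<tau> \<cdot> \<beta>)" by (rule cmp_assoc[OF mM tM B(2) c sct])
    finally have e: "m1 \<cdot> \<alpha> = m \<cdot> (\<tau> \<cdot> \<beta>)" .
    have "sc m = rg (\<tau> \<cdot> \<beta>)" using c tM B(2) sct by simp
    then have "Lmin L m1 m \<noteq> {}"
      using Lmin_nonempty[OF m1M mM B(1) _ B(3) _ e] tM B(2) sct by simp
    then have "(l1, m1) = (l, m)" using S_eq_if_snd_aligned[OF F A(1) lm] by simp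
    then have "(\<alpha>, \<beta>) = (\<tau>, sc \<nu>)" using A(2) Lm by simp
    then show "q \<in> {(l \<cdot> \<tau>, \<nu>)}" using q A \<open>(l1, m1) = (l, m)\<close> nM by simp
  next
    fix q assume "q \<in> {(l \<cdot> \<tau>, \<nu>)}"
    then have q: "q = (l \<cdot> \<tau>, \<nu> \<cdot> sc \<nu>)" using nM by simp
    have "(\<tau>, sc \<nu>) \<in> Lmin L m \<nu>" using Lm by simp
    then show "q \<in> Sprod L F {(\<nu>, \<nu>)}" unfolding q using lm
      by (subst Sprod_mem) blast
  qed
qed

lemma theta_eq_concat_seg:
  assumes F: "F \<in> S L" and lm: "(l, m) \<in> F" and y: "y \<in> XL L" and p: "prefix_of m y"
    and N: "dg m \<le> N" "le_deg N y"
  shows "theta L F y = concat L (l \<cdot> snd y (dg m) N) (sigma N y)"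
proof -
  have lm': "l \<in> M" "m \<in> M" "sc l = sc m" using S_pairD[OF F lm] by auto
  have tM: "snd y (dg m) N \<in> M" using path_entry(1)[OF y N] .
  have c: "sc l = rg (snd y (dg m) N)" using src_initial[OF y N] p lm' by (simp add: prefix_of_def)
  have sN: "sigma N y \<in> XL L" using sigma_XL[OF y N(2)] .
  have c2: "sc (snd y (dg m) N) = initial (sigma N y) 0" using path_entry(4)[OF y N] initial_sigma_0[OF N(2)] by simp
  have "theta L F y = concat L l (sigma (dg m) y)" using theta_eq[OF F lm y p] .
  also have "\<dots> = concat L l (concat L (snd y (dg m) N) (sigma N y))" using sigma_eq_concat[OF y N(2,1)] by simp
  also have "\<dots> = concat L (l \<cdot> snd y (dg m) N) (sigma N y)" using concat_concat[OF lm'(1) tM c sN c2] .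
  finally show ?thesis .
qed

lemma prefix_of_cylinder:
  assumes x: "x \<in> XL L" and y: "y \<in> XL L" and p: "prefix_of m x" and N: "dg m \<le> N" "le_deg N x" "le_deg N y"
    and e: "initial y N = initial x N"
  shows "prefix_of m y" "snd y (dg m) N = snd x (dg m) N"
proof -
  have "initial y (dg m) = initial x (dg m)" using initial_agree[OF y x N(3,2) e N(1)] .
  then show py: "prefix_of m y" using p le_deg_mono[OF N(3,1)] by (simp add: prefix_of_def)
  have "m \<cdot> snd y (dg m) N = m \<cdot> snd x (dg m) N"
    using initial_prefix_split[OF y py N(3,1)] initial_prefix_split[OF x p N(2,1)] e by simp
  then show "snd y (dg m) N = snd x (dg m) N"
    using cmp_cancel_left[OF prefix_of_Mor[OF x p] path_entry(1)[OF y N(1,3)] path_entry(1)[OF x N(1,2)]]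
      src_initial[OF y N(1,3)] src_initial[OF x N(1,2)] p py by (simp add: prefix_of_def)
qed

lemma concat_inj:
  assumes A: "A \<in> M" "A' \<in> M" and z: "z \<in> XL L" "\<forall>i. fst z i \<noteq> \<infinity>"
    and c: "sc A = initial z 0" "sc A' = initial z 0" and e: "concat L A z = concat L A' z"
  shows "A = A'"
proof -
  have "dg A = dg A'"
  proof
    fix i
    have "enat (dg A i) + fst z i = enat (dg A' i) + fst z i" using arg_cong[OF e, of fst]
      unfolding concat_fst by (simp add: fun_eq_iff)
    then show "dg A i = dg A' i" using z(2)[rule_format, of i] by (cases "fst z i") auto
  qed
  then have "initial (concat L A z) (dg A) = initial (concat L A' z) (dg A')" using e by simp
  then show ?thesis unfolding initial_concat_head[OF A(1) z(1) c(1)] initial_concat_head[OF A(2) z(1) c(2)] .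
qed

lemma cmp_path_eq_restrict:
  assumes x: "x \<in> XL L" and p: "prefix_of m x" and p2: "prefix_of m' x"
    and l: "l \<in> M" "sc l = sc m" and l': "l' \<in> M" "sc l' = sc m'"
    and N: "dg m \<le> N" "dg m' \<le> N" "N \<le> N'" "le_deg N' x"
    and e: "l \<cdot> snd x (dg m) N' = l' \<cdot> snd x (dg m') N'"
  shows "l \<cdot> snd x (dg m) N = l' \<cdot> snd x (dg m') N"
proof -
  have lN: "le_deg N x" using le_deg_mono[OF N(4,3)] .
  have nM: "snd x N N' \<in> M" using path_entry(1)[OF x N(3,4)] .
  have u1: "snd x (dg m) N \<in> M" "sc (snd x (dg m) N) = rg (snd x N N')" "sc l = rg (snd x (dg m) N)"
    using path_entry[OF x N(1) lN] path_entry[OF x N(3,4)] src_initial[OF x N(1) lN] p l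
    by (auto simp: prefix_of_def)
  have u2: "snd x (dg m') N \<in> M" "sc (snd x (dg m') N) = rg (snd x N N')" "sc l' = rg (snd x (dg m') N)"
    using path_entry[OF x N(2) lN] path_entry[OF x N(3,4)] src_initial[OF x N(2) lN] p2 l'
    by (auto simp: prefix_of_def)
  have "(l \<cdot> snd x (dg m) N) \<cdot> snd x N N' = (l' \<cdot> snd x (dg m') N) \<cdot> snd x N N'"
    using e path_cmp[OF x N(1,3,4)] path_cmp[OF x N(2,3,4)]
      cmp_assoc[OF l(1) u1(1) nM u1(3) u1(2)] cmp_assoc[OF l'(1) u2(1) nM u2(3) u2(2)] by simp
  then show ?thesis
    using cmp_cancel_right[OF _ _ nM] u1 u2 l l' by simp
qed

lemma deg_Lmin_fst: "(\<alpha>, \<beta>) \<in> Lmin L m \<xi> \<Longrightarrow> m \<in> M \<Longrightarrow> dg \<alpha> = sup (dg m) (dg \<xi>) - dg m"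
proof -
  assume a: "(\<alpha>, \<beta>) \<in> Lmin L m \<xi>" "m \<in> M"
  then have "dg (m \<cdot> \<alpha>) = sup (dg m) (dg \<xi>)" "\<alpha> \<in> M" "sc m = rg \<alpha>" unfolding mem_Lmin_iff by auto
  then have "dg m + dg \<alpha> = sup (dg m) (dg \<xi>)" using a(2) by simp
  then show ?thesis by (metis add_diff_cancel_left')
qed

lemma Lmin_extension:
  assumes "(\<gamma>, \<gamma>') \<in> Lmin L (a \<cdot> b) (c \<cdot> d)" "a \<in> M" "b \<in> M" "c \<in> M" "d \<in> M" "sc a = rg b" "sc c = rg d"
  shows "Lmin L a c \<noteq> {}" "b \<cdot> \<gamma> \<in> M" "d \<cdot> \<gamma>' \<in> M" "a \<cdot> (b \<cdot> \<gamma>) = c \<cdot> (d \<cdot> \<gamma>')"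
    "sc b = rg \<gamma>" "sc d = rg \<gamma>'" "\<gamma> \<in> M" "\<gamma>' \<in> M"
proof -
  have g: "\<gamma> \<in> M" "\<gamma>' \<in> M" "sc (a \<cdot> b) = rg \<gamma>" "sc (c \<cdot> d) = rg \<gamma>'" "(a \<cdot> b) \<cdot> \<gamma> = (c \<cdot> d) \<cdot> \<gamma>'"
    using assms(1) by (auto simp: mem_Lmin_iff)
  show s1: "sc b = rg \<gamma>" and s2: "sc d = rg \<gamma>'" using g assms by auto
  show "b \<cdot> \<gamma> \<in> M" "d \<cdot> \<gamma>' \<in> M" "\<gamma> \<in> M" "\<gamma>' \<in> M" using g assms s1 s2 by auto
  show e: "a \<cdot> (b \<cdot> \<gamma>) = c \<cdot> (d \<cdot> \<gamma>')"
    using g(5) cmp_assoc[OF assms(2,3) g(1) assms(6) s1] cmp_assoc[OF assms(4,5) g(2) assms(7) s2] by simp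
  show "Lmin L a c \<noteq> {}"
    by (rule Lmin_nonempty[OF assms(2,4) _ _ _ _ e]) (use assms g s1 s2 in auto)
qed

lemma Lmin_swap: "(\<alpha>, \<beta>) \<in> Lmin L l m \<longleftrightarrow> (\<beta>, \<alpha>) \<in> Lmin L m l"
  unfolding mem_Lmin_iff by (auto simp: sup_commute)

lemma Sstar_Sprod: "Sstar (Sprod L F G) = Sprod L (Sstar G) (Sstar F)"
proof (rule set_eqI)
  fix p :: "'a \<times> 'a"
  obtain a b where p: "p = (a, b)" by (cases p)
  have "(b, a) \<in> Sprod L F G \<longleftrightarrow> (a, b) \<in> Sprod L (Sstar G) (Sstar F)"
    unfolding Sprod_mem mem_Sstar by (blast intro: Lmin_swap[THEN iffD1])
  then show "p \<in> Sstar (Sprod L F G) \<longleftrightarrow> p \<in> Sprod L (Sstar G) (Sstar F)"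
    unfolding p mem_Sstar .
qed

lemma Sprod_fst_aligned_eq:
  assumes F: "F \<in> S L" and G: "G \<in> S L" and pq: "p \<in> Sprod L F G" "q \<in> Sprod L F G"
    and aligned: "Lmin L (fst p) (fst q) \<noteq> {}"
  shows "p = q"
proof -
  obtain l1 m1 \<xi>1 \<eta>1 \<alpha>1 \<beta>1 where A1: "(l1, m1) \<in> F" "(\<xi>1, \<eta>1) \<in> G" "(\<alpha>1, \<beta>1) \<in> Lmin L m1 \<xi>1"
    "p = (l1 \<cdot> \<alpha>1, \<eta>1 \<cdot> \<beta>1)" using pq(1) by (cases p) (force simp: Sprod_mem)
  obtain l2 m2 \<xi>2 \<eta>2 \<alpha>2 \<beta>2 where A2: "(l2, m2) \<in> F" "(\<xi>2, \<eta>2) \<in> G" "(\<alpha>2, \<beta>2) \<in> Lmin L m2 \<xi>2"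
    "q = (l2 \<cdot> \<alpha>2, \<eta>2 \<cdot> \<beta>2)" using pq(2) by (cases q) (force simp: Sprod_mem)
  have P1: "l1 \<in> M" "m1 \<in> M" "sc l1 = sc m1" and P2: "l2 \<in> M" "m2 \<in> M" "sc l2 = sc m2"
    using S_pairD[OF F A1(1)] S_pairD[OF F A2(1)] by auto
  have Q1: "\<xi>1 \<in> M" "\<eta>1 \<in> M" "sc \<xi>1 = sc \<eta>1" and Q2: "\<xi>2 \<in> M" "\<eta>2 \<in> M" "sc \<xi>2 = sc \<eta>2"
    using S_pairD[OF G A1(2)] S_pairD[OF G A2(2)] by auto
  have B1: "\<alpha>1 \<in> M" "\<beta>1 \<in> M" "sc m1 = rg \<alpha>1" "sc \<xi>1 = rg \<beta>1" "m1 \<cdot> \<alpha>1 = \<xi>1 \<cdot> \<beta>1"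
    and B2: "\<alpha>2 \<in> M" "\<beta>2 \<in> M" "sc m2 = rg \<alpha>2" "sc \<xi>2 = rg \<beta>2" "m2 \<cdot> \<alpha>2 = \<xi>2 \<cdot> \<beta>2"
    using A1(3) A2(3) by (auto simp: mem_Lmin_iff)
  obtain \<gamma> \<gamma>' where g: "(\<gamma>, \<gamma>') \<in> Lmin L (l1 \<cdot> \<alpha>1) (l2 \<cdot> \<alpha>2)" using aligned A1(4) A2(4) by auto
  have s: "sc l1 = rg \<alpha>1" "sc l2 = rg \<alpha>2" using P1 P2 B1 B2 by simp_all
  note E = Lmin_extension[OF g P1(1) B1(1) P2(1) B2(1) s] P1 P2 B1 B2
  have lm: "l1 = l2" "m1 = m2" using S_eq_if_fst_aligned[OF F A1(1) A2(1) E(1)] by auto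
  have e1: "\<alpha>1 \<cdot> \<gamma> = \<alpha>2 \<cdot> \<gamma>'" using cmp_cancel_left[OF P1(1) E(2) E(3)] E(4) E lm by simp
  have "m1 \<cdot> (\<alpha>1 \<cdot> \<gamma>) = m1 \<cdot> (\<alpha>2 \<cdot> \<gamma>')" using e1 by simp
  then have "(m1 \<cdot> \<alpha>1) \<cdot> \<gamma> = (m2 \<cdot> \<alpha>2) \<cdot> \<gamma>'"
    using cmp_assoc[OF P1(2) B1(1) E(7) B1(3) E(5)] cmp_assoc[OF P2(2) B2(1) E(8) B2(3) E(6)] lm by simp
  then have e2: "(\<xi>1 \<cdot> \<beta>1) \<cdot> \<gamma> = (\<xi>2 \<cdot> \<beta>2) \<cdot> \<gamma>'" using B1(5) B2(5) by simp
  have "sc (\<xi>1 \<cdot> \<beta>1) = sc \<alpha>1" "sc (\<xi>2 \<cdot> \<beta>2) = sc \<alpha>2"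
    using B1(5) B2(5) src_cmp[OF P1(2) B1(1) B1(3)] src_cmp[OF P2(2) B2(1) B2(3)] by simp_all
  then have "Lmin L (\<xi>1 \<cdot> \<beta>1) (\<xi>2 \<cdot> \<beta>2) \<noteq> {}"
    using Lmin_nonempty[OF _ _ E(7,8) _ _ e2] E(5,6) B1 B2 Q1 Q2 by simp
  then obtain \<delta> \<delta>' where "(\<delta>, \<delta>') \<in> Lmin L (\<xi>1 \<cdot> \<beta>1) (\<xi>2 \<cdot> \<beta>2)" by auto
  then have "Lmin L \<xi>1 \<xi>2 \<noteq> {}" using Lmin_extension(1) Q1 Q2 B1 B2 by blast
  then have xe: "\<xi>1 = \<xi>2" "\<eta>1 = \<eta>2" using S_eq_if_fst_aligned[OF G A1(2) A2(2)] by auto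
  have "dg \<alpha>1 = dg \<alpha>2" using deg_Lmin_fst[OF A1(3) P1(2)] deg_Lmin_fst[OF A2(3) P2(2)] lm xe by simp
  then have a12: "\<alpha>1 = \<alpha>2" using factorisation_unique[OF B1(1) E(7) B2(1) E(8) E(5) E(6) e1] by simp
  then have "\<xi>1 \<cdot> \<beta>1 = \<xi>1 \<cdot> \<beta>2" using B1(5) B2(5) lm xe by simp
  then have "\<beta>1 = \<beta>2" using cmp_cancel_left[OF Q1(1) B1(2) B2(2) B1(4)] B2(4) xe by simp
  then show "p = q" using A1(4) A2(4) lm xe a12 by simp
qed

lemma Sprod_in_S:
  assumes fa: "finitely_aligned L" and F: "F \<in> S L" and G: "G \<in> S L"
  shows "Sprod L F G \<in> S L"
proof -
  have "finite {(fst p \<cdot> \<alpha>, snd q \<cdot> \<beta>) | \<alpha> \<beta>. (\<alpha>, \<beta>) \<in> Lmin L (snd p) (fst q)}"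
    if "p \<in> F" "q \<in> G" for p q
  proof -
    have "finite (Lmin L (snd p) (fst q))"
      using fa S_pairD[OF F, of "fst p" "snd p"] S_pairD[OF G, of "fst q" "snd q"] that
      by (simp add: finitely_aligned_def)
    moreover have "{(fst p \<cdot> \<alpha>, snd q \<cdot> \<beta>) | \<alpha> \<beta>. (\<alpha>, \<beta>) \<in> Lmin L (snd p) (fst q)} =
        (\<lambda>(\<alpha>, \<beta>). (fst p \<cdot> \<alpha>, snd q \<cdot> \<beta>)) ` Lmin L (snd p) (fst q)" by force
    ultimately show ?thesis by simp
  qed
  moreover have "finite F" "finite G" using F G by (simp_all add: S_def)
  ultimately have fin: "finite (Sprod L F G)"
    unfolding Sprod_def by (intro finite_UN_I) auto
  have pairs: "\<forall>(a, b)\<in>Sprod L F G. a \<in> M \<and> b \<in> M \<and> sc a = sc b"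
  proof (intro ballI, clarify)
    fix a b assume "(a, b) \<in> Sprod L F G"
    then obtain l m \<xi> \<eta> \<alpha> \<beta> where A: "(l, m) \<in> F" "(\<xi>, \<eta>) \<in> G" "(\<alpha>, \<beta>) \<in> Lmin L m \<xi>" "a = l \<cdot> \<alpha>" "b = \<eta> \<cdot> \<beta>"
      unfolding Sprod_mem by blast
    have p1: "l \<in> M" "m \<in> M" "sc l = sc m" using S_pairD[OF F A(1)] by auto
    have p2: "\<xi> \<in> M" "\<eta> \<in> M" "sc \<xi> = sc \<eta>" using S_pairD[OF G A(2)] by auto
    have B: "\<alpha> \<in> M" "\<beta> \<in> M" "sc m = rg \<alpha>" "sc \<xi> = rg \<beta>" "m \<cdot> \<alpha> = \<xi> \<cdot> \<beta>" using A(3) by (auto simp: mem_Lmin_iff)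
    have "sc (m \<cdot> \<alpha>) = sc (\<xi> \<cdot> \<beta>)" using B(5) by simp
    then have "sc \<alpha> = sc \<beta>" by (metis src_cmp p1(2) B(1,3) p2(1) B(2,4))
    then show "a \<in> M \<and> b \<in> M \<and> sc a = sc b" using A(4,5) p1 p2 B by simp
  qed
  have snd_aligned: "p = q"
    if "p \<in> Sprod L F G" "q \<in> Sprod L F G" "Lmin L (snd p) (snd q) \<noteq> {}" for p q
  proof -
    obtain a b c d where pq: "p = (a, b)" "q = (c, d)" by (cases p, cases q)
    then have "(b, a) \<in> Sstar (Sprod L F G)" "(d, c) \<in> Sstar (Sprod L F G)"
      using that(1,2) by (simp_all add: mem_Sstar)
    then have "(b, a) \<in> Sprod L (Sstar G) (Sstar F)" "(d, c) \<in> Sprod L (Sstar G) (Sstar F)"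
      unfolding Sstar_Sprod .
    then have "(b, a) = (d, c)"
      by (rule Sprod_fst_aligned_eq[OF Sstar_in_S[OF G] Sstar_in_S[OF F]]) (use that(3) pq in simp)
    then show "p = q" using pq by simp
  qed
  have dist: "\<forall>p\<in>Sprod L F G. \<forall>q\<in>Sprod L F G. p \<noteq> q \<longrightarrow>
      Lmin L (fst p) (fst q) = {} \<and> Lmin L (snd p) (snd q) = {}"
    using snd_aligned Sprod_fst_aligned_eq[OF F G] by blast
  show ?thesis
    unfolding S_iff by (intro conjI fin pairs dist)
qed

lemma DF_SprodD:
  assumes fa: "finitely_aligned L" and F: "F \<in> S L" and G: "G \<in> S L" and x: "x \<in> DF L (Sprod L F G)"
  shows "x \<in> DF L G" "theta L G x \<in> DF L F" "theta L (Sprod L F G) x = theta L F (theta L G x)"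
proof -
  have X: "x \<in> XL L" using x by (simp add: DF_iff)
  obtain a b where ab: "(a, b) \<in> Sprod L F G" "prefix_of b x" using x by (auto simp: DF_iff)
  then obtain l m \<xi> \<eta> \<alpha> \<beta> where A: "(l, m) \<in> F" "(\<xi>, \<eta>) \<in> G" "(\<alpha>, \<beta>) \<in> Lmin L m \<xi>"
    "a = l \<cdot> \<alpha>" "b = \<eta> \<cdot> \<beta>" unfolding Sprod_mem by blast
  have P: "l \<in> M" "m \<in> M" "sc l = sc m" using S_pairD[OF F A(1)] by auto
  have Q: "\<xi> \<in> M" "\<eta> \<in> M" "sc \<xi> = sc \<eta>" using S_pairD[OF G A(2)] by auto
  have B: "\<alpha> \<in> M" "\<beta> \<in> M" "sc m = rg \<alpha>" "sc \<xi> = rg \<beta>" "m \<cdot> \<alpha> = \<xi> \<cdot> \<beta>"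
    using A(3) by (auto simp: mem_Lmin_iff)
  have sb: "sc \<eta> = rg \<beta>" using B Q by simp
  define N where "N = dg \<eta> + dg \<beta>"
  have lN: "le_deg N x" and pb: "initial x N = \<eta> \<cdot> \<beta>"
    using ab(2) A(5) Q B(2) sb unfolding N_def prefix_of_def by auto
  have pe: "prefix_of \<eta> x" using prefix_of_initial_factor[OF X lN pb Q(2) B(2) sb] .
  show xG: "x \<in> DF L G" using X A(2) pe by (auto simp: DF_iff)
  have eN: "dg \<eta> \<le> N" unfolding N_def by (simp add: le_fun_def)
  have "\<eta> \<cdot> snd x (dg \<eta>) N = \<eta> \<cdot> \<beta>" using initial_prefix_split[OF X pe lN eN] pb by simp
  then have x\<beta>: "snd x (dg \<eta>) N = \<beta>"
    using cmp_cancel_left[OF Q(2) path_entry(1)[OF X eN lN] B(2) _ sb] src_initial[OF X eN lN] pe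
    by (simp add: prefix_of_def)
  define z where "z = sigma N x"
  have z: "z \<in> XL L" unfolding z_def using sigma_XL[OF X lN] .
  have bz: "sc \<beta> = initial z 0"
    unfolding z_def initial_sigma_0[OF lN] using path_entry(4)[OF X eN lN] x\<beta> by simp
  have sa: "sc \<alpha> = sc \<beta>" by (metis src_cmp P(2) B(1,3) Q(1) B(2,4) B(5))
  have az: "sc \<alpha> = initial z 0" using sa bz by simp
  have "theta L G x = concat L \<xi> (sigma (dg \<eta>) x)" using theta_eq[OF G A(2) X pe] .
  also have "\<dots> = concat L \<xi> (concat L \<beta> z)" unfolding z_def using sigma_eq_concat[OF X lN eN] x\<beta> by simp
  also have "\<dots> = concat L (\<xi> \<cdot> \<beta>) z" using concat_concat[OF Q(1) B(2) B(4) z bz] .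
  also have "\<dots> = concat L (m \<cdot> \<alpha>) z" using B(5) by simp
  also have "\<dots> = concat L m (concat L \<alpha> z)" using concat_concat[OF P(2) B(1) B(3) z az] by simp
  finally have ty2: "theta L G x = concat L m (concat L \<alpha> z)" .
  have az2: "concat L \<alpha> z \<in> XL L" using concat_XL[OF B(1) z az] .
  have maz: "sc m = initial (concat L \<alpha> z) 0" using initial_concat_0[OF B(1) z az] B(3) by simp
  have pfm: "prefix_of m (theta L G x)" unfolding ty2 using prefix_of_concat[OF P(2) az2 maz] .
  have tX: "theta L G x \<in> XL L" using theta_XL[OF G xG] .
  show "theta L G x \<in> DF L F" using tX A(1) pfm by (auto simp: DF_iff)
  have "theta L F (theta L G x) = concat L l (sigma (dg m) (theta L G x))" using theta_eq[OF F A(1) tX pfm] .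
  also have "\<dots> = concat L l (concat L \<alpha> z)" unfolding ty2 using sigma_concat[OF P(2) az2 maz] by simp
  also have "\<dots> = concat L (l \<cdot> \<alpha>) z" using concat_concat[OF P(1) B(1) _ z az] P B by simp
  finally have e1: "theta L F (theta L G x) = concat L (l \<cdot> \<alpha>) z" .
  have "theta L (Sprod L F G) x = concat L a (sigma (dg b) x)"
    using theta_eq[OF Sprod_in_S[OF fa F G] ab(1) X ab(2)] .
  then show "theta L (Sprod L F G) x = theta L F (theta L G x)"
    using e1 A(4,5) Q B sb unfolding z_def N_def by (simp add: add.commute)
qed

lemma DF_SprodI:
  assumes F: "F \<in> S L" and G: "G \<in> S L" and xG: "x \<in> DF L G" and tF: "theta L G x \<in> DF L F"
  shows "x \<in> DF L (Sprod L F G)"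
proof -
  have X: "x \<in> XL L" using xG by (simp add: DF_iff)
  obtain \<xi> \<eta> where A2: "(\<xi>, \<eta>) \<in> G" "prefix_of \<eta> x" using xG by (auto simp: DF_iff)
  obtain l m where A1: "(l, m) \<in> F" "prefix_of m (theta L G x)" using tF by (auto simp: DF_iff)
  have P: "l \<in> M" "m \<in> M" "sc l = sc m" using S_pairD[OF F A1(1)] by auto
  have Q: "\<xi> \<in> M" "\<eta> \<in> M" "sc \<xi> = sc \<eta>" using S_pairD[OF G A2(1)] by auto
  define y where "y = theta L G x"
  have Y: "y \<in> XL L" unfolding y_def using theta_XL[OF G xG] .
  have pxi: "prefix_of \<xi> y" unfolding y_def using theta_path(2)[OF G A2(1) X A2(2)] .
  have pm: "prefix_of m y" using A1(2) unfolding y_def .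
  define N where "N = sup (dg m) (dg \<xi>)"
  have lN: "le_deg N y" unfolding N_def using le_deg_sup[of "dg m" y "dg \<xi>"] pm pxi unfolding prefix_of_def by blast
  have N: "dg m \<le> N" "dg \<xi> \<le> N" unfolding N_def by simp_all
  have le: "le_deg (dg \<eta>) x" using A2(2) by (simp add: prefix_of_def)
  define w where "w = sigma (dg \<eta>) x"
  have w: "w \<in> XL L" unfolding w_def using sigma_XL[OF X le] .
  have yw: "y = concat L \<xi> w" unfolding y_def w_def using theta_eq[OF G A2(1) X A2(2)] .
  have sxw: "sc \<xi> = initial w 0" unfolding w_def using initial_sigma_0[OF le] initial_entry(4)[OF X le] A2(2) Q
    by (simp add: prefix_of_def)
  have lNw: "le_deg (N - dg \<xi>) w" using le_deg_concat[OF N(2)] lN unfolding yw by simp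
  define \<alpha> where "\<alpha> = snd y (dg m) N"
  define \<beta> where "\<beta> = initial w (N - dg \<xi>)"
  have e1: "initial y N = m \<cdot> \<alpha>" unfolding \<alpha>_def using initial_prefix_split[OF Y pm lN N(1)] .
  have e2: "initial y N = \<xi> \<cdot> \<beta>" unfolding \<beta>_def yw using initial_concat[OF Q(1) w sxw N(2) lNw] .
  have aM: "\<alpha> \<in> M" "sc m = rg \<alpha>" unfolding \<alpha>_def using path_entry(1)[OF Y N(1) lN]
      src_initial[OF Y N(1) lN] pm by (auto simp: prefix_of_def)
  have bM: "\<beta> \<in> M" "sc \<xi> = rg \<beta>" unfolding \<beta>_def using initial_entry(1,3)[OF w lNw] sxw by auto
  have "dg (m \<cdot> \<alpha>) = N" using e1[symmetric] initial_entry(2)[OF Y lN] by simp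
  then have dma: "dg (m \<cdot> \<alpha>) = sup (dg m) (dg \<xi>)" using N_def by simp
  have eq: "m \<cdot> \<alpha> = \<xi> \<cdot> \<beta>" using e1 e2 by simp
  have Lm: "(\<alpha>, \<beta>) \<in> Lmin L m \<xi>" unfolding mem_Lmin_iff using aM bM eq P Q dma by blast
  have mem: "(l \<cdot> \<alpha>, \<eta> \<cdot> \<beta>) \<in> Sprod L F G" unfolding Sprod_mem using A1(1) A2(1) Lm by blast
  have lx: "le_deg (N - dg \<xi> + dg \<eta>) x" using le_deg_sigma[OF le] lNw unfolding w_def by simp
  have px: "initial x (N - dg \<xi> + dg \<eta>) = \<eta> \<cdot> \<beta>" unfolding \<beta>_def w_def
    using initial_sigma_split[OF X le lx] A2(2) by (simp add: prefix_of_def)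
  have sb: "sc \<eta> = rg \<beta>" using bM Q by simp
  have "dg \<beta> = N - dg \<xi>" unfolding \<beta>_def using initial_entry(2)[OF w lNw] .
  then have dgb: "dg (\<eta> \<cdot> \<beta>) = N - dg \<xi> + dg \<eta>" using Q(2) bM(1) sb by (simp add: add.commute)
  have "prefix_of (\<eta> \<cdot> \<beta>) x" unfolding prefix_of_def dgb using lx px by simp
  then show ?thesis using X mem by (auto simp: DF_iff)
qed

lemma DF_Sprod:
  assumes fa: "finitely_aligned L" and F: "F \<in> S L" and G: "G \<in> S L"
  shows "x \<in> DF L (Sprod L F G) \<longleftrightarrow> x \<in> DF L G \<and> theta L G x \<in> DF L F"
  using DF_SprodD[OF fa F G] DF_SprodI[OF F G] by blast

lemma theta_Sprod:
  assumes fa: "finitely_aligned L" and F: "F \<in> S L" and G: "G \<in> S L" and x: "x \<in> DF L (Sprod L F G)"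
  shows "theta L (Sprod L F G) x = theta L F (theta L G x)"
  using DF_SprodD[OF fa F G x] by blast

lemma initial_theta:
  assumes F: "F \<in> S L" and lm: "(l, m) \<in> F" and y: "y \<in> XL L" and py: "prefix_of m y"
    and K: "dg l \<le> K" "le_deg (K - dg l + dg m) y"
  shows "le_deg K (theta L F y)" "initial (theta L F y) K = l \<cdot> snd y (dg m) (K - dg l + dg m)"
proof -
  have P: "l \<in> M" "sc l = sc m" using S_pairD[OF F lm] by auto
  have lmy: "le_deg (dg m) y" using py by (simp add: prefix_of_def)
  have ty: "theta L F y = concat L l (sigma (dg m) y)" using theta_eq[OF F lm y py] .
  have lwy: "le_deg (K - dg l) (sigma (dg m) y)" using le_deg_sigma[OF lmy] K(2) by simp
  have c: "sc l = initial (sigma (dg m) y) 0" using initial_sigma_0[OF lmy] initial_entry(4)[OF y lmy] py P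
    by (simp add: prefix_of_def)
  show "le_deg K (theta L F y)" unfolding ty using le_deg_concat[OF K(1)] lwy by simp
  have "initial (theta L F y) K = l \<cdot> initial (sigma (dg m) y) (K - dg l)"
    unfolding ty using initial_concat[OF P(1) sigma_XL[OF y lmy] c K(1) lwy] .
  then show "initial (theta L F y) K = l \<cdot> snd y (dg m) (K - dg l + dg m)"
    using initial_sigma[OF lmy lwy] by simp
qed

lemma theta_cylinder:
  assumes F: "F \<in> S L" and x: "x \<in> DF L F" and K: "le_deg K (theta L F x)"
  shows "\<exists>n. le_deg n x \<and> (\<forall>y. y \<in> XL L \<and> le_deg n y \<and> initial y n = initial x n \<longrightarrow>
           y \<in> DF L F \<and> le_deg K (theta L F y) \<and> initial (theta L F y) K = initial (theta L F x) K)"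
proof -
  have X: "x \<in> XL L" using x by (simp add: DF_iff)
  obtain l m where lm: "(l, m) \<in> F" "prefix_of m x" using x by (auto simp: DF_iff)
  have lmx: "le_deg (dg m) x" using lm(2) by (simp add: prefix_of_def)
  define K' where "K' = sup K (dg l)"
  have lK': "le_deg K' (theta L F x)" unfolding K'_def
    using le_deg_sup[of K "theta L F x" "dg l"] K theta_path(2)[OF F lm(1) X lm(2)] unfolding prefix_of_def by blast
  have KK: "K \<le> K'" "dg l \<le> K'" unfolding K'_def by simp_all
  define n where "n = K' - dg l + dg m"
  have ln: "le_deg n x" unfolding n_def
    using le_deg_sigma[OF lmx] le_deg_concat[OF KK(2)] lK' theta_eq[OF F lm(1) X lm(2)] by simp
  have mn: "dg m \<le> n" unfolding n_def by (simp add: le_fun_def)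
  note kx = initial_theta[OF F lm(1) X lm(2) KK(2) ln[unfolded n_def], folded n_def]
  show ?thesis
  proof (intro exI[of _ n] conjI allI impI)
    show "le_deg n x" using ln .
    fix y assume a: "y \<in> XL L \<and> le_deg n y \<and> initial y n = initial x n"
    have py: "prefix_of m y" "snd y (dg m) n = snd x (dg m) n" using prefix_of_cylinder[OF X _ lm(2) mn ln] a by auto
    have yDF: "y \<in> DF L F" using a py lm(1) by (auto simp: DF_iff)
    then show "y \<in> DF L F" .
    note ky = initial_theta[OF F lm(1) _ py(1) KK(2), folded n_def]
    have ky: "le_deg K' (theta L F y)" "initial (theta L F y) K' = l \<cdot> snd x (dg m) n"
      using ky a py(2) by auto
    show "le_deg K (theta L F y)" using le_deg_mono[OF ky(1) KK(1)] .
    show "initial (theta L F y) K = initial (theta L F x) K"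
      using initial_agree[OF theta_XL[OF F yDF] theta_XL[OF F x] ky(1) kx(1) _ KK(1)] ky(2) kx(2) by simp
  qed
qed

lemma Lmin_self: "\<nu> \<in> M \<Longrightarrow> Lmin L \<nu> \<nu> = {(sc \<nu>, sc \<nu>)}"
  using Lmin_cmp_right[of \<nu> "sc \<nu>"] by simp

lemma diag_in_S: "\<nu> \<in> M \<Longrightarrow> {(\<nu>, \<nu>)} \<in> S L"
  unfolding S_iff by simp

lemma diag_in_ES: "\<nu> \<in> M \<Longrightarrow> {(\<nu>, \<nu>)} \<in> ES L"
proof -
  assume n: "\<nu> \<in> M"
  have "Sprod L {(\<nu>, \<nu>)} {(\<nu>, \<nu>)} = {(\<nu>, \<nu>)}"
  proof (intro equalityI subsetI)
    fix q assume "q \<in> Sprod L {(\<nu>, \<nu>)} {(\<nu>, \<nu>)}"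
    then obtain a b where "q = (a, b)" "(a, b) \<in> Sprod L {(\<nu>, \<nu>)} {(\<nu>, \<nu>)}" by (cases q) auto
    then show "q \<in> {(\<nu>, \<nu>)}" unfolding Sprod_mem using n Lmin_self[OF n] by auto
  next
    fix q assume "q \<in> {(\<nu>, \<nu>)}"
    then have q: "q = (\<nu> \<cdot> sc \<nu>, \<nu> \<cdot> sc \<nu>)" using n by simp
    have l: "(sc \<nu>, sc \<nu>) \<in> Lmin L \<nu> \<nu>" using Lmin_self[OF n] by simp
    show "q \<in> Sprod L {(\<nu>, \<nu>)} {(\<nu>, \<nu>)}" unfolding q Sprod_mem
      apply (rule exI[of _ \<nu>], rule exI[of _ \<nu>], rule exI[of _ \<nu>], rule exI[of _ \<nu>])
      apply (rule exI[of _ "sc \<nu>"], rule exI[of _ "sc \<nu>"])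
      using l by simp
  qed
  then show ?thesis unfolding ES_def using diag_in_S[OF n] by simp
qed

lemma ES_diag:
  assumes P: "P \<in> S L" "Sprod L P P = P" and r: "(\<xi>, \<eta>) \<in> P"
  shows "\<xi> = \<eta>"
proof -
  have "(\<xi>, \<eta>) \<in> Sprod L P P" using P(2) r by simp
  then obtain \<xi>1 \<eta>1 \<xi>2 \<eta>2 \<alpha> \<beta> where A: "(\<xi>1, \<eta>1) \<in> P" "(\<xi>2, \<eta>2) \<in> P" "(\<alpha>, \<beta>) \<in> Lmin L \<eta>1 \<xi>2"
    "\<xi> = \<xi>1 \<cdot> \<alpha>" "\<eta> = \<eta>2 \<cdot> \<beta>" unfolding Sprod_mem by blast
  have B: "\<alpha> \<in> M" "\<beta> \<in> M" "sc \<eta>1 = rg \<alpha>" "sc \<xi>2 = rg \<beta>" "\<eta>1 \<cdot> \<alpha> = \<xi>2 \<cdot> \<beta>"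
    using A(3) by (auto simp: mem_Lmin_iff)
  have p0: "\<xi> \<in> M" "\<eta> \<in> M" "sc \<xi> = sc \<eta>" using S_pairD[OF P(1) r] by auto
  have p1: "\<xi>1 \<in> M" "\<eta>1 \<in> M" "sc \<xi>1 = sc \<eta>1" using S_pairD[OF P(1) A(1)] by auto
  have p2: "\<xi>2 \<in> M" "\<eta>2 \<in> M" "sc \<xi>2 = sc \<eta>2" using S_pairD[OF P(1) A(2)] by auto
  have "\<xi> \<cdot> sc \<xi> = \<xi>" using p0(1) by simp
  then have "\<xi> \<cdot> sc \<xi> = \<xi>1 \<cdot> \<alpha>" using A(4) by (rule trans)
  then have "Lmin L \<xi> \<xi>1 \<noteq> {}"
    by (intro Lmin_nonempty[OF p0(1) p1(1) src_in_Mor[OF p0(1)] B(1)]) (use p0(1) p1(3) B(3) in simp_all)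
  then have e1: "(\<xi>1, \<eta>1) = (\<xi>, \<eta>)" using S_eq_if_fst_aligned[OF P(1) r A(1)] by simp
  have "\<eta> \<cdot> sc \<eta> = \<eta>" using p0(2) by simp
  then have "\<eta> \<cdot> sc \<eta> = \<eta>2 \<cdot> \<beta>" using A(5) by (rule trans)
  then have "Lmin L \<eta> \<eta>2 \<noteq> {}"
    by (intro Lmin_nonempty[OF p0(2) p2(2) src_in_Mor[OF p0(2)] B(2)]) (use p0(2) p2(3) B(4) in simp_all)
  then have e2: "(\<xi>2, \<eta>2) = (\<xi>, \<eta>)" using S_eq_if_snd_aligned[OF P(1) r A(2)] by simp
  have "dg \<xi> + dg \<alpha> = dg \<xi>" using A(4) e1 B p0 by (metis Pair_inject deg_cmp)
  then have "dg \<alpha> = 0" by (simp add: fun_eq_iff)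
  then have a0: "\<alpha> = sc \<eta>" using deg_zero_Obj[OF B(1)] B(3) e1 by simp
  have "dg \<eta> + dg \<beta> = dg \<eta>" using A(5) e2 B p0 by (metis Pair_inject deg_cmp)
  then have "dg \<beta> = 0" by (simp add: fun_eq_iff)
  then have b0: "\<beta> = sc \<xi>" using deg_zero_Obj[OF B(2)] B(4) e2 by simp
  have "\<eta> \<cdot> sc \<eta> = \<xi> \<cdot> sc \<xi>" using B(5) e1 e2 a0 b0 by simp
  then show ?thesis using cmp_src_id[OF p0(1)] cmp_src_id[OF p0(2)] by simp
qed

lemma Sprod_mem_through_prefixes:
  assumes F: "F \<in> S L" and lm: "(l, m) \<in> F" and P: "(\<rho>, \<rho>) \<in> P"
    and x: "x \<in> XL L" and pm: "prefix_of m x" and p\<rho>: "prefix_of \<rho> x"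
    and N: "N = sup (dg m) (dg \<rho>)"
  shows "(l \<cdot> snd x (dg m) N, initial x N) \<in> Sprod L F P"
proof -
  have lN: "le_deg N x" unfolding N using le_deg_sup[of "dg m" x "dg \<rho>"] pm p\<rho> unfolding prefix_of_def by blast
  have Nm: "dg m \<le> N" and N\<rho>: "dg \<rho> \<le> N" unfolding N by simp_all
  define \<alpha> \<beta> where "\<alpha> = snd x (dg m) N" and "\<beta> = snd x (dg \<rho>) N"
  have e1: "initial x N = m \<cdot> \<alpha>" unfolding \<alpha>_def using initial_prefix_split[OF x pm lN Nm] .
  have e2: "initial x N = \<rho> \<cdot> \<beta>" unfolding \<beta>_def using initial_prefix_split[OF x p\<rho> lN N\<rho>] .
  have "\<alpha> \<in> M" "sc m = rg \<alpha>" unfolding \<alpha>_def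
    using path_entry(1)[OF x Nm lN] src_initial[OF x Nm lN] pm by (auto simp: prefix_of_def)
  moreover have "\<beta> \<in> M" "sc \<rho> = rg \<beta>" unfolding \<beta>_def
    using path_entry(1)[OF x N\<rho> lN] src_initial[OF x N\<rho> lN] p\<rho> by (auto simp: prefix_of_def)
  moreover have "dg (m \<cdot> \<alpha>) = sup (dg m) (dg \<rho>)" using e1 initial_entry(2)[OF x lN] N by simp
  ultimately have "(\<alpha>, \<beta>) \<in> Lmin L m \<rho>"
    unfolding mem_Lmin_iff using e1 e2 prefix_of_Mor[OF x pm] prefix_of_Mor[OF x p\<rho>] by simp
  then show ?thesis unfolding Sprod_mem \<alpha>_def[symmetric] e2 using lm P by blast
qed

lemma Sprod_ES_mem_through_prefix:
  assumes G: "G \<in> S L" and lm: "(l, m) \<in> G" and pm: "prefix_of m x"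
    and P: "P \<in> S L" "Sprod L P P = P" and \<rho>: "(\<rho>, \<rho>) \<in> P" and p\<rho>: "prefix_of \<rho> x"
    and x: "x \<in> XL L" and N: "dg \<rho> \<le> N" "le_deg N x"
    and mem: "(a, initial x N) \<in> Sprod L G P"
  shows "dg m \<le> N" "a = l \<cdot> snd x (dg m) N"
proof -
  obtain l2 m2 \<rho>2 \<rho>2' \<alpha>2 \<beta>2 where B: "(l2, m2) \<in> G" "(\<rho>2, \<rho>2') \<in> P" "(\<alpha>2, \<beta>2) \<in> Lmin L m2 \<rho>2"
    "a = l2 \<cdot> \<alpha>2" "initial x N = \<rho>2' \<cdot> \<beta>2" using mem unfolding Sprod_mem by blast
  have B2: "\<alpha>2 \<in> M" "\<beta>2 \<in> M" "sc m2 = rg \<alpha>2" "sc \<rho>2 = rg \<beta>2" "m2 \<cdot> \<alpha>2 = \<rho>2 \<cdot> \<beta>2"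
    using B(3) by (auto simp: mem_Lmin_iff)
  have \<rho>2: "\<rho>2' = \<rho>2" "\<rho>2 \<in> M" using ES_diag[OF P B(2)] S_pairD[OF P(1) B(2)] by auto
  define \<beta> where "\<beta> = snd x (dg \<rho>) N"
  have e: "initial x N = \<rho> \<cdot> \<beta>" unfolding \<beta>_def using initial_prefix_split[OF x p\<rho> N(2,1)] .
  have \<beta>: "\<beta> \<in> M" "sc \<rho> = rg \<beta>" unfolding \<beta>_def
    using path_entry(1)[OF x N] src_initial[OF x N] p\<rho> by (auto simp: prefix_of_def)
  have \<rho>M: "\<rho> \<in> M" using prefix_of_Mor[OF x p\<rho>] .
  have "Lmin L \<rho> \<rho>2 \<noteq> {}" using Lmin_nonempty[OF \<rho>M \<rho>2(2) \<beta>(1) B2(2) \<beta>(2) B2(4)] e B(5) \<rho>2 by simp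
  then have "\<rho>2 = \<rho>" using S_eq_if_fst_aligned[OF P(1) \<rho> B(2)] \<rho>2 by simp
  then have "\<beta>2 = \<beta>" using cmp_cancel_left[OF \<rho>M B2(2) \<beta>(1)] e B(5) \<rho>2 B2(4) \<beta>(2) by simp
  then have e3: "initial x N = m2 \<cdot> \<alpha>2" using e B2(5) \<open>\<rho>2 = \<rho>\<close> by simp
  have m2M: "m2 \<in> M" using S_pairD[OF G B(1)] by auto
  have "prefix_of m2 x" using prefix_of_initial_factor[OF x N(2) e3 m2M B2(1,3)] .
  then have ll: "l2 = l" "m2 = m" using DF_unique_pair[OF G x B(1) lm _ pm] by auto
  have "dg m2 + dg \<alpha>2 = N" using initial_entry(2)[OF x N(2)] m2M B2(1,3) unfolding e3 by simp
  then show mN: "dg m \<le> N" using ll by (auto simp: le_fun_def)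
  have "\<alpha>2 = snd x (dg m) N"
    using cmp_cancel_left[OF m2M B2(1) path_entry(1)[OF x mN N(2)]] e3 initial_prefix_split[OF x pm N(2) mN]
      B2(3) src_initial[OF x mN N(2)] pm ll by (simp add: prefix_of_def)
  then show "a = l \<cdot> snd x (dg m) N" using B(4) ll by simp
qed

section \<open>Germs\<close>

definition locally_agree :: "('a \<times> 'a) set \<Rightarrow> ('a \<times> 'a) set \<Rightarrow> ('a, 'k) path \<Rightarrow> bool" where
  "locally_agree F G x \<longleftrightarrow> x \<in> DF L F \<and> x \<in> DF L G \<and> (\<exists>n. le_deg n x \<and>
     (\<forall>y. y \<in> XL L \<and> le_deg n y \<and> initial y n = initial x n \<longrightarrow> y \<in> DF L F \<and> y \<in> DF L G \<and> theta L F y = theta L G y))"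

lemma locally_agreeI:
  assumes F: "F \<in> S L" and G: "G \<in> S L" and lm: "(l, m) \<in> F" and lm2: "(l', m') \<in> G"
    and x: "x \<in> XL L" and p: "prefix_of m x" and p2: "prefix_of m' x"
    and N: "dg m \<le> N" "dg m' \<le> N" "le_deg N x"
    and e: "l \<cdot> snd x (dg m) N = l' \<cdot> snd x (dg m') N"
  shows "locally_agree F G x"
  unfolding locally_agree_def
proof (intro conjI exI[of _ N] allI impI)
  show "x \<in> DF L F" "x \<in> DF L G" using lm lm2 x p p2 by (auto simp: DF_iff)
  show "le_deg N x" using N(3) .
  fix y assume a: "y \<in> XL L \<and> le_deg N y \<and> initial y N = initial x N"
  have py: "prefix_of m y" "snd y (dg m) N = snd x (dg m) N" using prefix_of_cylinder[OF x _ p N(1,3)] a by auto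
  have py2: "prefix_of m' y" "snd y (dg m') N = snd x (dg m') N" using prefix_of_cylinder[OF x _ p2 N(2,3)] a by auto
  show "y \<in> DF L F" "y \<in> DF L G" using lm lm2 a py py2 by (auto simp: DF_iff)
  show "theta L F y = theta L G y"
    using theta_eq_concat_seg[OF F lm _ py(1) N(1)] theta_eq_concat_seg[OF G lm2 _ py2(1) N(2)] a py(2) py2(2) e by simp
qed

text \<open>Evaluate the agreeing maps \<open>theta_F\<close> and \<open>theta_G\<close> at the finite path \<open>x(0, N')\<close>, for
  \<open>N'\<close> beyond the cylinder on which they agree; \<open>concat\<close> is injective in its first argument on
  finite paths.\<close>

lemma locally_agreeD:
  assumes F: "F \<in> S L" and G: "G \<in> S L" and lm: "(l, m) \<in> F" and lm2: "(l', m') \<in> G"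
    and x: "x \<in> XL L" and p: "prefix_of m x" and p2: "prefix_of m' x"
    and N: "dg m \<le> N" "dg m' \<le> N" "le_deg N x" and g: "locally_agree F G x"
  shows "l \<cdot> snd x (dg m) N = l' \<cdot> snd x (dg m') N"
proof -
  obtain n where n: "le_deg n x" "\<And>y. y \<in> XL L \<Longrightarrow> le_deg n y \<Longrightarrow> initial y n = initial x n \<Longrightarrow> theta L F y = theta L G y"
    using g unfolding locally_agree_def by blast
  define N' where "N' = sup N n"
  have lN': "le_deg N' x" unfolding N'_def using le_deg_sup[OF N(3) n(1)] .
  have NN: "N \<le> N'" "n \<le> N'" unfolding N'_def by simp_all
  define y where "y = path_of (initial x N')"
  have pM: "initial x N' \<in> M" and dp: "dg (initial x N') = N'" using initial_entry(1,2)[OF x lN'] .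
  have y: "y \<in> XL L" unfolding y_def using path_of_XL[OF pM] .
  have ly: "le_deg N' y" unfolding y_def le_deg_path_of dp by simp
  have py: "initial y N' = initial x N'" unfolding y_def using initial_path_of[OF pM] dp by simp
  have th: "theta L F y = theta L G y"
    using n(2)[OF y le_deg_mono[OF ly NN(2)] initial_agree[OF y x ly lN' py NN(2)]] .
  have mN': "dg m \<le> N'" "dg m' \<le> N'" using N NN by (auto intro: order_trans)
  have q1: "prefix_of m y" "snd y (dg m) N' = snd x (dg m) N'"
    using prefix_of_cylinder[OF x y p mN'(1) lN' ly py] by auto
  have q2: "prefix_of m' y" "snd y (dg m') N' = snd x (dg m') N'"
    using prefix_of_cylinder[OF x y p2 mN'(2) lN' ly py] by auto
  have lm': "l \<in> M" "m \<in> M" "sc l = sc m" and lm2': "l' \<in> M" "m' \<in> M" "sc l' = sc m'"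
    using S_pairD[OF F lm] S_pairD[OF G lm2] by auto
  define z where "z = sigma N' y"
  have z: "z \<in> XL L" unfolding z_def using sigma_XL[OF y ly] .
  have zf: "\<forall>i. fst z i \<noteq> \<infinity>" unfolding z_def sigma_fst y_def fst_path_of by simp
  have t1: "snd x (dg m) N' \<in> M" "sc l = rg (snd x (dg m) N')" "sc (snd x (dg m) N') = initial z 0"
    using path_entry[OF x mN'(1) lN'] src_initial[OF x mN'(1) lN'] p lm' q1(2)
      path_entry(4)[OF y mN'(1) ly] initial_sigma_0[OF ly] unfolding z_def by (auto simp: prefix_of_def)
  have t2: "snd x (dg m') N' \<in> M" "sc l' = rg (snd x (dg m') N')" "sc (snd x (dg m') N') = initial z 0"
    using path_entry[OF x mN'(2) lN'] src_initial[OF x mN'(2) lN'] p2 lm2' q2(2)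
      path_entry(4)[OF y mN'(2) ly] initial_sigma_0[OF ly] unfolding z_def by (auto simp: prefix_of_def)
  have "concat L (l \<cdot> snd x (dg m) N') z = concat L (l' \<cdot> snd x (dg m') N') z"
    using theta_eq_concat_seg[OF F lm y q1(1) mN'(1) ly] theta_eq_concat_seg[OF G lm2 y q2(1) mN'(2) ly] th q1(2) q2(2)
    unfolding z_def by simp
  then have "l \<cdot> snd x (dg m) N' = l' \<cdot> snd x (dg m') N'"
    using concat_inj[OF _ _ z zf] t1 t2 lm' lm2' by simp
  then show ?thesis
    using cmp_path_eq_restrict[OF x p p2 lm'(1,3) lm2'(1,3) N(1,2) NN(1) lN'] by simp
qed

lemma locally_agree_iff_germ_rel:
  assumes F: "F \<in> S L" and G: "G \<in> S L" and xF: "x \<in> DF L F" and xG: "x \<in> DF L G"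
  shows "locally_agree F G x \<longleftrightarrow> (\<exists>P\<in>ES L. x \<in> DF L P \<and> Sprod L F P = Sprod L G P)"
proof -
  obtain l m where lm: "(l, m) \<in> F" "prefix_of m x" and x: "x \<in> XL L" using xF by (auto simp: DF_iff)
  obtain l' m' where lm2: "(l', m') \<in> G" "prefix_of m' x" using xG by (auto simp: DF_iff)
  show ?thesis
  proof
    assume g: "locally_agree F G x"
    define N where "N = sup (dg m) (dg m')"
    have lN: "le_deg N x" unfolding N_def using le_deg_sup[of "dg m" x "dg m'"] lm(2) lm2(2)
      unfolding prefix_of_def by blast
    have N: "dg m \<le> N" "dg m' \<le> N" unfolding N_def by simp_all
    have e: "l \<cdot> snd x (dg m) N = l' \<cdot> snd x (dg m') N"
      using locally_agreeD[OF F G lm(1) lm2(1) x lm(2) lm2(2) N lN g] .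
    have pM: "initial x N \<in> M" using initial_entry(1)[OF x lN] .
    have "x \<in> DF L {(initial x N, initial x N)}" unfolding DF_iff prefix_of_def
      using x lN initial_entry(2)[OF x lN] by simp
    moreover have "Sprod L F {(initial x N, initial x N)} = Sprod L G {(initial x N, initial x N)}"
      using Sprod_diag[OF F lm(1) x lm(2) N(1) lN] Sprod_diag[OF G lm2(1) x lm2(2) N(2) lN] e by simp
    ultimately show "\<exists>P\<in>ES L. x \<in> DF L P \<and> Sprod L F P = Sprod L G P" using diag_in_ES[OF pM] by blast
  next
    assume "\<exists>P\<in>ES L. x \<in> DF L P \<and> Sprod L F P = Sprod L G P"
    then obtain P where P: "P \<in> S L" "Sprod L P P = P" "x \<in> DF L P" "Sprod L F P = Sprod L G P"
      by (auto simp: ES_def)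
    obtain \<rho>' \<rho> where "(\<rho>', \<rho>) \<in> P" and p\<rho>: "prefix_of \<rho> x" using P(3) by (auto simp: DF_iff)
    then have \<rho>: "(\<rho>, \<rho>) \<in> P" using ES_diag[OF P(1,2)] by metis
    define N where "N = sup (dg m) (dg \<rho>)"
    have N: "dg m \<le> N" "dg \<rho> \<le> N" "le_deg N x"
      unfolding N_def using le_deg_sup[of "dg m" x "dg \<rho>"] lm(2) p\<rho> unfolding prefix_of_def by auto
    have "(l \<cdot> snd x (dg m) N, initial x N) \<in> Sprod L G P"
      using Sprod_mem_through_prefixes[OF F lm(1) \<rho> x lm(2) p\<rho> N_def] P(4) by simp
    note through = Sprod_ES_mem_through_prefix[OF G lm2 P(1,2) \<rho> p\<rho> x N(2,3) this]
    show "locally_agree F G x"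
      using locally_agreeI[OF F G lm(1) lm2(1) x lm(2) lm2(2) N(1) through(1) N(3)] through(2) by simp
  qed
qed

lemma germ_eq_set:
  assumes F: "F \<in> S L" and x: "x \<in> DF L F"
  shows "germ L F x = {(G, x) | G. G \<in> S L \<and> x \<in> DF L G \<and> locally_agree F G x}"
  unfolding germ_def using locally_agree_iff_germ_rel[OF F _ x] by blast

lemma locally_agree_DF: "locally_agree F G x \<Longrightarrow> x \<in> DF L F \<and> x \<in> DF L G"
  unfolding locally_agree_def by blast

lemma locally_agree_refl:
  assumes F: "F \<in> S L" and x: "x \<in> DF L F" shows "locally_agree F F x"
proof -
  obtain l m where lm: "(l, m) \<in> F" "prefix_of m x" and xX: "x \<in> XL L" using x by (auto simp: DF_iff)
  have lN: "le_deg (dg m) x" using lm(2) by (simp add: prefix_of_def)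
  show ?thesis using locally_agreeI[OF F F lm(1) lm(1) xX lm(2) lm(2) order_refl order_refl lN] by simp
qed

lemma locally_agree_sym: "locally_agree F G x \<Longrightarrow> locally_agree G F x"
  unfolding locally_agree_def by metis

lemma locally_agree_trans:
  assumes g1: "locally_agree F G x" and g2: "locally_agree G H x" shows "locally_agree F H x"
proof -
  obtain n1 where n1: "le_deg n1 x" "\<And>y. y \<in> XL L \<Longrightarrow> le_deg n1 y \<Longrightarrow> initial y n1 = initial x n1 \<Longrightarrow>
      y \<in> DF L F \<and> y \<in> DF L G \<and> theta L F y = theta L G y" using g1 unfolding locally_agree_def by blast
  obtain n2 where n2: "le_deg n2 x" "\<And>y. y \<in> XL L \<Longrightarrow> le_deg n2 y \<Longrightarrow> initial y n2 = initial x n2 \<Longrightarrow>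
      y \<in> DF L G \<and> y \<in> DF L H \<and> theta L G y = theta L H y" using g2 unfolding locally_agree_def by blast
  have x: "x \<in> XL L" using g1 by (simp add: locally_agree_def DF_iff)
  define n where "n = sup n1 n2"
  have ln: "le_deg n x" unfolding n_def using le_deg_sup[OF n1(1) n2(1)] .
  have nn: "n1 \<le> n" "n2 \<le> n" unfolding n_def by simp_all
  show ?thesis unfolding locally_agree_def
  proof (intro conjI exI[of _ n] allI impI)
    show "x \<in> DF L F" "x \<in> DF L H" using g1 g2 by (auto simp: locally_agree_def)
    show "le_deg n x" using ln .
    fix y assume a: "y \<in> XL L \<and> le_deg n y \<and> initial y n = initial x n"
    have y1: "le_deg n1 y" "initial y n1 = initial x n1"
      using a le_deg_mono[of n y n1] nn initial_agree[OF _ x _ ln _ nn(1)] by auto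
    have y2: "le_deg n2 y" "initial y n2 = initial x n2"
      using a le_deg_mono[of n y n2] nn initial_agree[OF _ x _ ln _ nn(2)] by auto
    show "y \<in> DF L F" "y \<in> DF L H" "theta L F y = theta L H y"
      using n1(2)[OF _ y1] n2(2)[OF _ y2] a by auto
  qed
qed

lemma locally_agree_theta: "locally_agree F G x \<Longrightarrow> theta L F x = theta L G x"
proof -
  assume g: "locally_agree F G x"
  then obtain n where "le_deg n x" "\<And>y. y \<in> XL L \<Longrightarrow> le_deg n y \<Longrightarrow> initial y n = initial x n \<Longrightarrow>
      theta L F y = theta L G y" unfolding locally_agree_def by blast
  moreover have "x \<in> XL L" using g by (simp add: locally_agree_def DF_iff)
  ultimately show ?thesis by blast
qed

lemma in_germ: "F \<in> S L \<Longrightarrow> x \<in> DF L F \<Longrightarrow> (F, x) \<in> germ L F x"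
  using germ_eq_set locally_agree_refl by blast

lemma germ_eqI:
  assumes F: "F \<in> S L" and G: "G \<in> S L" and g: "locally_agree F G x"
  shows "germ L F x = germ L G x"
proof -
  have xF: "x \<in> DF L F" and xG: "x \<in> DF L G" using g by (auto simp: locally_agree_def)
  have "locally_agree F H x \<longleftrightarrow> locally_agree G H x" for H
  proof
    assume "locally_agree F H x" then show "locally_agree G H x"
      using locally_agree_trans[OF locally_agree_sym[OF g]] by simp
  next
    assume "locally_agree G H x" then show "locally_agree F H x" using locally_agree_trans[OF g] by simp
  qed
  then show ?thesis unfolding germ_eq_set[OF F xF] germ_eq_set[OF G xG] by simp
qed

lemma germ_eq_iff:
  assumes F: "F \<in> S L" and G: "G \<in> S L" and x: "x \<in> DF L F" and y: "y \<in> DF L G"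
  shows "germ L F x = germ L G y \<longleftrightarrow> x = y \<and> locally_agree F G x"
proof
  assume e: "germ L F x = germ L G y"
  have "(G, y) \<in> germ L F x" using e in_germ[OF G y] by simp
  then show "x = y \<and> locally_agree F G x" unfolding germ_eq_set[OF F x] by simp
next
  assume a: "x = y \<and> locally_agree F G x"
  then have "germ L F x = germ L G x" using germ_eqI[OF F G] by blast
  then show "germ L F x = germ L G y" using a by simp
qed

lemma grep_germ:
  assumes F: "F \<in> S L" and x: "x \<in> DF L F"
  shows "fst (grep (germ L F x)) \<in> S L" "snd (grep (germ L F x)) = x"
    "x \<in> DF L (fst (grep (germ L F x)))" "locally_agree F (fst (grep (germ L F x))) x"
proof -
  have "grep (germ L F x) \<in> germ L F x" unfolding grep_def using in_germ[OF F x] by (rule someI)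
  then show "fst (grep (germ L F x)) \<in> S L" "snd (grep (germ L F x)) = x"
    "x \<in> DF L (fst (grep (germ L F x)))" "locally_agree F (fst (grep (germ L F x))) x"
    unfolding germ_eq_set[OF F x] by auto
qed

lemma gsrc_germ: "F \<in> S L \<Longrightarrow> x \<in> DF L F \<Longrightarrow> gsrc (germ L F x) = x"
  unfolding gsrc_def using grep_germ by blast

lemma gran_germ:
  assumes F: "F \<in> S L" and x: "x \<in> DF L F" shows "gran L (germ L F x) = theta L F x"
proof -
  have "theta L F x = theta L (fst (grep (germ L F x))) x" using locally_agree_theta[OF grep_germ(4)[OF F x]] .
  then show ?thesis unfolding gran_def grep_germ(2)[OF F x] by simp
qed

lemma locally_agree_Sstar:
  assumes F: "F \<in> S L" and G: "G \<in> S L" and g: "locally_agree F G x"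
  shows "locally_agree (Sstar F) (Sstar G) (theta L F x)"
proof -
  have xF: "x \<in> DF L F" and xG: "x \<in> DF L G" using g by (auto simp: locally_agree_def)
  have X: "x \<in> XL L" using xF by (simp add: DF_iff)
  obtain n where n: "le_deg n x" "\<And>y. y \<in> XL L \<Longrightarrow> le_deg n y \<Longrightarrow> initial y n = initial x n \<Longrightarrow>
      y \<in> DF L F \<and> y \<in> DF L G \<and> theta L F y = theta L G y" using g unfolding locally_agree_def by blast
  define y0 where "y0 = theta L F x"
  have FS: "Sstar F \<in> S L" "Sstar G \<in> S L" using Sstar_in_S F G by auto
  have y0F: "y0 \<in> DF L (Sstar F)" unfolding y0_def using theta_in_DF_Sstar[OF F xF] .
  have y0G: "y0 \<in> DF L (Sstar G)" unfolding y0_def using theta_in_DF_Sstar[OF G xG] locally_agree_theta[OF g] by simp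
  have hb: "theta L (Sstar F) y0 = x" unfolding y0_def using theta_Sstar_theta[OF F xF] .
  have lny: "le_deg n (theta L (Sstar F) y0)" using n(1) hb by simp
  obtain m where m: "le_deg m y0" "\<forall>y. y \<in> XL L \<and> le_deg m y \<and> initial y m = initial y0 m \<longrightarrow>
      y \<in> DF L (Sstar F) \<and> le_deg n (theta L (Sstar F) y) \<and>
      initial (theta L (Sstar F) y) n = initial (theta L (Sstar F) y0) n"
    using theta_cylinder[OF FS(1) y0F lny] by blast
  show ?thesis unfolding y0_def[symmetric] locally_agree_def
  proof (intro conjI exI[of _ m] allI impI)
    show "y0 \<in> DF L (Sstar F)" "y0 \<in> DF L (Sstar G)" "le_deg m y0" using y0F y0G m(1) by auto
    fix y assume a: "y \<in> XL L \<and> le_deg m y \<and> initial y m = initial y0 m"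
    have yF: "y \<in> DF L (Sstar F)"
      and c: "le_deg n (theta L (Sstar F) y)" "initial (theta L (Sstar F) y) n = initial x n"
      using mp[OF spec[OF m(2), of y] a] unfolding hb by auto
    define z where "z = theta L (Sstar F) y"
    have Z: "z \<in> XL L" unfolding z_def using theta_XL[OF FS(1) yF] .
    have zz: "z \<in> DF L F" "z \<in> DF L G" "theta L F z = theta L G z" using n(2)[OF Z] c unfolding z_def by auto
    have yz: "theta L F z = y" unfolding z_def using theta_Sstar_theta[OF FS(1) yF] by simp
    show "y \<in> DF L (Sstar F)" using yF .
    have yG: "y = theta L G z" using yz zz(3) by simp
    show "y \<in> DF L (Sstar G)" using theta_in_DF_Sstar[OF G zz(2)] yG by simp
    show "theta L (Sstar F) y = theta L (Sstar G) y"
      using theta_Sstar_theta[OF G zz(2)] yG unfolding z_def[symmetric] by simp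
  qed
qed

lemma locally_agree_Sprod:
  assumes fa: "finitely_aligned L" and F: "F \<in> S L" and F': "F' \<in> S L" and G: "G \<in> S L" and G': "G' \<in> S L"
    and x: "x \<in> DF L (Sprod L F G)" and gG: "locally_agree G G' x" and gF: "locally_agree F F' (theta L G x)"
  shows "locally_agree (Sprod L F G) (Sprod L F' G') x"
proof -
  have X: "x \<in> XL L" using x by (simp add: DF_iff)
  have xG: "x \<in> DF L G" using DF_SprodD(1)[OF fa F G x] .
  obtain n1 where n1: "le_deg n1 x" "\<And>y. y \<in> XL L \<Longrightarrow> le_deg n1 y \<Longrightarrow> initial y n1 = initial x n1 \<Longrightarrow>
      y \<in> DF L G \<and> y \<in> DF L G' \<and> theta L G y = theta L G' y" using gG unfolding locally_agree_def by blast
  obtain n2 where n2: "le_deg n2 (theta L G x)" "\<And>y. y \<in> XL L \<Longrightarrow> le_deg n2 y \<Longrightarrow> initial y n2 = initial (theta L G x) n2 \<Longrightarrow>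
      y \<in> DF L F \<and> y \<in> DF L F' \<and> theta L F y = theta L F' y" using gF unfolding locally_agree_def by blast
  obtain n3 where n3: "le_deg n3 x" "\<And>y. y \<in> XL L \<and> le_deg n3 y \<and> initial y n3 = initial x n3 \<Longrightarrow>
      y \<in> DF L G \<and> le_deg n2 (theta L G y) \<and> initial (theta L G y) n2 = initial (theta L G x) n2"
    using theta_cylinder[OF G xG n2(1)] by blast
  define n where "n = sup n1 n3"
  have ln: "le_deg n x" unfolding n_def using le_deg_sup[OF n1(1) n3(1)] .
  have nn: "n1 \<le> n" "n3 \<le> n" unfolding n_def by simp_all
  have xFG': "x \<in> DF L (Sprod L F' G')"
  proof -
    have "x \<in> DF L G'" using gG by (simp add: locally_agree_def)
    moreover have "theta L G' x \<in> DF L F'" using gF locally_agree_theta[OF gG] by (simp add: locally_agree_def)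
    ultimately show ?thesis using DF_Sprod[OF fa F' G'] by simp
  qed
  show ?thesis unfolding locally_agree_def
  proof (intro conjI exI[of _ n] allI impI)
    show "x \<in> DF L (Sprod L F G)" "x \<in> DF L (Sprod L F' G')" "le_deg n x" using x xFG' ln by auto
    fix y assume a: "y \<in> XL L \<and> le_deg n y \<and> initial y n = initial x n"
    have y1: "le_deg n1 y" "initial y n1 = initial x n1"
      using a le_deg_mono[of n y n1] nn initial_agree[OF _ X _ ln _ nn(1)] by auto
    have y3: "le_deg n3 y" "initial y n3 = initial x n3"
      using a le_deg_mono[of n y n3] nn initial_agree[OF _ X _ ln _ nn(2)] by auto
    have A: "y \<in> DF L G" "y \<in> DF L G'" "theta L G y = theta L G' y" using n1(2)[OF _ y1] a by auto
    have B: "le_deg n2 (theta L G y)" "initial (theta L G y) n2 = initial (theta L G x) n2" using n3(2) a y3 by auto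
    have TY: "theta L G y \<in> XL L" using theta_XL[OF G A(1)] .
    have C: "theta L G y \<in> DF L F" "theta L G y \<in> DF L F'" "theta L F (theta L G y) = theta L F' (theta L G y)"
      using n2(2)[OF TY B] by auto
    show "y \<in> DF L (Sprod L F G)" using DF_Sprod[OF fa F G] A C by simp
    show "y \<in> DF L (Sprod L F' G')" using DF_Sprod[OF fa F' G'] A C by simp
    then show "theta L (Sprod L F G) y = theta L (Sprod L F' G') y"
      using theta_Sprod[OF fa F G] theta_Sprod[OF fa F' G'] DF_Sprod[OF fa F G] A C by simp
  qed
qed

lemma GsetE: "a \<in> Gset L \<Longrightarrow> \<exists>F x. F \<in> S L \<and> x \<in> DF L F \<and> a = germ L F x"
  unfolding Gset_def by blast

lemma ginv_germ:
  assumes F: "F \<in> S L" and x: "x \<in> DF L F"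
  shows "ginv L (germ L F x) = germ L (Sstar F) (theta L F x)"
proof -
  define F' where "F' = fst (grep (germ L F x))"
  have F': "F' \<in> S L" "locally_agree F F' x" unfolding F'_def using grep_germ[OF F x] by auto
  have "ginv L (germ L F x) = germ L (Sstar F') (theta L F x)"
    unfolding ginv_def gran_germ[OF F x] F'_def ..
  also have "\<dots> = germ L (Sstar F) (theta L F x)"
    using germ_eqI[OF Sstar_in_S[OF F'(1)] Sstar_in_S[OF F] locally_agree_sym[OF locally_agree_Sstar[OF F F'(1) F'(2)]]]
      locally_agree_theta[OF F'(2)] by simp
  finally show ?thesis .
qed

lemma gmul_germ:
  assumes fa: "finitely_aligned L" and F: "F \<in> S L" and G: "G \<in> S L" and x: "x \<in> DF L (Sprod L F G)"
  shows "gmul L (germ L F (theta L G x)) (germ L G x) = germ L (Sprod L F G) x"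
proof -
  have xG: "x \<in> DF L G" and zF: "theta L G x \<in> DF L F" using DF_SprodD[OF fa F G x] by auto
  define F' where "F' = fst (grep (germ L F (theta L G x)))"
  define G' where "G' = fst (grep (germ L G x))"
  have F': "F' \<in> S L" "locally_agree F F' (theta L G x)" unfolding F'_def using grep_germ[OF F zF] by auto
  have G': "G' \<in> S L" "locally_agree G G' x" unfolding G'_def using grep_germ[OF G xG] by auto
  have "gmul L (germ L F (theta L G x)) (germ L G x) = germ L (Sprod L F' G') x"
    unfolding gmul_def F'_def G'_def grep_germ(2)[OF G xG] ..
  also have "\<dots> = germ L (Sprod L F G) x"
    using germ_eqI[OF Sprod_in_S[OF fa F'(1) G'(1)] Sprod_in_S[OF fa F G]
        locally_agree_sym[OF locally_agree_Sprod[OF fa F F'(1) G G'(1) x G'(2) F'(2)]]] .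
  finally show ?thesis .
qed

lemma Psi_Sstar:
  assumes F: "F \<in> S L"
  shows "Psi L (Sstar F) = Opinv L (Psi L F)"
proof (intro equalityI subsetI)
  fix a assume "a \<in> Psi L (Sstar F)"
  then obtain y where y: "y \<in> DF L (Sstar F)" "a = germ L (Sstar F) y" unfolding Psi_def by blast
  have FS: "Sstar F \<in> S L" using Sstar_in_S[OF F] .
  have x: "theta L (Sstar F) y \<in> DF L F" using theta_in_DF_Sstar[OF FS y(1)] by simp
  have "theta L F (theta L (Sstar F) y) = y" using theta_Sstar_theta[OF FS y(1)] by simp
  then have "a = ginv L (germ L F (theta L (Sstar F) y))" using ginv_germ[OF F x] y(2) by simp
  then show "a \<in> Opinv L (Psi L F)" unfolding Opinv_def Psi_def using x by blast
next
  fix a assume "a \<in> Opinv L (Psi L F)"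
  then obtain x where x: "x \<in> DF L F" "a = ginv L (germ L F x)" unfolding Opinv_def Psi_def by blast
  then have "a = germ L (Sstar F) (theta L F x)" using ginv_germ[OF F] by simp
  then show "a \<in> Psi L (Sstar F)" unfolding Psi_def using theta_in_DF_Sstar[OF F x(1)] by blast
qed

lemma Psi_Sprod:
  assumes fa: "finitely_aligned L" and F: "F \<in> S L" and G: "G \<in> S L"
  shows "Psi L (Sprod L F G) = Opmul L (Psi L F) (Psi L G)"
proof (intro equalityI subsetI)
  fix a assume "a \<in> Psi L (Sprod L F G)"
  then obtain x where x: "x \<in> DF L (Sprod L F G)" "a = germ L (Sprod L F G) x" unfolding Psi_def by blast
  have xG: "x \<in> DF L G" and zF: "theta L G x \<in> DF L F" using DF_SprodD[OF fa F G x(1)] by auto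
  have "gsrc (germ L F (theta L G x)) = gran L (germ L G x)"
    using gsrc_germ[OF F zF] gran_germ[OF G xG] by simp
  moreover have "a = gmul L (germ L F (theta L G x)) (germ L G x)" using gmul_germ[OF fa F G x(1)] x(2) by simp
  moreover have "germ L F (theta L G x) \<in> Psi L F" "germ L G x \<in> Psi L G" unfolding Psi_def using zF xG by blast+
  ultimately show "a \<in> Opmul L (Psi L F) (Psi L G)" unfolding Opmul_def by blast
next
  fix a assume "a \<in> Opmul L (Psi L F) (Psi L G)"
  then obtain z x where A: "z \<in> DF L F" "x \<in> DF L G" "gsrc (germ L F z) = gran L (germ L G x)"
    "a = gmul L (germ L F z) (germ L G x)" unfolding Opmul_def Psi_def by blast
  have zx: "z = theta L G x" using A(3) gsrc_germ[OF F A(1)] gran_germ[OF G A(2)] by simp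
  have x: "x \<in> DF L (Sprod L F G)" using DF_Sprod[OF fa F G] A(1,2) zx by simp
  have "a = germ L (Sprod L F G) x" using gmul_germ[OF fa F G x] A(4) zx by simp
  then show "a \<in> Psi L (Sprod L F G)" unfolding Psi_def using x by blast
qed

lemma prefix_of_path_of: "m \<in> M \<Longrightarrow> prefix_of m (path_of m)"
  unfolding prefix_of_def using le_deg_path_of initial_path_of by simp

lemma germ_in_Psi_iff:
  assumes F: "F \<in> S L" and H: "H \<in> S L" and x: "x \<in> DF L F"
  shows "germ L F x \<in> Psi L H \<longleftrightarrow> locally_agree F H x"
proof
  assume "germ L F x \<in> Psi L H"
  then obtain y where y: "y \<in> DF L H" "germ L F x = germ L H y" unfolding Psi_def by blast
  then show "locally_agree F H x" using germ_eq_iff[OF F H x y(1)] by blast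
next
  assume g: "locally_agree F H x"
  then have "germ L F x = germ L H x" using germ_eqI[OF F H g] by simp
  moreover have "x \<in> DF L H" using locally_agree_DF[OF g] by simp
  ultimately show "germ L F x \<in> Psi L H" unfolding Psi_def by blast
qed

lemma gsrc_Psi: "F \<in> S L \<Longrightarrow> gsrc ` Psi L F = DF L F"
  unfolding Psi_def using gsrc_germ by (auto simp: image_iff) (metis gsrc_germ)

lemma DF_eq_imp_snd_mem:
  assumes F: "F \<in> S L" and G: "G \<in> S L" and D: "DF L F = DF L G" and lm: "(l, m) \<in> F"
  shows "\<exists>l'. (l', m) \<in> G"
proof -
  have mM: "m \<in> M" using S_pairD[OF F lm] by simp
  have "path_of m \<in> DF L F" using lm path_of_XL[OF mM] prefix_of_path_of[OF mM] by (auto simp: DF_iff)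
  then have "path_of m \<in> DF L G" using D by simp
  then obtain l' m' where A: "(l', m') \<in> G" "prefix_of m' (path_of m)" by (auto simp: DF_iff)
  have m'M: "m' \<in> M" using S_pairD[OF G A(1)] by simp
  have "path_of m' \<in> DF L G" using A(1) path_of_XL[OF m'M] prefix_of_path_of[OF m'M] by (auto simp: DF_iff)
  then have "path_of m' \<in> DF L F" using D by simp
  then obtain l'' m'' where B: "(l'', m'') \<in> F" "prefix_of m'' (path_of m')" by (auto simp: DF_iff)
  have xm: "path_of m \<in> XL L" "path_of m' \<in> XL L" using path_of_XL mM m'M by auto
  have d1: "dg m' \<le> dg m" and d2: "dg m'' \<le> dg m'"
    using A(2) B(2) by (simp_all add: prefix_of_def le_deg_path_of)
  have "initial (path_of m') (dg m') = initial (path_of m) (dg m')"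
    using initial_path_of[OF m'M] A(2) by (simp add: prefix_of_def)
  then have "initial (path_of m) (dg m'') = initial (path_of m') (dg m'')"
    using initial_agree[OF xm(1) xm(2) _ _ _ d2] d1 by (simp add: le_deg_path_of)
  then have "prefix_of m'' (path_of m)" using B(2) d1 d2 by (simp add: prefix_of_def le_deg_path_of)
  then have "(l'', m'') = (l, m)" using DF_unique_pair[OF F xm(1) B(1) lm _ prefix_of_path_of[OF mM]] by simp
  then have "dg m \<le> dg m'" using d2 by simp
  then have dd: "dg m' = dg m" by (rule antisym[OF d1])
  have "m' = initial (path_of m) (dg m')" using A(2) unfolding prefix_of_def by simp
  also have "\<dots> = m" unfolding dd using initial_path_of[OF mM] .
  finally show ?thesis using A(1) by blast
qed

lemma Psi_eq_imp_subset:
  assumes F: "F \<in> S L" and G: "G \<in> S L" and e: "Psi L F = Psi L G" and lm: "(l, m) \<in> F"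
  shows "(l, m) \<in> G"
proof -
  have P: "l \<in> M" "m \<in> M" "sc l = sc m" using S_pairD[OF F lm] by auto
  have "DF L F = DF L G" using gsrc_Psi[OF F] gsrc_Psi[OF G] e by simp
  then obtain l' where A: "(l', m) \<in> G" using DF_eq_imp_snd_mem[OF F G _ lm] by blast
  have P': "l' \<in> M" "sc l' = sc m" using S_pairD[OF G A] by auto
  have x: "path_of m \<in> XL L" and pm: "prefix_of m (path_of m)"
    using path_of_XL[OF P(2)] prefix_of_path_of[OF P(2)] .
  have xF: "path_of m \<in> DF L F" using lm x pm by (auto simp: DF_iff)
  then have "germ L F (path_of m) \<in> Psi L G" using e unfolding Psi_def by blast
  then have "locally_agree F G (path_of m)" using germ_in_Psi_iff[OF F G xF] by simp
  then have ce: "concat L l (sigma (dg m) (path_of m)) = concat L l' (sigma (dg m) (path_of m))"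
    using locally_agree_theta theta_eq[OF F lm x pm] theta_eq[OF G A x pm] by simp
  have lmx: "le_deg (dg m) (path_of m)" by (simp add: le_deg_path_of)
  have z: "sigma (dg m) (path_of m) \<in> XL L" using sigma_XL[OF x lmx] .
  have zf: "\<forall>i. fst (sigma (dg m) (path_of m)) i \<noteq> \<infinity>" unfolding sigma_fst fst_path_of by simp
  have c: "sc l = initial (sigma (dg m) (path_of m)) 0" "sc l' = initial (sigma (dg m) (path_of m)) 0"
    using initial_sigma_0[OF lmx] initial_entry(4)[OF x lmx] initial_path_of[OF P(2)] P P' by simp_all
  have "l = l'" using concat_inj[OF P(1) P'(1) z zf c ce] .
  then show ?thesis using A by simp
qed

lemma Psi_inj:
  assumes "F \<in> S L" "G \<in> S L" "Psi L F = Psi L G"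
  shows "F = G"
  using Psi_eq_imp_subset[OF assms] Psi_eq_imp_subset[OF assms(2,1) assms(3)[symmetric]] by auto

end

section \<open>Topology\<close>

lemma openin_subtopology_generated_local:
  assumes "W \<subseteq> A" "\<And>x. x \<in> W \<Longrightarrow> \<exists>T. generate_topology_on \<S> T \<and> x \<in> T \<and> T \<inter> A \<subseteq> W"
  shows "openin (subtopology (topology_generated_by \<S>) A) W"
  unfolding openin_subopen[of _ W]
proof
  fix x assume x: "x \<in> W"
  obtain T where T: "generate_topology_on \<S> T" "x \<in> T" "T \<inter> A \<subseteq> W" using assms(2)[OF x] by blast
  have "openin (subtopology (topology_generated_by \<S>) A) (T \<inter> A)"
    unfolding openin_subtopology openin_topology_generated_by_iff using T(1) by blast
  then show "\<exists>T. openin (subtopology (topology_generated_by \<S>) A) T \<and> x \<in> T \<and> T \<subseteq> W"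
    using T x assms(1) by blast
qed

context k_graph
begin

abbreviation X_subbasis where "X_subbasis \<equiv> {DF L F | F. F \<in> S L} \<union> {UNIV - DF L F | F. F \<in> S L}"
abbreviation G_subbasis where "G_subbasis \<equiv> {Psi L F | F. F \<in> S L} \<union> {UNIV - Psi L F | F. F \<in> S L}"

lemma XT_eq: "XT L = subtopology (topology_generated_by X_subbasis) (XL L)" by (simp add: XT_def)
lemma GT_eq: "GT L = subtopology (topology_generated_by G_subbasis) (Gset L)" by (simp add: GT_def)

lemma topspace_X_generated: "topspace (topology_generated_by X_subbasis) = UNIV"
proof -
  have "UNIV - DF L {} \<in> X_subbasis" using empty_in_S by blast
  moreover have "DF L {} = {}" unfolding DF_def by blast
  ultimately show ?thesis by auto
qed

lemma topspace_G_generated: "topspace (topology_generated_by G_subbasis) = UNIV"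
proof -
  have "UNIV - Psi L {} \<in> G_subbasis" using empty_in_S by blast
  moreover have "Psi L {} = {}" unfolding Psi_def DF_def by blast
  ultimately show ?thesis by auto
qed

lemma DF_subset_XL: "DF L F \<subseteq> XL L" by (auto simp: DF_iff)
lemma Psi_subset_Gset: "F \<in> S L \<Longrightarrow> Psi L F \<subseteq> Gset L" unfolding Psi_def Gset_def by blast

lemma topspace_GT: "topspace (GT L) = Gset L"
  unfolding GT_eq by (simp only: topspace_subtopology topspace_G_generated) simp

lemma topspace_XT: "topspace (XT L) = XL L"
  unfolding XT_eq by (simp only: topspace_subtopology topspace_X_generated) simp

lemma openin_GT_subbasis: "V \<in> G_subbasis \<Longrightarrow> openin (GT L) (V \<inter> Gset L)"
  unfolding GT_eq by (rule openin_subtopology_Int) (rule topology_generated_by_Basis)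

lemma openin_XT_subbasis: "V \<in> X_subbasis \<Longrightarrow> openin (XT L) (V \<inter> XL L)"
  unfolding XT_eq by (rule openin_subtopology_Int) (rule topology_generated_by_Basis)

lemma openin_Psi_subbasis:
  assumes "V \<in> G_subbasis" "F \<in> S L"
  shows "openin (subtopology (GT L) (Psi L F)) (V \<inter> Psi L F)"
  using openin_subtopology_Int[OF openin_GT_subbasis[OF assms(1)], of "Psi L F"] Psi_subset_Gset[OF assms(2)]
  by (simp add: Int_assoc Int_absorb1)

lemma subtopology_GT:
  "F \<in> S L \<Longrightarrow> subtopology (GT L) (Psi L F) = subtopology (topology_generated_by G_subbasis) (Psi L F)"
  unfolding GT_eq subtopology_subtopology using Psi_subset_Gset by (simp add: Int_absorb1)

lemma subtopology_XT: "subtopology (XT L) (DF L F) = subtopology (topology_generated_by X_subbasis) (DF L F)"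
  unfolding XT_eq subtopology_subtopology using DF_subset_XL by (simp add: Int_absorb1)

lemma mem_cylinder:
  assumes x: "x \<in> XL L" and n: "le_deg n x"
  shows "y \<in> DF L {(initial x n, initial x n)} \<longleftrightarrow> y \<in> XL L \<and> le_deg n y \<and> initial y n = initial x n"
  using initial_entry(2)[OF x n] by (auto simp: DF_iff prefix_of_def)

lemma cylinder_generated: "x \<in> XL L \<Longrightarrow> le_deg n x \<Longrightarrow> generate_topology_on X_subbasis (DF L {(initial x n, initial x n)})"
  using diag_in_S[OF initial_entry(1)] by (blast intro: generate_topology_on.Basis)

lemma locally_agree_nbhd:
  assumes g: "locally_agree F H x"
  shows "\<exists>n. le_deg n x \<and> (\<forall>y. y \<in> XL L \<and> le_deg n y \<and> initial y n = initial x n \<longrightarrow> locally_agree F H y)"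
proof -
  obtain n where n: "le_deg n x" "\<And>y. y \<in> XL L \<Longrightarrow> le_deg n y \<Longrightarrow> initial y n = initial x n \<Longrightarrow>
      y \<in> DF L F \<and> y \<in> DF L H \<and> theta L F y = theta L H y" using g unfolding locally_agree_def by blast
  show ?thesis
  proof (intro exI[of _ n] conjI allI impI)
    show "le_deg n x" using n(1) .
    fix y assume a: "y \<in> XL L \<and> le_deg n y \<and> initial y n = initial x n"
    show "locally_agree F H y" unfolding locally_agree_def
    proof (intro conjI exI[of _ n] allI impI)
      show "y \<in> DF L F" "y \<in> DF L H" using n(2) a by auto
      show "le_deg n y" using a by simp
      fix z assume "z \<in> XL L \<and> le_deg n z \<and> initial z n = initial y n"
      then show "z \<in> DF L F" "z \<in> DF L H" "theta L F z = theta L H z" using n(2) a by auto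
    qed
  qed
qed

lemma not_locally_agree_nbhd:
  assumes F: "F \<in> S L" and H: "H \<in> S L" and xF: "x \<in> DF L F" and xH: "x \<in> DF L H" and ng: "\<not> locally_agree F H x"
  shows "\<exists>n. le_deg n x \<and> (\<forall>y. y \<in> XL L \<and> le_deg n y \<and> initial y n = initial x n \<longrightarrow> \<not> locally_agree F H y)"
proof -
  have X: "x \<in> XL L" using xF by (simp add: DF_iff)
  obtain l m where lm: "(l, m) \<in> F" "prefix_of m x" using xF by (auto simp: DF_iff)
  obtain l' m' where lm2: "(l', m') \<in> H" "prefix_of m' x" using xH by (auto simp: DF_iff)
  define N where "N = sup (dg m) (dg m')"
  have lN: "le_deg N x" unfolding N_def using le_deg_sup[of "dg m" x "dg m'"] lm(2) lm2(2)
    unfolding prefix_of_def by blast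
  have N: "dg m \<le> N" "dg m' \<le> N" unfolding N_def by simp_all
  show ?thesis
  proof (intro exI[of _ N] conjI allI impI)
    show "le_deg N x" using lN .
    fix y assume a: "y \<in> XL L \<and> le_deg N y \<and> initial y N = initial x N"
    have py: "prefix_of m y" "snd y (dg m) N = snd x (dg m) N" using prefix_of_cylinder[OF X _ lm(2) N(1) lN] a by auto
    have py2: "prefix_of m' y" "snd y (dg m') N = snd x (dg m') N"
      using prefix_of_cylinder[OF X _ lm2(2) N(2) lN] a by auto
    show "\<not> locally_agree F H y"
    proof
      assume "locally_agree F H y"
      then have "l \<cdot> snd y (dg m) N = l' \<cdot> snd y (dg m') N"
        using locally_agreeD[OF F H lm(1) lm2(1) _ py(1) py2(1) N] a by blast
      then have "l \<cdot> snd x (dg m) N = l' \<cdot> snd x (dg m') N" using py(2) py2(2) by simp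
      then have "locally_agree F H x" using locally_agreeI[OF F H lm(1) lm2(1) X lm(2) lm2(2) N lN] by simp
      then show False using ng by simp
    qed
  qed
qed

lemma cylinder_separates_longer:
  assumes u: "u \<in> XL L" and v: "v \<in> XL L" and i: "fst v i < fst u i"
  shows "\<exists>\<nu>\<in>M. u \<in> DF L {(\<nu>, \<nu>)} \<and> v \<notin> DF L {(\<nu>, \<nu>)}"
proof -
  obtain k where k: "fst v i = enat k" using i by (cases "fst v i") auto
  define n where "n = (\<lambda>j. if j = i then Suc k else 0)"
  have "enat (Suc k) \<le> fst u i" using i k by (simp add: Suc_ile_eq)
  then have n: "le_deg n u" unfolding le_deg_def n_def by (auto simp: zero_enat_def[symmetric])
  have "\<not> le_deg n v" unfolding le_deg_def n_def using k by (auto intro: exI[of _ i])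
  then show ?thesis using mem_cylinder[OF u n] initial_entry(1)[OF u n] u n by blast
qed

lemma cylinder_separates:
  assumes x: "x \<in> XL L" and y: "y \<in> XL L" and xy: "x \<noteq> y"
  shows "\<exists>\<nu>\<in>M. (x \<in> DF L {(\<nu>, \<nu>)}) \<noteq> (y \<in> DF L {(\<nu>, \<nu>)})"
proof (cases "fst x = fst y")
  case True
  then obtain q where q: "le_deg q x" "initial x q \<noteq> initial y q" using path_eqI[OF x y] xy by blast
  show ?thesis
    by (rule bexI[of _ "initial x q"]) (use mem_cylinder[OF x q(1)] initial_entry(1)[OF x q(1)] x q in auto)
next
  case False
  then obtain i where "fst x i < fst y i \<or> fst y i < fst x i" by (auto simp: fun_eq_iff neq_iff)
  then show ?thesis using cylinder_separates_longer[OF x y] cylinder_separates_longer[OF y x] by blast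
qed

lemma Hausdorff_XT: "Hausdorff_space (XT L)"
  unfolding Hausdorff_space_def topspace_XT
proof (intro allI impI)
  fix x y assume xy: "x \<in> XL L \<and> y \<in> XL L \<and> x \<noteq> y"
  then obtain \<nu> where \<nu>: "\<nu> \<in> M" and sep: "(x \<in> DF L {(\<nu>, \<nu>)}) \<noteq> (y \<in> DF L {(\<nu>, \<nu>)})"
    using cylinder_separates by blast
  define Z where "Z = DF L {(\<nu>, \<nu>)}"
  have "openin (XT L) (Z \<inter> XL L)" "openin (XT L) ((UNIV - Z) \<inter> XL L)"
    unfolding Z_def by (rule openin_XT_subbasis, use diag_in_S[OF \<nu>] in blast)+
  moreover have "disjnt (Z \<inter> XL L) ((UNIV - Z) \<inter> XL L)" by (auto simp: disjnt_def)
  ultimately show "\<exists>U V. openin (XT L) U \<and> openin (XT L) V \<and> x \<in> U \<and> y \<in> V \<and> disjnt U V"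
    using xy sep unfolding Z_def[symmetric] by (cases "x \<in> Z") (blast intro: disjnt_sym)+
qed

lemma inj_on_gsrc_Psi: "F \<in> S L \<Longrightarrow> inj_on gsrc (Psi L F)"
  unfolding Psi_def inj_on_def using gsrc_germ by auto

lemma gsrc_Psi_Int:
  assumes F: "F \<in> S L" and H: "H \<in> S L"
  shows "gsrc ` (Psi L H \<inter> Psi L F) = {x \<in> DF L F. locally_agree F H x}"
proof (intro equalityI subsetI)
  fix x assume "x \<in> gsrc ` (Psi L H \<inter> Psi L F)"
  then obtain a where a: "a \<in> Psi L H" "a \<in> Psi L F" "x = gsrc a" by blast
  then obtain y where y0: "y \<in> DF L F" "a = germ L F y" unfolding Psi_def by blast
  then have y: "y \<in> DF L F" "germ L F y \<in> Psi L H" "x = gsrc (germ L F y)" using a by auto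
  then show "x \<in> {x \<in> DF L F. locally_agree F H x}" using germ_in_Psi_iff[OF F H y(1)] gsrc_germ[OF F y(1)] by simp
next
  fix x assume "x \<in> {x \<in> DF L F. locally_agree F H x}"
  then have x: "x \<in> DF L F" "locally_agree F H x" by auto
  then have "germ L F x \<in> Psi L H \<inter> Psi L F" using germ_in_Psi_iff[OF F H x(1)] unfolding Psi_def by blast
  then show "x \<in> gsrc ` (Psi L H \<inter> Psi L F)" using gsrc_germ[OF F x(1)] by force
qed

lemma gsrc_Psi_diff:
  assumes F: "F \<in> S L" and H: "H \<in> S L"
  shows "gsrc ` ((UNIV - Psi L H) \<inter> Psi L F) = {x \<in> DF L F. \<not> locally_agree F H x}"
proof (intro equalityI subsetI)
  fix x assume "x \<in> gsrc ` ((UNIV - Psi L H) \<inter> Psi L F)"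
  then obtain a where a: "a \<notin> Psi L H" "a \<in> Psi L F" "x = gsrc a" by blast
  then obtain y where y0: "y \<in> DF L F" "a = germ L F y" unfolding Psi_def by blast
  then have y: "y \<in> DF L F" "germ L F y \<notin> Psi L H" "x = gsrc (germ L F y)" using a by auto
  then show "x \<in> {x \<in> DF L F. \<not> locally_agree F H x}" using germ_in_Psi_iff[OF F H y(1)] gsrc_germ[OF F y(1)] by simp
next
  fix x assume "x \<in> {x \<in> DF L F. \<not> locally_agree F H x}"
  then have x: "x \<in> DF L F" "\<not> locally_agree F H x" by auto
  then have "germ L F x \<in> (UNIV - Psi L H) \<inter> Psi L F" using germ_in_Psi_iff[OF F H x(1)] unfolding Psi_def by blast
  then show "x \<in> gsrc ` ((UNIV - Psi L H) \<inter> Psi L F)" using gsrc_germ[OF F x(1)] by force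
qed

lemma Sprod_restriction:
  assumes fa: "finitely_aligned L" and F: "F \<in> S L" and H: "H \<in> S L"
  defines "K \<equiv> Sprod L F (Sprod L (Sstar H) H)"
  shows "K \<in> S L" "x \<in> DF L K \<longleftrightarrow> x \<in> DF L F \<and> x \<in> DF L H"
    "x \<in> DF L K \<Longrightarrow> theta L K x = theta L F x"
proof -
  define E where "E = Sprod L (Sstar H) H"
  have HS: "Sstar H \<in> S L" using Sstar_in_S[OF H] .
  have ES: "E \<in> S L" unfolding E_def using Sprod_in_S[OF fa HS H] .
  have DE: "y \<in> DF L E \<longleftrightarrow> y \<in> DF L H" for y
    unfolding E_def using DF_Sprod[OF fa HS H] theta_in_DF_Sstar[OF H] by blast
  have tE: "y \<in> DF L E \<Longrightarrow> theta L E y = y" for y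
    unfolding E_def using theta_Sprod[OF fa HS H] theta_Sstar_theta[OF H] DE unfolding E_def by simp
  show "K \<in> S L" unfolding K_def E_def[symmetric] using Sprod_in_S[OF fa F ES] .
  show DK: "x \<in> DF L K \<longleftrightarrow> x \<in> DF L F \<and> x \<in> DF L H"
    unfolding K_def E_def[symmetric] DF_Sprod[OF fa F ES] using DE[of x] tE[of x] by auto
  show "x \<in> DF L K \<Longrightarrow> theta L K x = theta L F x"
    unfolding K_def E_def[symmetric] using theta_Sprod[OF fa F ES, of x] DF_Sprod[OF fa F ES, of x] DE[of x] tE[of x]
    by auto
qed

lemma DF_cylinder:
  assumes "x \<in> DF L F"
  obtains n where "le_deg n x" "\<And>y. y \<in> XL L \<Longrightarrow> le_deg n y \<Longrightarrow> initial y n = initial x n \<Longrightarrow> y \<in> DF L F"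
proof -
  obtain l m where "(l, m) \<in> F" "prefix_of m x" using assms by (auto simp: DF_iff)
  then show thesis using that[of "dg m"] by (auto simp: DF_iff prefix_of_def)
qed

lemma cylinder_mono:
  assumes "x \<in> XL L" "y \<in> XL L" "le_deg N x" "le_deg N y" "initial y N = initial x N" "n \<le> N"
  shows "le_deg n y" "initial y n = initial x n"
  using assms le_deg_mono initial_agree by blast+

lemma Psi_restriction:
  assumes fa: "finitely_aligned L" and F: "F \<in> S L" and H: "H \<in> S L"
  shows "\<exists>K\<in>S L. \<forall>x\<in>DF L F. (germ L F x \<in> Psi L K \<longleftrightarrow> x \<in> DF L H)"
proof -
  define K where "K = Sprod L F (Sprod L (Sstar H) H)"
  note K = Sprod_restriction[OF fa F H, folded K_def]
  have "germ L F x \<in> Psi L K \<longleftrightarrow> x \<in> DF L H" if xF: "x \<in> DF L F" for x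
  proof
    assume "germ L F x \<in> Psi L K"
    then show "x \<in> DF L H" using germ_in_Psi_iff[OF F K(1) xF] locally_agree_DF K(2) by blast
  next
    assume xH: "x \<in> DF L H"
    obtain n1 where n1: "le_deg n1 x" "\<And>y. y \<in> XL L \<Longrightarrow> le_deg n1 y \<Longrightarrow> initial y n1 = initial x n1 \<Longrightarrow> y \<in> DF L F"
      using DF_cylinder[OF xF] by blast
    obtain n2 where n2: "le_deg n2 x" "\<And>y. y \<in> XL L \<Longrightarrow> le_deg n2 y \<Longrightarrow> initial y n2 = initial x n2 \<Longrightarrow> y \<in> DF L H"
      using DF_cylinder[OF xH] by blast
    have x: "x \<in> XL L" using xF by (simp add: DF_iff)
    have "locally_agree F K x" unfolding locally_agree_def
    proof (intro conjI exI[of _ "sup n1 n2"] allI impI)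
      show "x \<in> DF L F" "x \<in> DF L K" "le_deg (sup n1 n2) x" using xF xH K(2) le_deg_sup[OF n1(1) n2(1)] by auto
      fix y assume y: "y \<in> XL L \<and> le_deg (sup n1 n2) y \<and> initial y (sup n1 n2) = initial x (sup n1 n2)"
      have "y \<in> DF L F" "y \<in> DF L H"
        using n1(2) n2(2) cylinder_mono[OF x _ le_deg_sup[OF n1(1) n2(1)]] y by auto
      then show "y \<in> DF L F" "y \<in> DF L K" "theta L F y = theta L K y" using K(2,3) by auto
    qed
    then show "germ L F x \<in> Psi L K" using germ_in_Psi_iff[OF F K(1) xF] by simp
  qed
  then show ?thesis using K(1) by blast
qed

lemma continuous_map_gsrc:
  assumes fa: "finitely_aligned L" and F: "F \<in> S L"
  shows "continuous_map (subtopology (GT L) (Psi L F)) (subtopology (XT L) (DF L F)) gsrc"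
proof -
  have top: "topspace (subtopology (GT L) (Psi L F)) = Psi L F"
    using Psi_subset_Gset[OF F] by (simp add: topspace_GT Int_absorb1)
  have preimage: "openin (subtopology (GT L) (Psi L F)) (gsrc -` U \<inter> Psi L F)" if "U \<in> X_subbasis" for U
  proof -
    obtain H where H: "H \<in> S L" "U = DF L H \<or> U = UNIV - DF L H" using \<open>U \<in> X_subbasis\<close> by blast
    obtain K where K: "K \<in> S L" "\<forall>x\<in>DF L F. germ L F x \<in> Psi L K \<longleftrightarrow> x \<in> DF L H"
      using Psi_restriction[OF fa F H(1)] by blast
    have "a \<in> Psi L K \<longleftrightarrow> gsrc a \<in> DF L H" if a: "a \<in> Psi L F" for a
    proof -
      obtain x where x: "x \<in> DF L F" "a = germ L F x" using a unfolding Psi_def by blast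
      then show ?thesis using K(2) gsrc_germ[OF F x(1)] by simp
    qed
    then have eq: "gsrc -` DF L H \<inter> Psi L F = Psi L K \<inter> Psi L F"
      "gsrc -` (UNIV - DF L H) \<inter> Psi L F = (UNIV - Psi L K) \<inter> Psi L F" by blast+
    have "openin (subtopology (GT L) (Psi L F)) (Psi L K \<inter> Psi L F)"
      "openin (subtopology (GT L) (Psi L F)) ((UNIV - Psi L K) \<inter> Psi L F)"
      by (rule openin_Psi_subbasis[OF _ F], use K(1) in blast)+
    then show ?thesis using H(2) eq by auto
  qed
  have "continuous_map (subtopology (GT L) (Psi L F)) (topology_generated_by X_subbasis) gsrc"
  proof (rule continuous_on_generated_topo)
    show "openin (subtopology (GT L) (Psi L F)) (gsrc -` U \<inter> topspace (subtopology (GT L) (Psi L F)))"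
      if "U \<in> X_subbasis" for U
      unfolding top using preimage[OF that] .
    show "gsrc ` topspace (subtopology (GT L) (Psi L F)) \<subseteq> \<Union>X_subbasis"
      using topspace_X_generated by simp
  qed
  then show ?thesis
    unfolding subtopology_XT continuous_map_in_subtopology top using gsrc_Psi[OF F] by blast
qed

lemma open_locally_agree:
  "openin (subtopology (topology_generated_by X_subbasis) (DF L F)) {x \<in> DF L F. locally_agree F H x}"
proof (rule openin_subtopology_generated_local)
  fix x assume x: "x \<in> {x \<in> DF L F. locally_agree F H x}"
  then have X: "x \<in> XL L" by (simp add: DF_iff)
  obtain n where n: "le_deg n x" "\<forall>y. y \<in> XL L \<and> le_deg n y \<and> initial y n = initial x n \<longrightarrow> locally_agree F H y"
    using locally_agree_nbhd[of F H x] x by blast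
  show "\<exists>T. generate_topology_on X_subbasis T \<and> x \<in> T \<and> T \<inter> DF L F \<subseteq> {x \<in> DF L F. locally_agree F H x}"
    using cylinder_generated[OF X n(1)] mem_cylinder[OF X n(1)] n(2) X n(1) by blast
qed blast

lemma open_not_locally_agree:
  assumes F: "F \<in> S L" and H: "H \<in> S L"
  shows "openin (subtopology (topology_generated_by X_subbasis) (DF L F)) {x \<in> DF L F. \<not> locally_agree F H x}"
proof (rule openin_subtopology_generated_local)
  fix x assume x: "x \<in> {x \<in> DF L F. \<not> locally_agree F H x}"
  then have X: "x \<in> XL L" and xF: "x \<in> DF L F" and ng: "\<not> locally_agree F H x" by (auto simp: DF_iff)
  show "\<exists>T. generate_topology_on X_subbasis T \<and> x \<in> T \<and> T \<inter> DF L F \<subseteq> {x \<in> DF L F. \<not> locally_agree F H x}"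
  proof (cases "x \<in> DF L H")
    case True
    obtain n where n: "le_deg n x" "\<forall>y. y \<in> XL L \<and> le_deg n y \<and> initial y n = initial x n \<longrightarrow> \<not> locally_agree F H y"
      using not_locally_agree_nbhd[OF F H xF True ng] by blast
    show ?thesis using cylinder_generated[OF X n(1)] mem_cylinder[OF X n(1)] n(2) X n(1) by blast
  next
    case False
    have "generate_topology_on X_subbasis (UNIV - DF L H)" using H by (blast intro: generate_topology_on.Basis)
    moreover have "(UNIV - DF L H) \<inter> DF L F \<subseteq> {x \<in> DF L F. \<not> locally_agree F H x}" using locally_agree_DF by blast
    ultimately show ?thesis using False by blast
  qed
qed blast

lemma gsrc_image_open:
  assumes F: "F \<in> S L" and V: "generate_topology_on G_subbasis V"
  shows "openin (subtopology (topology_generated_by X_subbasis) (DF L F)) (gsrc ` (V \<inter> Psi L F))"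
  using V
proof (induction rule: generate_topology_on.induct)
  case Empty
  then show ?case by simp
next
  case (Int a b)
  have "gsrc ` (a \<inter> b \<inter> Psi L F) = gsrc ` (a \<inter> Psi L F) \<inter> gsrc ` (b \<inter> Psi L F)"
    using inj_on_image_Int[OF inj_on_gsrc_Psi[OF F], of "a \<inter> Psi L F" "b \<inter> Psi L F"]
    by (simp add: Int_assoc Int_left_commute Int_commute)
  then show ?case using Int by auto
next
  case (UN K)
  have "gsrc ` (\<Union>K \<inter> Psi L F) = \<Union>((\<lambda>k. gsrc ` (k \<inter> Psi L F)) ` K)" by blast
  then show ?case using UN by auto
next
  case (Basis s)
  then obtain H where H: "H \<in> S L" "s = Psi L H \<or> s = UNIV - Psi L H" by blast
  then show ?case
    using open_locally_agree open_not_locally_agree[OF F H(1)] gsrc_Psi_Int[OF F H(1)] gsrc_Psi_diff[OF F H(1)]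
    by auto
qed

lemma gsrc_homeomorphic:
  assumes fa: "finitely_aligned L" and F: "F \<in> S L"
  shows "homeomorphic_map (subtopology (GT L) (Psi L F)) (subtopology (XT L) (DF L F)) gsrc"
proof (rule bijective_open_imp_homeomorphic_map[OF continuous_map_gsrc[OF fa F]])
  have top: "topspace (subtopology (GT L) (Psi L F)) = Psi L F"
    "topspace (subtopology (XT L) (DF L F)) = DF L F"
    using Psi_subset_Gset[OF F] DF_subset_XL by (simp_all add: topspace_GT topspace_XT Int_absorb1)
  show "open_map (subtopology (GT L) (Psi L F)) (subtopology (XT L) (DF L F)) gsrc"
    unfolding open_map_def subtopology_GT[OF F] subtopology_XT
  proof (intro allI impI)
    fix U assume "openin (subtopology (topology_generated_by G_subbasis) (Psi L F)) U"
    then obtain V where V: "generate_topology_on G_subbasis V" "U = V \<inter> Psi L F"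
      unfolding openin_subtopology openin_topology_generated_by_iff by blast
    show "openin (subtopology (topology_generated_by X_subbasis) (DF L F)) (gsrc ` U)"
      unfolding V(2) using gsrc_image_open[OF F V(1)] .
  qed
  show "gsrc ` topspace (subtopology (GT L) (Psi L F)) = topspace (subtopology (XT L) (DF L F))"
    unfolding top using gsrc_Psi[OF F] .
  show "inj_on gsrc (topspace (subtopology (GT L) (Psi L F)))"
    unfolding top using inj_on_gsrc_Psi[OF F] .
qed

lemma ginv_Gset: "a \<in> Gset L \<Longrightarrow> ginv L a \<in> Gset L"
proof -
  assume "a \<in> Gset L"
  then obtain F x where F: "F \<in> S L" "x \<in> DF L F" "a = germ L F x" using GsetE by blast
  then show ?thesis using ginv_germ[OF F(1,2)] Sstar_in_S[OF F(1)] theta_in_DF_Sstar[OF F(1,2)]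
    unfolding Gset_def by blast
qed

lemma ginv_ginv: "a \<in> Gset L \<Longrightarrow> ginv L (ginv L a) = a"
proof -
  assume "a \<in> Gset L"
  then obtain F x where F: "F \<in> S L" "x \<in> DF L F" "a = germ L F x" using GsetE by blast
  have "ginv L (ginv L a) = ginv L (germ L (Sstar F) (theta L F x))" using ginv_germ[OF F(1,2)] F(3) by simp
  also have "\<dots> = germ L (Sstar (Sstar F)) (theta L (Sstar F) (theta L F x))"
    using ginv_germ[OF Sstar_in_S[OF F(1)] theta_in_DF_Sstar[OF F(1,2)]] .
  also have "\<dots> = a" using theta_Sstar_theta[OF F(1,2)] F(3) by simp
  finally show ?thesis .
qed

lemma ginv_in_Psi_iff:
  assumes H: "H \<in> S L" and a: "a \<in> Gset L"
  shows "ginv L a \<in> Psi L H \<longleftrightarrow> a \<in> Psi L (Sstar H)"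
proof
  assume "ginv L a \<in> Psi L H"
  then have "ginv L (ginv L a) \<in> Opinv L (Psi L H)" unfolding Opinv_def by blast
  then show "a \<in> Psi L (Sstar H)" using ginv_ginv[OF a] Psi_Sstar[OF H] by simp
next
  assume "a \<in> Psi L (Sstar H)"
  then obtain b where b: "b \<in> Psi L H" "a = ginv L b" using Psi_Sstar[OF H] unfolding Opinv_def by blast
  then show "ginv L a \<in> Psi L H" using ginv_ginv Psi_subset_Gset[OF H] by auto
qed

lemma continuous_map_ginv: "continuous_map (GT L) (GT L) (ginv L)"
proof -
  have preimage: "openin (GT L) (ginv L -` V \<inter> Gset L)" if "V \<in> G_subbasis" for V
  proof -
    obtain H where H: "H \<in> S L" "V = Psi L H \<or> V = UNIV - Psi L H" using \<open>V \<in> G_subbasis\<close> by blast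
    have eq: "ginv L -` Psi L H \<inter> Gset L = Psi L (Sstar H) \<inter> Gset L"
      "ginv L -` (UNIV - Psi L H) \<inter> Gset L = (UNIV - Psi L (Sstar H)) \<inter> Gset L"
      using ginv_in_Psi_iff[OF H(1)] by blast+
    have "openin (GT L) (Psi L (Sstar H) \<inter> Gset L)" "openin (GT L) ((UNIV - Psi L (Sstar H)) \<inter> Gset L)"
      by (rule openin_GT_subbasis, use Sstar_in_S[OF H(1)] in blast)+
    then show ?thesis using H(2) eq by auto
  qed
  have "continuous_map (GT L) (topology_generated_by G_subbasis) (ginv L)"
  proof (rule continuous_on_generated_topo)
    show "openin (GT L) (ginv L -` V \<inter> topspace (GT L))" if "V \<in> G_subbasis" for V
      unfolding topspace_GT using preimage[OF that] .
    show "ginv L ` topspace (GT L) \<subseteq> \<Union>G_subbasis"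
      using topspace_G_generated by simp
  qed
  then have "continuous_map (GT L) (subtopology (topology_generated_by G_subbasis) (Gset L)) (ginv L)"
    using ginv_Gset by (simp add: continuous_map_in_subtopology topspace_GT)
  then show ?thesis by (simp add: GT_eq[symmetric])
qed

lemma ginv_homeomorphic: "homeomorphic_map (GT L) (GT L) (ginv L)"
  unfolding homeomorphic_map_maps homeomorphic_maps_def
  using continuous_map_ginv ginv_ginv topspace_GT by auto

lemma gran_homeomorphic:
  assumes fa: "finitely_aligned L" and F: "F \<in> S L"
  shows "homeomorphic_map (subtopology (GT L) (Psi L F)) (subtopology (XT L) (DF L (Sstar F))) (gran L)"
proof -
  have SF: "Sstar F \<in> S L" using Sstar_in_S[OF F] .
  have img: "ginv L ` (topspace (GT L) \<inter> Psi L F) = topspace (GT L) \<inter> Psi L (Sstar F)"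
    unfolding topspace_GT using Psi_Sstar[OF F] Psi_subset_Gset[OF F] Psi_subset_Gset[OF SF] unfolding Opinv_def by auto
  have h1: "homeomorphic_map (subtopology (GT L) (Psi L F)) (subtopology (GT L) (Psi L (Sstar F))) (ginv L)"
    using homeomorphic_map_subtopologies[OF ginv_homeomorphic img] .
  have h2: "homeomorphic_map (subtopology (GT L) (Psi L (Sstar F))) (subtopology (XT L) (DF L (Sstar F))) gsrc"
    using gsrc_homeomorphic[OF fa SF] .
  have h: "homeomorphic_map (subtopology (GT L) (Psi L F)) (subtopology (XT L) (DF L (Sstar F))) (gsrc \<circ> ginv L)"
    using homeomorphic_map_compose[OF h1 h2] .
  show ?thesis
  proof (rule homeomorphic_map_eq[OF h])
    fix a assume "a \<in> topspace (subtopology (GT L) (Psi L F))"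
    then have "a \<in> Psi L F" by simp
    then obtain x where x: "x \<in> DF L F" "a = germ L F x" unfolding Psi_def by blast
    show "(gsrc \<circ> ginv L) a = gran L a"
      using ginv_germ[OF F x(1)] gsrc_germ[OF SF theta_in_DF_Sstar[OF F x(1)]] gran_germ[OF F x(1)] x(2) by simp
  qed
qed

lemma gran_Psi:
  assumes F: "F \<in> S L" shows "gran L ` Psi L F = DF L (Sstar F)"
proof (intro equalityI subsetI)
  fix y assume "y \<in> gran L ` Psi L F"
  then obtain x where x: "x \<in> DF L F" "y = gran L (germ L F x)" unfolding Psi_def by blast
  then show "y \<in> DF L (Sstar F)" using gran_germ[OF F x(1)] theta_in_DF_Sstar[OF F x(1)] by simp
next
  fix y assume y: "y \<in> DF L (Sstar F)"
  have SF: "Sstar F \<in> S L" using Sstar_in_S[OF F] .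
  have x: "theta L (Sstar F) y \<in> DF L F" using theta_in_DF_Sstar[OF SF y] by simp
  have "gran L (germ L F (theta L (Sstar F) y)) = y" using gran_germ[OF F x] theta_Sstar_theta[OF SF y] by simp
  moreover have "germ L F (theta L (Sstar F) y) \<in> Psi L F" unfolding Psi_def using x by blast
  ultimately show "y \<in> gran L ` Psi L F" by (metis image_eqI)
qed

lemma Psi_in_Gop:
  assumes fa: "finitely_aligned L" and F: "F \<in> S L"
  shows "Psi L F \<in> Gop L"
proof -
  have sub: "Psi L F \<subseteq> Gset L" using Psi_subset_Gset[OF F] .
  have op: "openin (GT L) (Psi L F)"
    unfolding GT_eq openin_subtopology openin_topology_generated_by_iff
    using F sub by (intro exI[of _ "Psi L F"]) (auto intro: generate_topology_on.Basis)
  have h1: "homeomorphic_map (subtopology (GT L) (Psi L F)) (subtopology (XT L) (gsrc ` Psi L F)) gsrc"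
    using gsrc_homeomorphic[OF fa F] gsrc_Psi[OF F] by simp
  have h2: "homeomorphic_map (subtopology (GT L) (Psi L F)) (subtopology (XT L) (gran L ` Psi L F)) (gran L)"
    using gran_homeomorphic[OF fa F] gran_Psi[OF F] by simp
  have "Hausdorff_space (subtopology (XT L) (DF L F))" using Hausdorff_space_subtopology[OF Hausdorff_XT] .
  then have hd: "Hausdorff_space (subtopology (GT L) (Psi L F))"
    using homeomorphic_Hausdorff_space[OF homeomorphic_map_imp_homeomorphic_space[OF gsrc_homeomorphic[OF fa F]]]
    by simp
  show ?thesis unfolding Gop_def using sub op hd h1 h2 by blast
qed

end

theorem proposition6p7:
  fixes L :: "('a, 'k::finite) kgraph"
  assumes "is_kgraph L" and "finitely_aligned L"
  shows "(\<forall>F\<in>S L. Psi L F \<in> Gop L) \<and>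
         inj_on (Psi L) (S L) \<and>
         (\<forall>F\<in>S L. \<forall>G\<in>S L. Psi L (Sprod L F G) = Opmul L (Psi L F) (Psi L G)) \<and>
         (\<forall>F\<in>S L. Psi L (Sstar F) = Opinv L (Psi L F))"
proof -
  interpret k_graph L using assms(1) by (rule k_graph.intro)
  show ?thesis
    using Psi_in_Gop[OF assms(2)] Psi_inj Psi_Sprod[OF assms(2)] Psi_Sstar
    unfolding inj_on_def by blast
qed

end
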